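(* Let $\mathcal{C}$ be an abelian braided monoidal category with unit object $I$ and braiding $\psi$, not necessarily symmetric. Let $H$ be a Hopf algebra in $\mathcal{C}$ (multiplication $m$, unit $\eta$, comultiplication $\Delta$, counit $\varepsilon$, antipode $S$) such that $\psi_{H, H}\psi_{H, H}=\mathrm{id}_{H\otimes H}$, and let $(\delta,\sigma)$ be a braided modular pair in involution for $H$. Define $C^0(H)=I$ and $C^n(H)=H^{\otimes n}$ for $n\ge1$, and morphisms \[\delta_i=\begin{cases}\eta\otimes 1_H\otimes\cdots\otimes 1_H, & i=0,\\ 1_H\otimes\cdots\otimes 1_H\otimes\underset{i\text{-th}}{\Delta}\otimes 1_H\otimes\cdots\otimes 1_H, & 1\le i\le n-1,\\ 1_H\otimes\cdots\otimes 1_H\otimes\sigma, & i=n,\end{cases}\qquad (\delta_i: C^{n-1}(H)\to C^n(H)),\] \[\sigma_i=1_H\otimes\cdots\otimes 1_H\otimes\underset{(i+1)\text{-th}}{\varepsilon}\otimes 1_H\otimes\cdots\otimes 1_H,\quad 0\le i\le n\qquad (\sigma_i:C^{n+1}(H)\to C^n(H)),\] \[\tau_0=\mathrm{id}_I,\qquad \tau_n=m_n\circ\big(\Delta^{n-1}\widetilde{S}\otimes 1_{H^{\otimes(n-1)}}\otimes\sigma\big)\ (n\ge1),\] where $m_1=m$ and, for $n\ge2$, $m_n=(m\otimes m\otimes\cdots\otimes m)\circ\mathcal{F}_n(\psi): H^{\otimes 2n}\to H^{\otimes n}$ ($n$ copies of $m$) with $\mathcal{F}_n(\psi)=f_1\circ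 f_2\circ\cdots\circ f_{n-1}$, $f_j=1_{H^{\otimes j}}\otimes\underbrace{\psi_{H,H}\otimes\cdots\otimes\psi_{H,H}}_{n-j}\otimes 1_{H^{\otimes j}}$. Then $(C^\bullet(H),\delta_i,\sigma_i,\tau_n)$ is a cocyclic object in $\mathcal{C}$.
   Context: A Hopf algebra $H$ in a braided monoidal category $\mathcal{C}$ is an object with morphisms $m,\eta,\Delta,\varepsilon,S$ making it an algebra and a coalgebra, with $\Delta,\varepsilon$ algebra morphisms for the braided tensor product algebra (i.e. $\Delta m=(m\otimes m)(1_H\otimes\psi_{H,H}\otimes 1_H)(\Delta\otimes\Delta)$), and with $m(S\otimes 1)\Delta=m(1\otimes S)\Delta=\eta\varepsilon$. $\Delta^{k}: H\to H^{\otimes(k+1)}$ denotes the iterated coproduct ($\Delta^0=1_H$, $\Delta^{k}=(\Delta\otimes 1_{H^{\otimes(k-1)}})\Delta^{k-1}$). A braided modular pair in involution (BMPI) $(\delta,\sigma)$ for $H$ consists of a character $\delta:H\to I$ (an algebra morphism) and a group-like element $\sigma:I\to H$ (a coalgebra morphism, i.e. $\Delta\sigma=\sigma\otimes\sigma$, $\varepsilon\sigma=\mathrm{id}_I$) with $\delta\sigma=\mathrm{id}_I$, such that the twisted antipode $\widetilde{S}=(\delta\otimes S)\Delta:H\to H$ satisfies $\widetilde{S}^2=m(m\otimes 1_H)(\sigma\otimes 1_H\otimes S\sigma)$, i.e. $\widetilde S^2(h)=\sigma h\sigma^{-1}$. A cocyclic object is a cosimplicial object (cofaces $\delta_i$,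 codegeneracies $\sigma_i$ satisfying the cosimplicial identities) together with morphisms $\tau_n$ satisfying $\tau_n\delta_i=\delta_{i-1}\tau_{n-1}$ for $1\le i\le n$, $\tau_n\delta_0=\delta_n$, $\tau_n\sigma_i=\sigma_{i-1}\tau_{n+1}$ for $1\le i\le n$, $\tau_n\sigma_0=\sigma_n\tau_{n+1}^2$, and $\tau_n^{n+1}=\mathrm{id}$. *)

theory Defs
  imports Main
begin

text \<open>Every element of 'm is a morphism with domain Dom f and codomain Cod f.
  Comp C g f is the composite g after f (only meaningful when Cod f = Dom g).\<close>

record ('o, 'm) bmcat =
  Dom   :: "'m \<Rightarrow> 'o"
  Cod   :: "'m \<Rightarrow> 'o"
  Comp  :: "'m \<Rightarrow> 'm \<Rightarrow> 'm"
  Id    :: "'o \<Rightarrow> 'm"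
  TObj  :: "'o \<Rightarrow> 'o \<Rightarrow> 'o"
  Unit  :: "'o"
  TMor  :: "'m \<Rightarrow> 'm \<Rightarrow> 'm"
  Braid :: "'o \<Rightarrow> 'o \<Rightarrow> 'm"

locale strict_braided_monoidal_cat =
  fixes C :: "('o, 'm) bmcat"
  assumes comp_dom: "Cod C f = Dom C g \<Longrightarrow> Dom C (Comp C g f) = Dom C f"
    and comp_cod: "Cod C f = Dom C g \<Longrightarrow> Cod C (Comp C g f) = Cod C g"
    and comp_assoc: "\<lbrakk>Cod C f = Dom C g; Cod C g = Dom C h\<rbrakk> \<Longrightarrow>
                        Comp C h (Comp C g f) = Comp C (Comp C h g) f"
    and id_dom: "Dom C (Id C A) = A"
    and id_cod: "Cod C (Id C A) = A"
    and comp_id_right: "Comp C f (Id C (Dom C f)) = f"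
    and comp_id_left: "Comp C (Id C (Cod C f)) f = f"
    and tobj_assoc: "TObj C (TObj C A B) D = TObj C A (TObj C B D)"
    and tobj_unit_left: "TObj C (Unit C) A = A"
    and tobj_unit_right: "TObj C A (Unit C) = A"
    and tmor_dom: "Dom C (TMor C f g) = TObj C (Dom C f) (Dom C g)"
    and tmor_cod: "Cod C (TMor C f g) = TObj C (Cod C f) (Cod C g)"
    and tmor_id: "TMor C (Id C A) (Id C B) = Id C (TObj C A B)"
    and tmor_interchange: "\<lbrakk>Cod C f = Dom C g; Cod C f' = Dom C g'\<rbrakk> \<Longrightarrow>
          Comp C (TMor C g g') (TMor C f f') = TMor C (Comp C g f) (Comp C g' f')"
    and tmor_assoc: "TMor C (TMor C f g) h = TMor C f (TMor C g h)"
    and tmor_unit_left: "TMor C (Id C (Unit C)) f = f"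
    and tmor_unit_right: "TMor C f (Id C (Unit C)) = f"
    and braid_dom: "Dom C (Braid C A B) = TObj C A B"
    and braid_cod: "Cod C (Braid C A B) = TObj C B A"
    and braid_natural: "Comp C (Braid C (Cod C f) (Cod C g)) (TMor C f g)
                        = Comp C (TMor C g f) (Braid C (Dom C f) (Dom C g))"
    and braid_invertible: "\<exists>g. Dom C g = TObj C B A \<and> Cod C g = TObj C A B \<and>
                        Comp C g (Braid C A B) = Id C (TObj C A B) \<and>
                        Comp C (Braid C A B) g = Id C (TObj C B A)"
    and braid_hexagon1: "Braid C (TObj C A B) D
          = Comp C (TMor C (Braid C A D) (Id C B)) (TMor C (Id C A) (Braid C B D))"
    and braid_hexagon2: "Braid C A (TObj C B D)
          = Comp C (TMor C (Id C B) (Braid C A D)) (TMor C (Braid C A B) (Id C D))"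

primrec tpow :: "('o, 'm, 'x) bmcat_scheme \<Rightarrow> 'o \<Rightarrow> nat \<Rightarrow> 'o" where
  "tpow C A 0 = Unit C"
| "tpow C A (Suc n) = TObj C A (tpow C A n)"

primrec tpowm :: "('o, 'm, 'x) bmcat_scheme \<Rightarrow> 'm \<Rightarrow> nat \<Rightarrow> 'm" where
  "tpowm C f 0 = Id C (Unit C)"
| "tpowm C f (Suc n) = TMor C f (tpowm C f n)"

definition idp :: "('o, 'm, 'x) bmcat_scheme \<Rightarrow> 'o \<Rightarrow> nat \<Rightarrow> 'm" where
  "idp C A n = Id C (tpow C A n)"

primrec comps :: "('o, 'm, 'x) bmcat_scheme \<Rightarrow> 'o \<Rightarrow> 'm list \<Rightarrow> 'm" where
  "comps C A [] = Id C A"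
| "comps C A (g # gs) = Comp C g (comps C A gs)"

primrec cpow :: "('o, 'm, 'x) bmcat_scheme \<Rightarrow> 'o \<Rightarrow> 'm \<Rightarrow> nat \<Rightarrow> 'm" where
  "cpow C A f 0 = Id C A"
| "cpow C A f (Suc n) = Comp C f (cpow C A f n)"

primrec iter_comult :: "('o, 'm, 'x) bmcat_scheme \<Rightarrow> 'o \<Rightarrow> 'm \<Rightarrow> nat \<Rightarrow> 'm" where
  "iter_comult C H Dl 0 = Id C H"
| "iter_comult C H Dl (Suc k) = Comp C (TMor C Dl (idp C H k)) (iter_comult C H Dl k)"

definition hopf_algebra ::
  "('o, 'm, 'x) bmcat_scheme \<Rightarrow> 'o \<Rightarrow> 'm \<Rightarrow> 'm \<Rightarrow> 'm \<Rightarrow> 'm \<Rightarrow> 'm \<Rightarrow> bool" where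
  "hopf_algebra C H m eta Dl eps S \<longleftrightarrow>
     Dom C m = TObj C H H \<and> Cod C m = H \<and>
     Dom C eta = Unit C \<and> Cod C eta = H \<and>
     Dom C Dl = H \<and> Cod C Dl = TObj C H H \<and>
     Dom C eps = H \<and> Cod C eps = Unit C \<and>
     Dom C S = H \<and> Cod C S = H \<and>
     \<comment> \<open>algebra\<close>
     Comp C m (TMor C m (Id C H)) = Comp C m (TMor C (Id C H) m) \<and>
     Comp C m (TMor C eta (Id C H)) = Id C H \<and>
     Comp C m (TMor C (Id C H) eta) = Id C H \<and>
     \<comment> \<open>coalgebra\<close>
     Comp C (TMor C Dl (Id C H)) Dl = Comp C (TMor C (Id C H) Dl) Dl \<and>
     Comp C (TMor C eps (Id C H)) Dl = Id C H \<and>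
     Comp C (TMor C (Id C H) eps) Dl = Id C H \<and>
     \<comment> \<open>Delta and eps are algebra morphisms (braided tensor product algebra)\<close>
     Comp C Dl m = Comp C (TMor C m m)
        (Comp C (TMor C (Id C H) (TMor C (Braid C H H) (Id C H))) (TMor C Dl Dl)) \<and>
     Comp C Dl eta = TMor C eta eta \<and>
     Comp C eps m = TMor C eps eps \<and>
     Comp C eps eta = Id C (Unit C) \<and>
     \<comment> \<open>antipode\<close>
     Comp C m (Comp C (TMor C S (Id C H)) Dl) = Comp C eta eps \<and>
     Comp C m (Comp C (TMor C (Id C H) S) Dl) = Comp C eta eps"

definition twisted_antipode :: "('o, 'm, 'x) bmcat_scheme \<Rightarrow> 'm \<Rightarrow> 'm \<Rightarrow> 'm \<Rightarrow> 'm" where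
  "twisted_antipode C Dl S dl = Comp C (TMor C dl S) Dl"

definition bmpi ::
  "('o, 'm, 'x) bmcat_scheme \<Rightarrow> 'o \<Rightarrow> 'm \<Rightarrow> 'm \<Rightarrow> 'm \<Rightarrow> 'm \<Rightarrow> 'm \<Rightarrow> 'm \<Rightarrow> 'm \<Rightarrow> bool" where
  "bmpi C H m eta Dl eps S dl sg \<longleftrightarrow>
     Dom C dl = H \<and> Cod C dl = Unit C \<and>
     Dom C sg = Unit C \<and> Cod C sg = H \<and>
     \<comment> \<open>delta is a character (algebra morphism)\<close>
     Comp C dl m = TMor C dl dl \<and> Comp C dl eta = Id C (Unit C) \<and>
     \<comment> \<open>sigma is group-like (coalgebra morphism)\<close>
     Comp C Dl sg = TMor C sg sg \<and> Comp C eps sg = Id C (Unit C) \<and>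
     Comp C dl sg = Id C (Unit C) \<and>
     Comp C (twisted_antipode C Dl S dl) (twisted_antipode C Dl S dl)
       = Comp C m (Comp C (TMor C m (Id C H)) (TMor C sg (TMor C (Id C H) (Comp C S sg))))"

text \<open>X n is the n-th object, d n i : X (n-1) -> X n (n \<ge> 1, i \<le> n) the cofaces,
  s n i : X (n+1) -> X n (i \<le> n) the codegeneracies, t n : X n -> X n the cyclic operators.\<close>

definition cocyclic_object ::
  "('o, 'm, 'x) bmcat_scheme \<Rightarrow> (nat \<Rightarrow> 'o) \<Rightarrow> (nat \<Rightarrow> nat \<Rightarrow> 'm) \<Rightarrow> (nat \<Rightarrow> nat \<Rightarrow> 'm)
     \<Rightarrow> (nat \<Rightarrow> 'm) \<Rightarrow> bool" where
  "cocyclic_object C X d s t \<longleftrightarrow>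
     \<comment> \<open>typing\<close>
     (\<forall>n i. 1 \<le> n \<and> i \<le> n \<longrightarrow> Dom C (d n i) = X (n - 1) \<and> Cod C (d n i) = X n) \<and>
     (\<forall>n i. i \<le> n \<longrightarrow> Dom C (s n i) = X (Suc n) \<and> Cod C (s n i) = X n) \<and>
     (\<forall>n. Dom C (t n) = X n \<and> Cod C (t n) = X n) \<and>
     \<comment> \<open>cosimplicial identities\<close>
     (\<forall>n i j. 1 \<le> n \<and> i < j \<and> j \<le> n + 1 \<longrightarrow>
        Comp C (d (n + 1) j) (d n i) = Comp C (d (n + 1) i) (d n (j - 1))) \<and>
     (\<forall>n i j. i \<le> j \<and> j \<le> n \<longrightarrow>
        Comp C (s n j) (s (n + 1) i) = Comp C (s n i) (s (n + 1) (j + 1))) \<and>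
     (\<forall>n i j. j \<le> n \<and> i \<le> n + 1 \<longrightarrow>
        Comp C (s n j) (d (n + 1) i) =
          (if i < j then Comp C (d n i) (s (n - 1) (j - 1))
           else if i = j \<or> i = j + 1 then Id C (X n)
           else Comp C (d n (i - 1)) (s (n - 1) j))) \<and>
     \<comment> \<open>cyclic identities\<close>
     (\<forall>n i. 1 \<le> i \<and> i \<le> n \<longrightarrow> Comp C (t n) (d n i) = Comp C (d n (i - 1)) (t (n - 1))) \<and>
     (\<forall>n. 1 \<le> n \<longrightarrow> Comp C (t n) (d n 0) = d n n) \<and>
     (\<forall>n i. 1 \<le> i \<and> i \<le> n \<longrightarrow> Comp C (t n) (s n i) = Comp C (s n (i - 1)) (t (n + 1))) \<and>
     (\<forall>n. Comp C (t n) (s n 0) = Comp C (s n n) (Comp C (t (n + 1)) (t (n + 1)))) \<and>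
     (\<forall>n. cpow C (X n) (t n) (n + 1) = Id C (X n))"

definition CH :: "('o, 'm, 'x) bmcat_scheme \<Rightarrow> 'o \<Rightarrow> nat \<Rightarrow> 'o" where
  "CH C H n = (if n = 0 then Unit C else tpow C H n)"

definition CH_coface ::
  "('o, 'm, 'x) bmcat_scheme \<Rightarrow> 'o \<Rightarrow> 'm \<Rightarrow> 'm \<Rightarrow> 'm \<Rightarrow> nat \<Rightarrow> nat \<Rightarrow> 'm" where
  "CH_coface C H eta Dl sg n i =
     (if i = 0 then TMor C eta (idp C H (n - 1))
      else if i = n then TMor C (idp C H (n - 1)) sg
      else TMor C (idp C H (i - 1)) (TMor C Dl (idp C H (n - 1 - i))))"

definition CH_codeg :: "('o, 'm, 'x) bmcat_scheme \<Rightarrow> 'o \<Rightarrow> 'm \<Rightarrow> nat \<Rightarrow> nat \<Rightarrow> 'm" where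
  "CH_codeg C H eps n i = TMor C (idp C H i) (TMor C eps (idp C H (n - i)))"

definition braid_f :: "('o, 'm, 'x) bmcat_scheme \<Rightarrow> 'o \<Rightarrow> nat \<Rightarrow> nat \<Rightarrow> 'm" where
  "braid_f C H n j = TMor C (idp C H j) (TMor C (tpowm C (Braid C H H) (n - j)) (idp C H j))"

definition braid_F :: "('o, 'm, 'x) bmcat_scheme \<Rightarrow> 'o \<Rightarrow> nat \<Rightarrow> 'm" where
  "braid_F C H n = comps C (tpow C H (2 * n)) (map (braid_f C H n) [1..<n])"

definition mult_n :: "('o, 'm, 'x) bmcat_scheme \<Rightarrow> 'o \<Rightarrow> 'm \<Rightarrow> nat \<Rightarrow> 'm" where
  "mult_n C H m n = (if n = 1 then m else Comp C (tpowm C m n) (braid_F C H n))"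

definition CH_cyc ::
  "('o, 'm, 'x) bmcat_scheme \<Rightarrow> 'o \<Rightarrow> 'm \<Rightarrow> 'm \<Rightarrow> 'm \<Rightarrow> 'm \<Rightarrow> 'm \<Rightarrow> nat \<Rightarrow> 'm" where
  "CH_cyc C H m Dl S dl sg n =
     (if n = 0 then Id C (Unit C)
      else Comp C (mult_n C H m n)
             (TMor C (Comp C (iter_comult C H Dl (n - 1)) (twisted_antipode C Dl S dl))
                     (TMor C (idp C H (n - 1)) sg)))"

end

theory Submission
  imports Defs
begin

text \<open>
  Everything is computed in the strict setting: morphisms between tensor powers of \<open>H\<close> are
  composites of whiskered generators \<open>W k f r = 1\<^sup>\<otimes>\<^sup>k \<otimes> f \<otimes> 1\<^sup>\<otimes>\<^sup>r\<close>, and generators acting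
  on disjoint tensor factors commute. The cosimplicial identities then reduce to coassociativity
  and counitality of \<open>\<Delta>\<close> and to \<open>\<sigma>\<close> being group-like.

  For the cyclic operators write \<open>\<tau>\<^sub>n = Q\<^sub>n \<circ> (1 \<otimes> \<sigma>)\<close>, where
  \<open>Q\<^sub>n(h \<otimes> x) = \<Delta>\<^sup>n\<^sup>-\<^sup>1(S\<^sup>~ h) \<cdot> x\<close> is the diagonal action of \<open>S\<^sup>~ h\<close> on the braided
  tensor power algebra \<open>H\<^sup>\<otimes>\<^sup>n\<close>. Because \<open>S\<^sup>~\<close> reverses products and \<open>S\<^sup>~\<^sup>2(h) \<sigma> = \<sigma> h\<close>,
  \<open>Q\<^sub>n\<close> intertwines the shift \<open>T(h\<^sub>0,\<dots>,h\<^sub>n) = (h\<^sub>1,\<dots>,h\<^sub>n,\<sigma>h\<^sub>0)\<close> with \<open>\<tau>\<^sub>n\<close>, and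
  \<open>Q\<^sub>n(\<eta> \<otimes> 1) = 1\<close>; hence \<open>\<tau>\<^sub>n\<^sup>n\<^sup>+\<^sup>1 = Q\<^sub>n T\<^sup>n\<^sup>+\<^sup>1 (\<eta> \<otimes> 1)\<close>. As \<open>\<psi>\<^sub>H\<^sub>,\<^sub>H\<^sup>2 = 1\<close>,
  \<open>T\<^sup>n\<^sup>+\<^sup>1\<close> is left multiplication by \<open>\<sigma>\<close> in every factor, which \<open>Q\<^sub>n\<close> absorbs because
  \<open>S\<sigma> = \<sigma>\<^sup>-\<^sup>1\<close>. The remaining cyclic identities say that \<open>Q\<^sub>n\<close> is compatible with \<open>\<Delta>\<close>
  and \<open>\<epsilon>\<close> applied in single tensor factors.
\<close>

declare tpow.simps[simp del]

text \<open>Tensor exponents are kept in \<open>Suc\<close>-normal form, so that numerals and sums unify.\<close>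

declare One_nat_def[simp] numeral_2_eq_2[simp] numeral_3_eq_3[simp] numeral_eq_Suc[simp]
  pred_numeral_simps[simp]

section \<open>Tensor powers of an object in a strict braided monoidal category\<close>

locale braided_powers = strict_braided_monoidal_cat C
  for C :: "('o, 'm) bmcat" +
  fixes H :: 'o
begin

abbreviation P where "P k \<equiv> tpow C H k"

abbreviation cmp (infixr "\<bullet>" 55) where "g \<bullet> f \<equiv> Comp C g f"

abbreviation tns (infixr "\<otimes>" 70) where "f \<otimes> g \<equiv> TMor C f g"

abbreviation idn where "idn k \<equiv> Id C (P k)"

abbreviation B where "B a b \<equiv> Braid C (P a) (P b)"

abbreviation i1 where "i1 \<equiv> idn (Suc 0)"

abbreviation BH where "BH \<equiv> B (Suc 0) (Suc 0)"

lemma P_add[simp]: "TObj C (P a) (P b) = P (a + b)"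
  by (induction a) (simp_all add: tpow.simps tobj_assoc tobj_unit_left)

lemma P_1: "P (Suc 0) = H"
  by (simp add: tpow.simps tobj_unit_right)

lemma Unit_eq_P_0[simp]: "Unit C = P 0"
  by (simp add: tpow.simps)

lemma Id_H[simp]: "Id C H = i1"
  by (simp add: P_1)

lemma TObj_H_H[simp]: "TObj C H H = P 2"
  using P_add[of 1 1] by (simp add: P_1)

lemma Braid_H_H[simp]: "Braid C H H = BH"
  by (simp add: P_1)

lemma dom_comp[simp]: "Cod C f = Dom C g \<Longrightarrow> Dom C (g \<bullet> f) = Dom C f"
  by (rule comp_dom)

lemma cod_comp[simp]: "Cod C f = Dom C g \<Longrightarrow> Cod C (g \<bullet> f) = Cod C g"
  by (rule comp_cod)

declare tmor_dom[simp] tmor_cod[simp] id_dom[simp] id_cod[simp] braid_dom[simp] braid_cod[simp]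

lemma comp_assoc'[simp]:
  "Cod C f = Dom C g \<Longrightarrow> Cod C g = Dom C h \<Longrightarrow> (h \<bullet> g) \<bullet> f = h \<bullet> (g \<bullet> f)"
  by (simp add: comp_assoc)

lemma comp_Id_left[simp]: "Cod C f = X \<Longrightarrow> Id C X \<bullet> f = f"
  using comp_id_left by blast

lemma comp_Id_right[simp]: "Dom C f = X \<Longrightarrow> f \<bullet> Id C X = f"
  using comp_id_right by blast

lemma tensor_idn[simp]: "idn a \<otimes> idn b = idn (a + b)"
  using tmor_id P_add by metis

lemma tensor_assoc[simp]: "(f \<otimes> g) \<otimes> h = f \<otimes> (g \<otimes> h)"
  by (rule tmor_assoc)

lemma tensor_idn_0_left[simp]: "idn 0 \<otimes> f = f"
  using tmor_unit_left by simp

lemma tensor_idn_0_right[simp]: "f \<otimes> idn 0 = f"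
  using tmor_unit_right by simp

lemma tensor_idn_idn: "idn a \<otimes> (idn b \<otimes> f) = idn (a + b) \<otimes> f"
  by (subst tensor_assoc[symmetric]) (simp only: tensor_idn)

lemma tensor_idn_Suc_Suc[simp]: "idn (Suc (Suc k)) \<otimes> X = i1 \<otimes> (idn (Suc k) \<otimes> X)"
  by (metis tensor_assoc tensor_idn plus_1_eq_Suc One_nat_def)

lemma interchange[simp]:
  "Cod C f = Dom C g \<Longrightarrow> Cod C f' = Dom C g' \<Longrightarrow> (g \<otimes> g') \<bullet> (f \<otimes> f') = (g \<bullet> f) \<otimes> (g' \<bullet> f')"
  by (rule tmor_interchange)

lemma interchange_assoc[simp]:
  "Cod C f = Dom C g \<Longrightarrow> Cod C f' = Dom C g' \<Longrightarrow> Cod C k = TObj C (Dom C f) (Dom C f') \<Longrightarrow>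
   (g \<otimes> g') \<bullet> ((f \<otimes> f') \<bullet> k) = ((g \<bullet> f) \<otimes> (g' \<bullet> f')) \<bullet> k"
  using comp_assoc[of k "f \<otimes> f'" "g \<otimes> g'"] tmor_interchange[of f g f' g'] by simp

text \<open>
  The following rules rewrite a segment of a right-nested composite. Used as conditional
  simplification rules (\<open>chain_subst[OF eq]\<close>), their equality premises are discharged by
  the simplifier, so the segment is matched up to simplification, not only syntactically.
\<close>

lemma chain_subst:
  "g \<bullet> f = e \<Longrightarrow> g' = g \<Longrightarrow> f' = f \<Longrightarrow> Cod C h = Dom C f \<Longrightarrow> Cod C f = Dom C g \<Longrightarrow>
   g' \<bullet> (f' \<bullet> h) = e \<bullet> h"
  by (metis comp_assoc)

lemma chain_subst_last: "g \<bullet> f = e \<Longrightarrow> g' = g \<Longrightarrow> f' = f \<Longrightarrow> g' \<bullet> f' = e"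
  by simp

lemma chain_subst3:
  assumes "g \<bullet> (f \<bullet> e) = r" "g' = g" "f' = f" "e' = e"
    and "Cod C h = Dom C e" "Cod C e = Dom C f" "Cod C f = Dom C g"
  shows "g' \<bullet> (f' \<bullet> (e' \<bullet> h)) = r \<bullet> h"
proof -
  have "(g \<bullet> (f \<bullet> e)) \<bullet> h = g \<bullet> (f \<bullet> (e \<bullet> h))"
    using assms(5-7) by simp
  then show ?thesis
    using assms(1-4) by simp
qed

lemma chain_subst3_last: "g \<bullet> (f \<bullet> e) = r \<Longrightarrow> g' = g \<Longrightarrow> f' = f \<Longrightarrow> e' = e \<Longrightarrow> g' \<bullet> (f' \<bullet> e') = r"
  by simp

lemma chain_subst4:
  assumes "g \<bullet> (f \<bullet> (e \<bullet> d)) = r" "g' = g" "f' = f" "e' = e" "d' = d"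
    and "Cod C h = Dom C d" "Cod C d = Dom C e" "Cod C e = Dom C f" "Cod C f = Dom C g"
  shows "g' \<bullet> (f' \<bullet> (e' \<bullet> (d' \<bullet> h))) = r \<bullet> h"
proof -
  have "(g \<bullet> (f \<bullet> (e \<bullet> d))) \<bullet> h = g \<bullet> (f \<bullet> (e \<bullet> (d \<bullet> h)))"
    using assms(6-9) by simp
  then show ?thesis
    using assms(1-5) by simp
qed

lemma chain_subst4_last:
  "g \<bullet> (f \<bullet> (e \<bullet> d)) = r \<Longrightarrow> g' = g \<Longrightarrow> f' = f \<Longrightarrow> e' = e \<Longrightarrow> d' = d \<Longrightarrow> g' \<bullet> (f' \<bullet> (e' \<bullet> d')) = r"
  by simp

definition W where "W k f r = idn k \<otimes> f \<otimes> idn r"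

lemma W_dom_cod[simp]:
  "Dom C (W k f r) = TObj C (P k) (TObj C (Dom C f) (P r))"
  "Cod C (W k f r) = TObj C (P k) (TObj C (Cod C f) (P r))"
  unfolding W_def by simp_all

lemma W_comp: "Cod C f = Dom C g \<Longrightarrow> W k (g \<bullet> f) r = W k g r \<bullet> W k f r"
  unfolding W_def by simp

lemma comp_W: "Cod C f = Dom C g \<Longrightarrow> W k g r \<bullet> W k f r = W k (g \<bullet> f) r"
  by (simp add: W_comp)

lemma W_W: "W k (W k' f r') r = W (k + k') f (r' + r)"
  unfolding W_def by (simp add: tensor_idn_idn)

lemma W_idn[simp]: "W k (idn p) r = idn (k + p + r)"
  unfolding W_def by (simp add: tensor_idn_idn ac_simps)

lemma W_0_0[simp]: "W 0 f 0 = f"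
  unfolding W_def by simp

lemma W_tensor:
  "Dom C f = P p \<Longrightarrow> Cod C f = P q \<Longrightarrow> Dom C g = P p' \<Longrightarrow> Cod C g = P q' \<Longrightarrow>
   W k (f \<otimes> g) r = W k f (q' + r) \<bullet> W (k + p) g r"
  unfolding W_def by (simp add: tensor_idn_idn[symmetric])

lemma W_tensor':
  "Dom C f = P p \<Longrightarrow> Cod C f = P q \<Longrightarrow> Dom C g = P p' \<Longrightarrow> Cod C g = P q' \<Longrightarrow>
   W k (f \<otimes> g) r = W (k + q) g r \<bullet> W k f (p' + r)"
  unfolding W_def by (simp add: tensor_idn_idn[symmetric])

lemma W_commute:
  assumes "Dom C f = P p" "Cod C f = P q" "Dom C g = P p'" "Cod C g = P q'"
  shows "W k f (j + q' + r) \<bullet> W (k + p + j) g r = W (k + q + j) g r \<bullet> W k f (j + p' + r)"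
proof -
  have "W k f (j + q' + r) \<bullet> W (k + p + j) g r = W k (f \<otimes> (idn j \<otimes> g)) r"
    using assms W_tensor[of f p q "idn j \<otimes> g" "j + p'" "j + q'" k r]
    by (simp add: W_W ac_simps W_def tensor_idn_idn)
  also have "\<dots> = W (k + q + j) g r \<bullet> W k f (j + p' + r)"
    using assms W_tensor'[of f p q "idn j \<otimes> g" "j + p'" "j + q'" k r]
    by (simp add: W_W ac_simps W_def tensor_idn_idn)
  finally show ?thesis .
qed

lemma W_commute':
  "Dom C f = P p \<Longrightarrow> Cod C f = P q \<Longrightarrow> Dom C g = P p' \<Longrightarrow> Cod C g = P q' \<Longrightarrow>
   W (k + q + j) g r \<bullet> W k f (j + p' + r) = W k f (j + q' + r) \<bullet> W (k + p + j) g r"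
  using W_commute by metis

lemma points_commute:
  "Dom C x = P 0 \<Longrightarrow> Cod C x = P a \<Longrightarrow> Dom C y = P 0 \<Longrightarrow> Cod C y = P b \<Longrightarrow>
   W 0 x b \<bullet> y = W a y 0 \<bullet> x"
  using W_commute[of x 0 a y 0 b 0 0 0] by simp

lemma tensor_points:
  "Dom C x = P 0 \<Longrightarrow> Dom C y = P 0 \<Longrightarrow> Cod C y = P b \<Longrightarrow> x \<otimes> y = W 0 x b \<bullet> y"
  using interchange[of "idn 0" x y "idn b"] by (simp add: W_def)

lemma braid_natural_P:
  "Dom C f = P a \<Longrightarrow> Cod C f = P c \<Longrightarrow> Dom C g = P b \<Longrightarrow> Cod C g = P d \<Longrightarrow>
   B c d \<bullet> (f \<otimes> g) = (g \<otimes> f) \<bullet> B a b"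
  using braid_natural[of f g] by simp

lemma braid_W_natural:
  "Dom C f = P p \<Longrightarrow> Cod C f = P q \<Longrightarrow> Dom C g = P p' \<Longrightarrow> Cod C g = P q' \<Longrightarrow>
   W k (B q q') r \<bullet> W k (f \<otimes> g) r = W k (g \<otimes> f) r \<bullet> W k (B p p') r"
  using braid_natural_P[of f p q g p' q'] by (simp add: W_comp[symmetric])

lemma braid_add_left: "B (a + b) c = W 0 (B a c) b \<bullet> W a (B b c) 0"
  using braid_hexagon1[of "P a" "P b" "P c"] by (simp add: W_def)

lemma braid_add_right: "B a (b + c) = W b (B a c) 0 \<bullet> W 0 (B a b) c"
  using braid_hexagon2[of "P a" "P b" "P c"] by (simp add: W_def)

lemma idempotent_left_invertible_Id:
  assumes "\<beta> \<bullet> \<beta> = \<beta>" "Dom C \<beta> = A" "Cod C \<beta> = A"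
    and "\<exists>g. Dom C g = A \<and> Cod C g = A \<and> g \<bullet> \<beta> = Id C A"
  shows "\<beta> = Id C A"
proof -
  obtain g where g: "Dom C g = A" "Cod C g = A" "g \<bullet> \<beta> = Id C A"
    using assms(4) by blast
  have "\<beta> = (g \<bullet> \<beta>) \<bullet> \<beta>"
    using g assms(2,3) by simp
  also have "\<dots> = g \<bullet> (\<beta> \<bullet> \<beta>)"
    using g assms(2,3) by (simp del: comp_assoc' add: comp_assoc)
  finally show ?thesis
    using g assms(1) by simp
qed

lemma braid_0_left[simp]: "B 0 a = idn a"
proof (rule idempotent_left_invertible_Id)
  show "B 0 a \<bullet> B 0 a = B 0 a"
    using braid_add_left[of 0 0 a] by simp
  show "\<exists>g. Dom C g = P a \<and> Cod C g = P a \<and> g \<bullet> B 0 a = idn a"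
    using braid_invertible[where A="P 0" and B="P a"] by auto
qed simp_all

lemma braid_0_right[simp]: "B a 0 = idn a"
proof (rule idempotent_left_invertible_Id)
  show "B a 0 \<bullet> B a 0 = B a 0"
    using braid_add_right[of a 0 0] by simp
  show "\<exists>g. Dom C g = P a \<and> Cod C g = P a \<and> g \<bullet> B a 0 = idn a"
    using braid_invertible[where A="P a" and B="P 0"] by auto
qed simp_all

lemma braid_2_1: "B 2 1 = W 0 BH 1 \<bullet> W 1 BH 0"
  using braid_add_left[of 1 1 1] by simp

lemma braid_1_2: "B 1 2 = W 1 BH 0 \<bullet> W 0 BH 1"
  using braid_add_right[of 1 1 1] by simp

lemma braid_1_symmetric:
  assumes "BH \<bullet> BH = idn 2"
  shows "B b 1 \<bullet> B 1 b = idn (1 + b)"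
proof (induction b)
  case (Suc b)
  have h2: "B 1 (1 + b) = (i1 \<otimes> B 1 b) \<bullet> (BH \<otimes> idn b)"
    using braid_add_right[of 1 1 b] by (simp add: W_def)
  have h1: "B (1 + b) 1 = (BH \<otimes> idn b) \<bullet> (i1 \<otimes> B b 1)"
    using braid_add_left[of 1 b 1] by (simp add: W_def)
  have "B (1 + b) 1 \<bullet> B 1 (1 + b) = (BH \<otimes> idn b) \<bullet> ((i1 \<otimes> (B b 1 \<bullet> B 1 b)) \<bullet> (BH \<otimes> idn b))"
    unfolding h1 h2 by (simp add: ac_simps)
  also have "\<dots> = idn (2 + b)"
    using Suc assms by (simp add: ac_simps)
  finally show ?case by (simp add: ac_simps)
qed simp

lemma braid_symmetric:
  assumes "BH \<bullet> BH = idn 2"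
  shows "B b a \<bullet> B a b = idn (a + b)"
proof (induction a)
  case (Suc a)
  have h1: "B (1 + a) b = (B 1 b \<otimes> idn a) \<bullet> (i1 \<otimes> B a b)"
    using braid_add_left[of 1 a b] by (simp add: W_def)
  have h2: "B b (1 + a) = (i1 \<otimes> B b a) \<bullet> (B b 1 \<otimes> idn a)"
    using braid_add_right[of b 1 a] by (simp add: W_def)
  have "B b (1 + a) \<bullet> B (1 + a) b = (i1 \<otimes> B b a) \<bullet> (((B b 1 \<bullet> B 1 b) \<otimes> idn a) \<bullet> (i1 \<otimes> B a b))"
    unfolding h1 h2 by (simp add: ac_simps)
  also have "\<dots> = idn (1 + a + b)"
    using Suc braid_1_symmetric[OF assms, of b] by (simp add: ac_simps)
  finally show ?case by (simp add: ac_simps)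
qed simp

text \<open>This is the only place where the involutivity of \<open>\<psi>\<^sub>H\<^sub>,\<^sub>H\<close> is used.\<close>

lemma braid_rotate:
  assumes "BH \<bullet> BH = idn 2"
  shows "B 1 (r + i) \<bullet> B i (Suc r) = B (Suc i) r"
proof -
  have h1: "B i (1 + r) = W 1 (B i r) 0 \<bullet> W 0 (B i 1) r" using braid_add_right[of i 1 r] by simp
  have h2: "B 1 (i + r) = W i (B 1 r) 0 \<bullet> W 0 (B 1 i) r" using braid_add_right[of 1 i r] by simp
  have h3: "B (i + 1) r = W 0 (B i r) 1 \<bullet> W i (B 1 r) 0" using braid_add_left[of i 1 r] by simp
  have n: "B 1 (r + i) \<bullet> W 1 (B i r) 0 = W 0 (B i r) 1 \<bullet> B 1 (i + r)"
    using braid_natural_P[of i1 1 1 "B i r" "i + r" "r + i"] by (simp add: W_def)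
  have sy: "W 0 (B 1 i) r \<bullet> W 0 (B i 1) r = idn (Suc (i + r))"
    using braid_symmetric[OF assms, of 1 i] by (simp add: comp_W)
  have "B 1 (r + i) \<bullet> B i (Suc r) = W 0 (B i r) 1 \<bullet> W i (B 1 r) 0 \<bullet> W 0 (B 1 i) r \<bullet> W 0 (B i 1) r"
    using h1 h2 by (simp add: chain_subst[OF n] chain_subst_last[OF n])
  also have "\<dots> = B (Suc i) r" using h3 sy by (simp add: chain_subst_last[OF sy])
  finally show ?thesis .
qed

lemma tpowm_dom[simp]: "Dom C f = P x \<Longrightarrow> Dom C (tpowm C f k) = P (k * x)"
  by (induction k) simp_all

lemma tpowm_cod[simp]: "Cod C f = P x \<Longrightarrow> Cod C (tpowm C f k) = P (k * x)"
  by (induction k) simp_all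

lemma tpowm_add: "tpowm C f (a + b) = tpowm C f a \<otimes> tpowm C f b"
  by (induction a) simp_all

lemma comps_dom_cod:
  "\<forall>g\<in>set gs. Dom C g = X \<and> Cod C g = X \<Longrightarrow> Dom C (comps C X gs) = X \<and> Cod C (comps C X gs) = X"
  by (induction gs) auto

lemma comps_map_W:
  "\<forall>g\<in>set gs. Dom C g = P k \<and> Cod C g = P k \<Longrightarrow>
   comps C (P (Suc (k + 1))) (map (\<lambda>g. i1 \<otimes> g \<otimes> i1) gs) = i1 \<otimes> comps C (P k) gs \<otimes> i1"
proof (induction gs)
  case (Cons g gs)
  then have "Dom C (comps C (P k) gs) = P k \<and> Cod C (comps C (P k) gs) = P k"
    using comps_dom_cod[of gs "P k"] by auto
  then show ?case
    using Cons by simp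
qed simp

lemma cpow_dom_cod[simp]:
  "Dom C f = X \<Longrightarrow> Cod C f = X \<Longrightarrow> Dom C (cpow C X f i) = X \<and> Cod C (cpow C X f i) = X"
  by (induction i) simp_all

lemma cpow_add:
  "Dom C f = X \<Longrightarrow> Cod C f = X \<Longrightarrow> cpow C X f (a + b) = cpow C X f a \<bullet> cpow C X f b"
proof (induction a)
  case (Suc a)
  then have "Dom C (cpow C X f a) = X \<and> Cod C (cpow C X f a) = X"
    "Dom C (cpow C X f b) = X \<and> Cod C (cpow C X f b) = X"
    by simp_all
  then show ?case
    using Suc by simp
qed simp

lemma cpow_commute:
  assumes "Dom C f = X" "Cod C f = X" "Dom C g = Y" "Cod C g = Y" "Dom C q = Y" "Cod C q = X"
    and "f \<bullet> q = q \<bullet> g"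
  shows "cpow C X f i \<bullet> q = q \<bullet> cpow C Y g i"
proof (induction i)
  case (Suc i)
  have "cpow C X f (Suc i) \<bullet> q = f \<bullet> (cpow C X f i \<bullet> q)"
    using assms by simp
  also have "\<dots> = (f \<bullet> q) \<bullet> cpow C Y g i"
    unfolding Suc using assms(1-6) by simp
  also have "\<dots> = q \<bullet> cpow C Y g (Suc i)"
    using assms by simp
  finally show ?case .
qed (use assms in simp)

abbreviation F where "F n \<equiv> braid_F C H n"

abbreviation TP where "TP n \<equiv> tpowm C BH n"

lemma braid_f_dom_cod[simp]:
  "j \<le> n \<Longrightarrow> Dom C (braid_f C H n j) = P (2 * n)"
  "j \<le> n \<Longrightarrow> Cod C (braid_f C H n j) = P (2 * n)"
  unfolding braid_f_def idp_def by simp_all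

lemma braid_F_dom_cod[simp]: "Dom C (F n) = P (2 * n)" "Cod C (F n) = P (2 * n)"
  using comps_dom_cod[of "map (braid_f C H n) [1..<n]" "P (2 * n)"]
  unfolding braid_F_def by auto

lemma braid_F_0: "F 0 = idn 0"
  unfolding braid_F_def by simp

lemma braid_F_1: "F (Suc 0) = idn 2"
  unfolding braid_F_def by simp

lemma braid_F_Suc_outer: "F (Suc n) = W 1 (TP n \<bullet> F n) 1"
proof (cases n)
  case (Suc k)
  have l: "[1..<Suc n] = 1 # map Suc [1..<n]"
    using Suc by (simp add: upt_conv_Cons map_Suc_upt)
  have shift: "map (braid_f C H (Suc n)) (map Suc [1..<n]) =
      map (\<lambda>g. i1 \<otimes> g \<otimes> i1) (map (braid_f C H n) [1..<n])"
    by (auto simp: braid_f_def idp_def tensor_idn_idn)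
  have "\<forall>g\<in>set (map (braid_f C H n) [1..<n]). Dom C g = P (2 * n) \<and> Cod C g = P (2 * n)"
    by auto
  note inner = comps_map_W[OF this]
  have "F (Suc n) = braid_f C H (Suc n) 1 \<bullet>
      comps C (P (2 * Suc n)) (map (braid_f C H (Suc n)) (map Suc [1..<n]))"
    unfolding braid_F_def l by simp
  also have "\<dots> = (i1 \<otimes> TP n \<otimes> i1) \<bullet> (i1 \<otimes> F n \<otimes> i1)"
    unfolding shift using inner by (simp add: braid_f_def idp_def braid_F_def)
  finally show ?thesis
    by (simp add: W_def)
qed (simp add: braid_F_def W_def)

lemma braid_F_Suc: "F (Suc n) = W 2 (F n) 0 \<bullet> W 1 (B n 1) n"
proof (induction n)
  case 0
  show ?case using braid_F_Suc_outer[of 0] by (simp add: braid_F_0)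
next
  case (Suc n)
  have h1: "B (Suc n) 1 = W 0 BH n \<bullet> W 1 (B n 1) 0"
    using braid_add_left[of 1 n 1] by simp
  have t1: "W 1 (BH \<otimes> TP n) 1 = W 1 BH (2 * n + 1) \<bullet> W 3 (TP n) 1"
    using W_tensor[of BH 2 2 "TP n" "2 * n" "2 * n" 1 1] by simp
  have c1: "W 1 BH (0 + 2 * n + 1) \<bullet> W (1 + 2 + 0) (TP n \<bullet> F n) 1 = W (1 + 2 + 0) (TP n \<bullet> F n) 1 \<bullet>
      W 1 BH (0 + 2 * n + 1)"
    by (rule W_commute) (simp_all add: ac_simps)
  have "F (Suc (Suc n)) = W 1 (TP (Suc n)) 1 \<bullet> W 1 (F (Suc n)) 1"
    using braid_F_Suc_outer[of "Suc n"] by (simp add: W_comp)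
  also have "\<dots> = (W 1 BH (2 * n + 1) \<bullet> W 3 (TP n) 1) \<bullet> (W 3 (F n) 1 \<bullet> W 2 (B n 1) (n + 1))"
    unfolding Suc using t1 by (simp add: W_comp W_W ac_simps)
  also have "\<dots> = W 1 BH (2 * n + 1) \<bullet> W 3 (TP n \<bullet> F n) 1 \<bullet> W 2 (B n 1) (n + 1)"
    by (simp add: W_comp)
  also have "\<dots> = W 3 (TP n \<bullet> F n) 1 \<bullet> W 1 BH (2 * n + 1) \<bullet> W 2 (B n 1) (n + 1)"
    using c1 by (simp add: chain_subst[OF c1[simplified]])
  also have "\<dots> = W 2 (F (Suc n)) 0 \<bullet> W 1 (B (Suc n) 1) (Suc n)"
    unfolding braid_F_Suc_outer h1 by (simp add: W_comp W_W ac_simps)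
  finally show ?case .
qed

lemma braid_F_add: "F (a + b) = W 0 (F a) (2 * b) \<bullet> W (2 * a) (F b) 0 \<bullet> W a (B b a) b"
proof (induction a)
  case 0
  show ?case by (simp add: braid_F_0)
next
  case (Suc a)
  have h2: "W (Suc a) (B b (Suc a)) b = W (a + 2) (B b a) b \<bullet> W (a + 1) (B b 1) (a + b)"
    using braid_add_right[of b 1 a] by (simp add: W_comp W_W ac_simps)
  have h1: "W 1 (B (a + b) 1) (a + b) = W 1 (B a 1) (b + a + b) \<bullet> W (1 + a) (B b 1) (a + b)"
    using braid_add_left[of a b 1] by (simp add: W_comp W_W ac_simps)
  have c1: "W 1 (B a 1) (a + 2 * b + 0) \<bullet> W (1 + (a + 1) + a) (F b) 0 =
      W (1 + (a + 1) + a) (F b) 0 \<bullet> W 1 (B a 1) (a + 2 * b + 0)"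
    by (rule W_commute) (simp_all add: ac_simps)
  have c2: "W 1 (B a 1) (0 + (a + b) + b) \<bullet> W (1 + (a + 1) + 0) (B b a) b =
      W (1 + (a + 1) + 0) (B b a) b \<bullet> W 1 (B a 1) (0 + (a + b) + b)"
    by (rule W_commute) (simp_all add: ac_simps)
  have "F (Suc a + b) = W 2 (F (a + b)) 0 \<bullet> W 1 (B (a + b) 1) (a + b)"
    using braid_F_Suc[of "a + b"] by simp
  also have "\<dots> = W 2 (F a) (2 * b) \<bullet> W (2 + 2 * a) (F b) 0 \<bullet> W (2 + a) (B b a) b \<bullet>
      W 1 (B a 1) (b + a + b) \<bullet> W (1 + a) (B b 1) (a + b)"
    unfolding Suc h1 by (simp add: W_comp W_W ac_simps)
  also have "\<dots> = W 2 (F a) (2 * b) \<bullet> W (2 + 2 * a) (F b) 0 \<bullet> W 1 (B a 1) (b + a + b) \<bullet>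
      W (a + 2) (B b a) b \<bullet> W (1 + a) (B b 1) (a + b)"
    by (simp add: chain_subst[OF c2[symmetric]] ac_simps)
  also have "\<dots> = W 2 (F a) (2 * b) \<bullet> W 1 (B a 1) (b + a + b) \<bullet> W (2 + 2 * a) (F b) 0 \<bullet>
      W (a + 2) (B b a) b \<bullet> W (1 + a) (B b 1) (a + b)"
    by (simp add: chain_subst[OF c1] ac_simps)
  also have "\<dots> = W 0 (F (Suc a)) (2 * b) \<bullet> W (2 * Suc a) (F b) 0 \<bullet> W (Suc a) (B b (Suc a)) b"
    unfolding h2 braid_F_Suc by (simp add: W_comp W_W ac_simps)
  finally show ?case .
qed

lemma braid_blocks_hexagon:
  "W (2 * a) (B (2 * b) a) b \<bullet> W a (B b a) (a + 2 * b) = W a (B b (2 * a)) (2 * b) \<bullet>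
      W (a + b + a) (B b a) b"
proof -
  have left: "W (2 * a) (B (2 * b) a) b \<bullet> W a (B b a) (a + 2 * b) = W (2 * a) (B b a) (2 * b) \<bullet>
      W (2 * a + b) (B b a) b \<bullet> W a (B b a) (a + 2 * b)"
    using braid_add_left[of b b a] by (simp add: W_comp W_W ac_simps)
  have right: "W a (B b (2 * a)) (2 * b) \<bullet> W (a + b + a) (B b a) b = W (2 * a) (B b a) (2 * b) \<bullet>
      W a (B b a) (a + 2 * b) \<bullet> W (2 * a + b) (B b a) b"
    using braid_add_right[of b a a] by (simp add: W_comp W_W ac_simps)
  have c: "W a (B b a) (0 + (a + b) + b) \<bullet> W (a + (a + b) + 0) (B b a) b =
      W (a + (a + b) + 0) (B b a) b \<bullet> W a (B b a) (0 + (a + b) + b)"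
    by (rule W_commute) (simp_all add: ac_simps)
  show ?thesis
    unfolding left right
    by (simp add: chain_subst[OF c[symmetric]] chain_subst_last[OF c[symmetric]] ac_simps)
qed

end

section \<open>The braided tensor power algebras of an algebra\<close>

locale braided_algebra_powers = braided_powers C H
  for C :: "('o, 'm) bmcat" and H :: 'o +
  fixes m eta :: 'm
  assumes mult_dom: "Dom C m = TObj C H H" and mult_cod: "Cod C m = H"
    and unit_dom: "Dom C eta = Unit C" and unit_cod: "Cod C eta = H"
    and mult_assoc: "Comp C m (TMor C m (Id C H)) = Comp C m (TMor C (Id C H) m)"
    and mult_unit_left: "Comp C m (TMor C eta (Id C H)) = Id C H"
    and mult_unit_right: "Comp C m (TMor C (Id C H) eta) = Id C H"
begin

lemma mult_dom_cod_P[simp]: "Dom C m = P 2" "Cod C m = P 1"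
  and unit_dom_cod_P[simp]: "Dom C eta = P 0" "Cod C eta = P 1"
  using mult_dom mult_cod unit_dom unit_cod by (simp_all add: P_1)

lemma mult_assoc_W: "m \<bullet> W 0 m 1 = m \<bullet> W 1 m 0"
  using mult_assoc by (simp add: W_def)

lemma mult_unit_W: "m \<bullet> W 0 eta 1 = i1" "m \<bullet> W 1 eta 0 = i1"
  using mult_unit_left mult_unit_right by (simp_all add: W_def)

abbreviation M where "M n \<equiv> mult_n C H m n"

abbreviation u where "u n \<equiv> tpowm C eta n"

lemma mult_n_eq: "M n = tpowm C m n \<bullet> F n"
  unfolding mult_n_def by (simp add: braid_F_1)

lemma mult_n_dom_cod[simp]: "Dom C (M n) = P (2 * n)" "Cod C (M n) = P n"
  unfolding mult_n_eq by simp_all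

lemma mult_n_0: "M 0 = idn 0"
  unfolding mult_n_eq by (simp add: braid_F_0)

lemma mult_n_1: "M (Suc 0) = m"
  unfolding mult_n_def by simp

text \<open>So \<open>m\<^sub>n\<close> is the multiplication of the \<open>n\<close>-fold braided tensor product algebra.\<close>

lemma mult_n_add: "M (a + b) = (M a \<otimes> M b) \<bullet> W a (B b a) b"
proof -
  have "M (a + b) = (tpowm C m a \<otimes> tpowm C m b) \<bullet> (W 0 (F a) (2 * b) \<bullet> W (2 * a) (F b) 0) \<bullet>
      W a (B b a) b"
    unfolding mult_n_eq braid_F_add tpowm_add by (simp add: ac_simps)
  also have "\<dots> = (tpowm C m a \<otimes> tpowm C m b) \<bullet> (F a \<otimes> F b) \<bullet> W a (B b a) b"
    using W_tensor[of "F a" "2 * a" "2 * a" "F b" "2 * b" "2 * b" 0 0] by simp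
  also have "\<dots> = (M a \<otimes> M b) \<bullet> W a (B b a) b"
    unfolding mult_n_eq by (simp add: ac_simps)
  finally show ?thesis .
qed

declare add_ac[simp]

lemma mult_n_add_W: "M (a + b) = W 0 (M a) b \<bullet> W (2 * a) (M b) 0 \<bullet> W a (B b a) b"
  using mult_n_add[of a b] W_tensor[of "M a" "2 * a" a "M b" "2 * b" b 0 0] by simp

lemma mult_n_Suc: "M (Suc k) = W 0 m k \<bullet> W 2 (M k) 0 \<bullet> W 1 (B k 1) k"
  using mult_n_add_W[of 1 k] by (simp add: mult_n_1)

lemma mult_n_Suc': "M (Suc k) = W 0 (M k) 1 \<bullet> W (2 * k) m 0 \<bullet> W k (B 1 k) 1"
  using mult_n_add[of k 1] W_tensor[of "M k" "2 * k" k m 2 1 0 0] by (simp add: mult_n_1)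

lemma mult_n_add_assoc_left:
  "M (a + b) \<bullet> W 0 (M (a + b)) (a + b) = W 0 (M a \<bullet> W 0 (M a) a) b \<bullet>
      W (3 * a) (M b \<bullet> W 0 (M b) b) 0 \<bullet> W (2 * a) (B (2 * b) a) b \<bullet> W a (B b a) (a + 2 * b)"
proof -
  have c1: "W (0 + a + 0) (B b a) b \<bullet> W 0 (M a) (0 + (a + b) + b) = W 0 (M a) (0 + (a + b) + b) \<bullet>
      W (0 + 2 * a + 0) (B b a) b"
    by (rule W_commute') (simp_all add: ac_simps)
  have n1: "W (2 * a) (B b a) b \<bullet> W (2 * a) (M b) (a + b) = W (3 * a) (M b) b \<bullet>
      W (2 * a) (B (2 * b) a) b"
  proof -
    have "W (2 * a) (B b a) b \<bullet> W (2 * a) (M b \<otimes> idn a) b = W (2 * a) (idn a \<otimes> M b) b \<bullet>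
        W (2 * a) (B (2 * b) a) b"
      using braid_W_natural[of "M b" "2 * b" b "idn a" a a "2 * a" b] by simp
    then show ?thesis
      by (simp add: W_def tensor_idn_idn)
  qed
  have c2: "W (0 + a + a) (M b) 0 \<bullet> W 0 (M a) (a + 2 * b + 0) = W 0 (M a) (a + b + 0) \<bullet>
      W (0 + 2 * a + a) (M b) 0"
    by (rule W_commute') (simp_all add: ac_simps)
  have "M (a + b) \<bullet> W 0 (M (a + b)) (a + b) = W 0 (M a) b \<bullet> W (2 * a) (M b) 0 \<bullet> W a (B b a) b \<bullet>
      W 0 (M a) (b + (a + b)) \<bullet> W (2 * a) (M b) (a + b) \<bullet> W a (B b a) (b + (a + b))"
    unfolding mult_n_add_W by (simp add: W_comp W_W ac_simps)
  also have "\<dots> = W 0 (M a) b \<bullet> W (2 * a) (M b) 0 \<bullet> W 0 (M a) (a + 2 * b) \<bullet> W (2 * a) (B b a) b \<bullet>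
      W (2 * a) (M b) (a + b) \<bullet> W a (B b a) (a + 2 * b)"
    by (simp add: chain_subst[OF c1] ac_simps)
  also have "\<dots> = W 0 (M a) b \<bullet> W (2 * a) (M b) 0 \<bullet> W 0 (M a) (a + 2 * b) \<bullet> W (3 * a) (M b) b \<bullet>
      W (2 * a) (B (2 * b) a) b \<bullet> W a (B b a) (a + 2 * b)"
    by (simp add: chain_subst[OF n1] ac_simps)
  also have "\<dots> = W 0 (M a) b \<bullet> W 0 (M a) (a + b) \<bullet> W (3 * a) (M b) 0 \<bullet> W (3 * a) (M b) b \<bullet>
      W (2 * a) (B (2 * b) a) b \<bullet> W a (B b a) (a + 2 * b)"
    by (simp add: chain_subst[OF c2] ac_simps)
  finally show ?thesis
    by (simp add: W_comp W_W ac_simps)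
qed

lemma mult_n_add_assoc_right:
  "M (a + b) \<bullet> W (a + b) (M (a + b)) 0 = W 0 (M a \<bullet> W a (M a) 0) b \<bullet>
      W (3 * a) (M b \<bullet> W b (M b) 0) 0 \<bullet> W a (B b (2 * a)) (2 * b) \<bullet> W (a + b + a) (B b a) b"
proof -
  have n2: "W a (B b a) b \<bullet> W (a + b) (M a) b = W a (M a) (b + b) \<bullet> W a (B b (2 * a)) b"
  proof -
    have "W a (B b a) b \<bullet> W a (idn b \<otimes> M a) b = W a (M a \<otimes> idn b) b \<bullet> W a (B b (2 * a)) b"
      using braid_W_natural[of "idn b" b b "M a" "2 * a" a a b] by simp
    then show ?thesis
      by (simp add: W_def tensor_idn_idn)
  qed
  have c3: "W (a + a + 0) (M b) 0 \<bullet> W a (M a) (0 + 2 * b + 0) = W a (M a) (0 + b + 0) \<bullet>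
      W (a + 2 * a + 0) (M b) 0"
    by (rule W_commute') (simp_all add: ac_simps)
  have c4: "W a (B b (2 * a)) (0 + b + 0) \<bullet> W (a + (b + 2 * a) + 0) (M b) 0 =
      W (a + (2 * a + b) + 0) (M b) 0 \<bullet> W a (B b (2 * a)) (0 + 2 * b + 0)"
    by (rule W_commute) (simp_all add: ac_simps)
  have "M (a + b) \<bullet> W (a + b) (M (a + b)) 0 = W 0 (M a) b \<bullet> W (2 * a) (M b) 0 \<bullet> W a (B b a) b \<bullet>
      W (a + b) (M a) b \<bullet> W (a + b + 2 * a) (M b) 0 \<bullet> W (a + b + a) (B b a) b"
    unfolding mult_n_add_W by (simp add: W_comp W_W ac_simps)
  also have "\<dots> = W 0 (M a) b \<bullet> W (2 * a) (M b) 0 \<bullet> W a (M a) (b + b) \<bullet> W a (B b (2 * a)) b \<bullet>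
      W (a + b + 2 * a) (M b) 0 \<bullet> W (a + b + a) (B b a) b"
    by (simp add: chain_subst[OF n2] ac_simps)
  also have "\<dots> = W 0 (M a) b \<bullet> W a (M a) b \<bullet> W (3 * a) (M b) 0 \<bullet> W a (B b (2 * a)) b \<bullet>
      W (a + b + 2 * a) (M b) 0 \<bullet> W (a + b + a) (B b a) b"
    by (simp add: chain_subst[OF c3] ac_simps)
  also have "\<dots> = W 0 (M a) b \<bullet> W a (M a) b \<bullet> W (3 * a) (M b) 0 \<bullet> W (3 * a + b) (M b) 0 \<bullet>
      W a (B b (2 * a)) (2 * b) \<bullet> W (a + b + a) (B b a) b"
    by (simp add: chain_subst[OF c4] ac_simps)
  finally show ?thesis
    by (simp add: W_comp W_W ac_simps)
qed

lemma mult_n_assoc: "M n \<bullet> W 0 (M n) n = M n \<bullet> W n (M n) 0"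
proof (induction n)
  case 0
  show ?case by (simp add: mult_n_0)
next
  case (Suc n)
  have "M 1 \<bullet> W 0 (M 1) 1 = M 1 \<bullet> W 1 (M 1) 0"
    using mult_assoc_W by (simp add: mult_n_1)
  then show ?case
      using mult_n_add_assoc_left[of 1 n] mult_n_add_assoc_right[of 1 n] Suc braid_blocks_hexagon[of
          1 n]
    by (simp add: ac_simps)
qed

lemma mult_n_add_unit_left:
  "M (a + b) \<bullet> W 0 (u (a + b)) (a + b) = W 0 (M a \<bullet> W 0 (u a) a) b \<bullet> W a (M b \<bullet> W 0 (u b) b) 0"
proof -
  have u1: "W 0 (u (a + b)) (a + b) = W 0 (u a) (b + (a + b)) \<bullet> W 0 (u b) (a + b)"
    using W_tensor[of "u a" 0 a "u b" 0 b 0 "a + b"] by (simp add: tpowm_add)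
  have c1: "W (0 + a + 0) (B b a) b \<bullet> W 0 (u a) (0 + (a + b) + b) = W 0 (u a) (0 + (a + b) + b) \<bullet>
      W (0 + 0 + 0) (B b a) b"
    by (rule W_commute') simp_all
  have n1: "W 0 (B b a) b \<bullet> W 0 (u b) (a + b) = W a (u b) b"
  proof -
    have "W 0 (B b a) b \<bullet> W 0 (u b \<otimes> idn a) b = W 0 (idn a \<otimes> u b) b \<bullet> W 0 (B 0 a) b"
      using braid_W_natural[of "u b" 0 b "idn a" a a 0 b] by simp
    then show ?thesis
      by (simp add: W_def tensor_idn_idn)
  qed
  have c2: "W (0 + a + a) (M b) 0 \<bullet> W 0 (u a) (a + 2 * b + 0) = W 0 (u a) (a + b + 0) \<bullet>
      W (0 + 0 + a) (M b) 0"
    by (rule W_commute') simp_all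
  have "M (a + b) \<bullet> W 0 (u (a + b)) (a + b) = W 0 (M a) b \<bullet> W (2 * a) (M b) 0 \<bullet> W a (B b a) b \<bullet>
      W 0 (u a) (b + (a + b)) \<bullet> W 0 (u b) (a + b)"
    unfolding mult_n_add_W u1 by simp
  also have "\<dots> = W 0 (M a) b \<bullet> W (2 * a) (M b) 0 \<bullet> W 0 (u a) (b + (a + b)) \<bullet> W 0 (B b a) b \<bullet>
      W 0 (u b) (a + b)"
    by (simp add: chain_subst[OF c1] chain_subst_last[OF c1])
  also have "\<dots> = W 0 (M a) b \<bullet> W (2 * a) (M b) 0 \<bullet> W 0 (u a) (b + (a + b)) \<bullet> W a (u b) b"
    by (simp add: chain_subst[OF n1] chain_subst_last[OF n1])
  also have "\<dots> = W 0 (M a) b \<bullet> W 0 (u a) (a + b) \<bullet> W a (M b) 0 \<bullet> W a (u b) b"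
    by (simp add: chain_subst[OF c2] chain_subst_last[OF c2])
  finally show ?thesis
    by (simp add: W_comp W_W)
qed

lemma mult_n_add_unit_right:
  "M (a + b) \<bullet> W (a + b) (u (a + b)) 0 = W 0 (M a \<bullet> W a (u a) 0) b \<bullet> W a (M b \<bullet> W b (u b) 0) 0"
proof -
  have u2: "W (a + b) (u (a + b)) 0 = W (a + b) (u a) b \<bullet> W (a + b) (u b) 0"
    using W_tensor[of "u a" 0 a "u b" 0 b "a + b" 0] by (simp add: tpowm_add)
  have n2: "W a (B b a) b \<bullet> W (a + b) (u a) b = W a (u a) (b + b)"
  proof -
    have "W a (B b a) b \<bullet> W a (idn b \<otimes> u a) b = W a (u a \<otimes> idn b) b \<bullet> W a (B b 0) b"
      using braid_W_natural[of "idn b" b b "u a" 0 a a b] by simp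
    then show ?thesis
      by (simp add: W_def tensor_idn_idn)
  qed
  have c3: "W (a + a + 0) (M b) 0 \<bullet> W a (u a) (0 + 2 * b + 0) = W a (u a) (0 + b + 0) \<bullet>
      W (a + 0 + 0) (M b) 0"
    by (rule W_commute') simp_all
  have "M (a + b) \<bullet> W (a + b) (u (a + b)) 0 = W 0 (M a) b \<bullet> W (2 * a) (M b) 0 \<bullet> W a (B b a) b \<bullet>
      W (a + b) (u a) b \<bullet> W (a + b) (u b) 0"
    unfolding mult_n_add_W u2 by simp
  also have "\<dots> = W 0 (M a) b \<bullet> W (2 * a) (M b) 0 \<bullet> W a (u a) (b + b) \<bullet> W (a + b) (u b) 0"
    by (simp add: chain_subst[OF n2] chain_subst_last[OF n2])
  also have "\<dots> = W 0 (M a) b \<bullet> W a (u a) b \<bullet> W a (M b) 0 \<bullet> W (a + b) (u b) 0"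
    by (simp add: chain_subst[OF c3] chain_subst_last[OF c3])
  finally show ?thesis
    by (simp add: W_comp W_W)
qed

lemma mult_n_unit: "M n \<bullet> W 0 (u n) n = idn n \<and> M n \<bullet> W n (u n) 0 = idn n"
proof (induction n)
  case 0
  show ?case by (simp add: mult_n_0)
next
  case (Suc n)
  have "M 1 \<bullet> W 0 (u 1) 1 = idn 1" "M 1 \<bullet> W 1 (u 1) 0 = idn 1"
    using mult_unit_W by (simp_all add: mult_n_1)
  then show ?case
    using Suc mult_n_add_unit_left[of 1 n] mult_n_add_unit_right[of 1 n] by simp
qed

lemma mult_n_unit_left: "M n \<bullet> W 0 (u n) n = idn n"
  using mult_n_unit by blast

lemma mult_n_unit_prefix: "M (Suc k) \<bullet> W 0 (u k) (Suc (Suc k)) = W k m 0 \<bullet> W 0 (B 1 k) 1"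
proof -
  have c1: "W k (B 1 k) 1 \<bullet> W 0 (u k) (Suc (Suc k)) = W 0 (u k) (Suc (Suc k)) \<bullet> W 0 (B 1 k) 1"
    using W_commute'[of "u k" 0 k "B 1 k" "Suc k" "Suc k" 0 0 1] by simp
  have c2: "W (2 * k) m 0 \<bullet> W 0 (u k) (Suc (Suc k)) = W 0 (u k) (Suc k) \<bullet> W k m 0"
    using W_commute'[of "u k" 0 k m 2 1 0 k 0] by simp
  have c3: "W 0 (M k) 1 \<bullet> W 0 (u k) (Suc k) = idn (Suc k)"
  proof -
    have "W 0 (M k) 1 \<bullet> W 0 (u k) (Suc k) = W 0 (M k \<bullet> W 0 (u k) k) 1" by (simp add: W_comp W_W)
    then show ?thesis using mult_n_unit_left[of k] by simp
  qed
  show ?thesis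
    unfolding mult_n_Suc'
    by (simp add: chain_subst[OF c1] chain_subst[OF c2] chain_subst[OF c3] chain_subst_last[OF c1]
        chain_subst_last[OF c2] chain_subst_last[OF c3])
qed

lemma point_append_mult_n:
  assumes "Dom C x = P 0" "Cod C x = P 1"
  shows "W k x 0 \<bullet> M k = M (Suc k) \<bullet> W (Suc (2 * k)) x 0 \<bullet> W k eta k"
proof -
  note [simp] = assms
  have c1: "W k (B 1 k) 1 \<bullet> W (Suc (2 * k)) x 0 = W (Suc (2 * k)) x 0 \<bullet> W k (B 1 k) 0"
    using W_commute[of "B 1 k" "Suc k" "Suc k" x 0 1 k 0 0] by simp
  have n: "W k (B 1 k) 0 \<bullet> W k eta k = W (2 * k) eta 0"
  proof -
    have "B 1 k \<bullet> W 0 eta k = W k eta 0"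
      using braid_natural_P[of eta 0 1 "idn k" k k] by (simp add: W_def)
    then have "W k (B 1 k \<bullet> W 0 eta k) 0 = W k (W k eta 0) 0" by simp
    then show ?thesis by (simp add: W_comp W_W)
  qed
  have u: "W (2 * k) m 0 \<bullet> W (Suc (2 * k)) x 0 \<bullet> W (2 * k) eta 0 = W (2 * k) x 0"
  proof -
    have a: "m \<bullet> W 1 x 0 \<bullet> eta = x"
      by (simp add: points_commute[of eta "Suc 0" x "Suc 0", symmetric]
          chain_subst[OF mult_unit_W(1)])
    have "W (2 * k) m 0 \<bullet> W (Suc (2 * k)) x 0 \<bullet> W (2 * k) eta 0 = W (2 * k) (m \<bullet> W 1 x 0 \<bullet> eta) 0"
      by (simp add: W_comp W_W)
    then show ?thesis using a by simp
  qed
  have c2: "W 0 (M k) 1 \<bullet> W (2 * k) x 0 = W k x 0 \<bullet> M k"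
    using W_commute[of "M k" "2 * k" k x 0 1 0 0 0] by simp
  show ?thesis
    unfolding mult_n_Suc'
    by (simp add: chain_subst[OF c1] chain_subst_last[OF n] chain_subst3_last[OF u]
        chain_subst_last[OF c2])
qed

lemma mult_n_points:
  assumes "Dom C x = P 0" "Cod C x = P 1"
  shows "M n \<bullet> W 0 (tpowm C x n) n = tpowm C (m \<bullet> W 0 x 1) n"
proof (induction n)
  case 0
  show ?case by (simp add: mult_n_0)
next
  case (Suc n)
  note [simp] = assms
  have t: "W 0 (tpowm C x (Suc n)) (Suc n) = W 0 x (n + Suc n) \<bullet> W 0 (tpowm C x n) (Suc n)"
    using W_tensor[of x 0 1 "tpowm C x n" 0 n 0 "Suc n"] by simp
  have c1: "W 1 (B n 1) n \<bullet> W 0 x (Suc (n + n)) = W 0 x (Suc (n + n)) \<bullet> W 0 (B n 1) n"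
    using W_commute'[of x 0 1 "B n 1" "Suc n" "Suc n" 0 0 n] by simp
  have n1: "W 0 (B n 1) n \<bullet> W 0 (tpowm C x n) (Suc n) = W 1 (tpowm C x n) n"
  proof -
    have "B n 1 \<bullet> W 0 (tpowm C x n) 1 = W 1 (tpowm C x n) 0"
      using braid_natural_P[of "tpowm C x n" 0 n i1 1 1] by (simp add: W_def)
    then have "W 0 (B n 1 \<bullet> W 0 (tpowm C x n) 1) n = W 0 (W 1 (tpowm C x n) 0) n" by simp
    then show ?thesis by (simp add: W_comp W_W)
  qed
  have c2: "W 2 (M n) 0 \<bullet> W 0 x (Suc (n + n)) = W 0 x (Suc n) \<bullet> W 1 (M n) 0"
    using W_commute'[of x 0 1 "M n" "2 * n" n 0 1 0] by simp
  have m1: "W 0 m n \<bullet> W 0 x (Suc n) = W 0 (m \<bullet> W 0 x 1) n" by (simp add: W_comp W_W)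
  have m2: "W 1 (M n) 0 \<bullet> W 1 (tpowm C x n) n = W 1 (tpowm C (m \<bullet> W 0 x 1) n) 0"
  proof -
    have "W 1 (M n) 0 \<bullet> W 1 (tpowm C x n) n = W 1 (M n \<bullet> W 0 (tpowm C x n) n) 0"
      by (simp add: W_comp W_W)
    then show ?thesis using Suc by simp
  qed
  have "M (Suc n) \<bullet> W 0 (tpowm C x (Suc n)) (Suc n) = W 0 m n \<bullet> W 2 (M n) 0 \<bullet> W 1 (B n 1) n \<bullet>
      W 0 x (n + Suc n) \<bullet> W 0 (tpowm C x n) (Suc n)"
    unfolding mult_n_Suc t by simp
  also have "\<dots> = W 0 (m \<bullet> W 0 x 1) n \<bullet> W 1 (tpowm C (m \<bullet> W 0 x 1) n) 0"
    by (simp add: chain_subst[OF c1] chain_subst_last[OF n1] chain_subst[OF c2] chain_subst[OF m1]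
        chain_subst_last[OF m2] del: tpowm.simps)
  also have "\<dots> = tpowm C (m \<bullet> W 0 x 1) (Suc n)"
    using W_tensor[of "m \<bullet> W 0 x 1" 1 1 "tpowm C (m \<bullet> W 0 x 1) n" n n 0 0] by simp
  finally show ?case .
qed

lemma mult_assoc_3: "m \<bullet> W 0 m 1 \<bullet> W 2 m 0 = m \<bullet> W 1 m 0 \<bullet> W 1 m 1"
proof -
  have "m \<bullet> W 0 m 1 \<bullet> W 2 m 0 = m \<bullet> W 1 (m \<bullet> W 1 m 0) 0"
    by (simp add: chain_subst[OF mult_assoc_W] W_comp W_W)
  also have "\<dots> = m \<bullet> W 1 (m \<bullet> W 0 m 1) 0"
    using mult_assoc_W by simp
  also have "\<dots> = m \<bullet> W 1 m 0 \<bullet> W 1 m 1"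
    by (simp add: W_comp W_W)
  finally show ?thesis .
qed

definition alg_hom where
  "alg_hom f a c \<longleftrightarrow> Dom C f = P a \<and> Cod C f = P c \<and> f \<bullet> M a = M c \<bullet> (f \<otimes> f) \<and> f \<bullet> u a = u c"

lemma alg_hom_tensor:
  assumes f: "alg_hom f a c" and g: "alg_hom g b d"
  shows "alg_hom (f \<otimes> g) (a + b) (c + d)"
proof -
  have tf: "Dom C f = P a" "Cod C f = P c" and mf: "f \<bullet> M a = M c \<bullet> (f \<otimes> f)" and uf: "f \<bullet> u a = u c"
    using f unfolding alg_hom_def by auto
  have tg: "Dom C g = P b" "Cod C g = P d" and mg: "g \<bullet> M b = M d \<bullet> (g \<otimes> g)" and ug: "g \<bullet> u b = u d"
    using g unfolding alg_hom_def by auto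
  have middle: "(x \<otimes> (Y \<otimes> w)) \<bullet> (x' \<otimes> (Z \<otimes> w')) = (x \<bullet> x') \<otimes> ((Y \<bullet> Z) \<otimes> (w \<bullet> w'))"
    if "Cod C x' = Dom C x" "Cod C w' = Dom C w" "Cod C Z = Dom C Y" for x x' Y Z w w'
    using that by simp
  have swap: "W c (B d c) d \<bullet> ((f \<otimes> g) \<otimes> (f \<otimes> g)) = ((f \<otimes> f) \<otimes> (g \<otimes> g)) \<bullet> W a (B b a) b"
  proof -
    have "B d c \<bullet> (g \<otimes> f) = (f \<otimes> g) \<bullet> B b a"
      using braid_natural_P[of g b d f a c] tf tg by simp
    moreover have "W c (B d c) d \<bullet> (f \<otimes> ((g \<otimes> f) \<otimes> g)) = f \<otimes> ((B d c \<bullet> (g \<otimes> f)) \<otimes> g)"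
      unfolding W_def using middle[of f "idn c" g "idn d" "g \<otimes> f" "B d c"] tf tg by simp
    moreover have "(f \<otimes> ((f \<otimes> g) \<otimes> g)) \<bullet> W a (B b a) b = f \<otimes> (((f \<otimes> g) \<bullet> B b a) \<otimes> g)"
      unfolding W_def using middle[of "idn a" f "idn b" g "B b a" "f \<otimes> g"] tf tg by simp
    ultimately show ?thesis
      by (metis tensor_assoc)
  qed
  have "(f \<otimes> g) \<bullet> M (a + b) = ((M c \<bullet> (f \<otimes> f)) \<otimes> (M d \<bullet> (g \<otimes> g))) \<bullet> W a (B b a) b"
    unfolding mult_n_add using tf tg by (simp add: mf[symmetric] mg[symmetric])
  also have "\<dots> = (M c \<otimes> M d) \<bullet> ((f \<otimes> f) \<otimes> (g \<otimes> g)) \<bullet> W a (B b a) b"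
    using tf tg by (simp flip: interchange)
  also have "\<dots> = (M c \<otimes> M d) \<bullet> W c (B d c) d \<bullet> ((f \<otimes> g) \<otimes> (f \<otimes> g))"
    using swap tf tg by (metis (no_types) comp_assoc' W_dom_cod)
  also have "\<dots> = M (c + d) \<bullet> ((f \<otimes> g) \<otimes> (f \<otimes> g))"
    unfolding mult_n_add using tf tg by simp
  finally show ?thesis
    using tf tg uf ug unfolding alg_hom_def tpowm_add by simp
qed

lemma alg_hom_comp:
  assumes f: "alg_hom f a b" and g: "alg_hom g b c"
  shows "alg_hom (g \<bullet> f) a c"
proof -
  have tf: "Dom C f = P a" "Cod C f = P b" and mf: "f \<bullet> M a = M b \<bullet> (f \<otimes> f)" and uf: "f \<bullet> u a = u b"
    using f unfolding alg_hom_def by auto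
  have tg: "Dom C g = P b" "Cod C g = P c" and mg: "g \<bullet> M b = M c \<bullet> (g \<otimes> g)" and ug: "g \<bullet> u b = u c"
    using g unfolding alg_hom_def by auto
  have "(g \<bullet> f) \<bullet> M a = (g \<bullet> M b) \<bullet> (f \<otimes> f)"
    using tf tg mf by simp
  also have "\<dots> = M c \<bullet> ((g \<bullet> f) \<otimes> (g \<bullet> f))"
    using tf tg mg by simp
  finally show ?thesis
    using tf tg uf ug unfolding alg_hom_def by simp
qed

lemma alg_hom_idn: "alg_hom (idn a) a a"
  unfolding alg_hom_def by simp

lemma alg_hom_W: "alg_hom f p q \<Longrightarrow> alg_hom (W k f r) (k + p + r) (k + q + r)"
  unfolding W_def using alg_hom_tensor alg_hom_idn by (metis add.assoc)

end

section \<open>Hopf algebras with a braided modular pair in involution\<close>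

locale braided_hopf_mpi = braided_algebra_powers C H m eta
  for C :: "('o, 'm) bmcat" and H :: 'o and m eta :: 'm +
  fixes Dl eps S dl sg :: 'm
  assumes hopf: "hopf_algebra C H m eta Dl eps S"
    and braid_H_involutive: "Comp C (Braid C H H) (Braid C H H) = Id C (TObj C H H)"
    and pair: "bmpi C H m eta Dl eps S dl sg"
begin

lemma hopf_P: "hopf_algebra C (P 1) m eta Dl eps S"
  and pair_P: "bmpi C (P 1) m eta Dl eps S dl sg"
  using hopf pair by (simp_all only: One_nat_def P_1)

lemma hopf_dom_cod[simp]:
  "Dom C Dl = P 1" "Cod C Dl = P 2" "Dom C eps = P 1" "Cod C eps = P 0"
  "Dom C S = P 1" "Cod C S = P 1"
  and pair_dom_cod[simp]: "Dom C dl = P 1" "Cod C dl = P 0" "Dom C sg = P 0" "Cod C sg = P 1"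
  using hopf_P pair_P unfolding hopf_algebra_def bmpi_def by simp_all

lemma comult_coassoc: "(Dl \<otimes> i1) \<bullet> Dl = (i1 \<otimes> Dl) \<bullet> Dl"
  and counit_left: "(eps \<otimes> i1) \<bullet> Dl = i1"
  and counit_right: "(i1 \<otimes> eps) \<bullet> Dl = i1"
  and comult_mult_braided: "Dl \<bullet> m = (m \<otimes> m) \<bullet> ((i1 \<otimes> BH \<otimes> i1) \<bullet> (Dl \<otimes> Dl))"
  and comult_unit: "Dl \<bullet> eta = eta \<otimes> eta"
  and counit_mult: "eps \<bullet> m = eps \<otimes> eps"
  and counit_unit: "eps \<bullet> eta = idn 0"
  and antipode_left: "m \<bullet> ((S \<otimes> i1) \<bullet> Dl) = eta \<bullet> eps"
  and antipode_right: "m \<bullet> ((i1 \<otimes> S) \<bullet> Dl) = eta \<bullet> eps"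
  using hopf_P unfolding hopf_algebra_def by simp_all

lemma character_mult: "dl \<bullet> m = dl \<otimes> dl"
  and character_unit: "dl \<bullet> eta = idn 0"
  and comult_grouplike: "Dl \<bullet> sg = sg \<otimes> sg"
  and counit_grouplike: "eps \<bullet> sg = idn 0"
  and character_grouplike: "dl \<bullet> sg = idn 0"
  and modular_involution: "twisted_antipode C Dl S dl \<bullet> twisted_antipode C Dl S dl = m \<bullet>
      ((m \<otimes> i1) \<bullet> (sg \<otimes> i1 \<otimes> (S \<bullet> sg)))"
  using pair_P unfolding bmpi_def by simp_all

lemma braid_involutive[simp]: "BH \<bullet> BH = idn 2"
  using braid_H_involutive by simp

declare idp_def[simp] iter_comult.simps(2)[simp del]

lemma alg_hom_comult: "alg_hom Dl 1 2"
proof -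
  have "M 2 = (m \<otimes> m) \<bullet> W 1 BH 1"
    using mult_n_add[of 1 1] by (simp add: mult_n_1)
  then show ?thesis
    unfolding alg_hom_def using comult_mult_braided comult_unit by (simp add: mult_n_1 W_def)
qed

lemma alg_hom_counit: "alg_hom eps 1 0"
  unfolding alg_hom_def using counit_mult counit_unit by (simp add: mult_n_1 mult_n_0)

abbreviation D where "D n \<equiv> iter_comult C H Dl n"

lemma iter_comult_dom_cod[simp]: "Dom C (D n) = P 1" "Cod C (D n) = P (Suc n)"
  by (induction n) (simp_all add: iter_comult.simps(2))

lemma iter_comult_Suc: "D (Suc k) = W 0 Dl k \<bullet> D k" by (simp add: W_def iter_comult.simps(2))

lemma alg_hom_iter_comult: "alg_hom (D n) 1 (Suc n)"
proof (induction n)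
  case 0 then show ?case using alg_hom_idn[of 1] by simp
next
  case (Suc n)
  have "alg_hom (W 0 Dl n) (Suc n) (Suc (Suc n))" using alg_hom_W[OF alg_hom_comult, of 0 n] by simp
  then show ?case unfolding iter_comult_Suc using alg_hom_comp[OF Suc] by simp
qed

lemma iter_comult_mult: "D k \<bullet> m = M (Suc k) \<bullet> (D k \<otimes> D k)"
  using alg_hom_iter_comult[of k] unfolding alg_hom_def by (simp add: mult_n_1)

lemma comult_coassoc_W: "W 0 Dl 1 \<bullet> Dl = W 1 Dl 0 \<bullet> Dl" using comult_coassoc by (simp add: W_def)

lemma iter_comult_Suc_left: "D (Suc k) = W 1 (D k) 0 \<bullet> Dl"
proof (induction k)
  case 0 then show ?case by (simp add: iter_comult_Suc W_def)
next
  case (Suc k)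
  have c: "W 0 Dl (Suc k) \<bullet> W 1 (D k) 0 = W 2 (D k) 0 \<bullet> W 0 Dl 1"
    using W_commute[of Dl 1 2 "D k" 1 "Suc k" 0 0 0] by simp
  have "D (Suc (Suc k)) = W 0 Dl (Suc k) \<bullet> W 1 (D k) 0 \<bullet> Dl"
    using Suc by (simp add: iter_comult_Suc)
  also have "\<dots> = W 2 (D k) 0 \<bullet> W 0 Dl 1 \<bullet> Dl"
    by (simp add: chain_subst[OF c] chain_subst_last[OF c])
  also have "\<dots> = W 2 (D k) 0 \<bullet> W 1 Dl 0 \<bullet> Dl" using comult_coassoc_W by simp
  also have "\<dots> = W 1 (D (Suc k)) 0 \<bullet> Dl" unfolding Suc by (simp add: W_comp W_W)
  finally show ?case .
qed

lemma iter_comult_W_comult: "W j Dl r \<bullet> D (j + r) = D (Suc (j + r))"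
proof (induction j)
  case 0 then show ?case by (simp add: iter_comult_Suc)
next
  case (Suc j)
  have "W (Suc j) Dl r \<bullet> D (Suc j + r) = W 1 (W j Dl r \<bullet> D (j + r)) 0 \<bullet> Dl"
    using iter_comult_Suc_left[of "j + r"] by (simp add: W_comp W_W)
  also have "\<dots> = D (Suc (Suc j + r))"
    unfolding Suc using iter_comult_Suc_left[of "Suc (j + r)"] by simp
  finally show ?case .
qed

lemma counit_W: "W 0 eps 1 \<bullet> Dl = i1" "W 1 eps 0 \<bullet> Dl = i1"
  using counit_left counit_right by (simp_all add: W_def)

lemma iter_comult_W_counit: "W j eps (Suc r) \<bullet> D (Suc (j + r)) = D (j + r)"
proof (induction j)
  case 0
  have "W 0 eps (Suc r) \<bullet> W 0 Dl r \<bullet> D r = W 0 (W 0 eps 1 \<bullet> Dl) r \<bullet> D r" by (simp add: W_comp W_W)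
  then have "W 0 eps (Suc r) \<bullet> W 0 Dl r \<bullet> D r = D r" using counit_W by simp
  then show ?case by (simp add: iter_comult_Suc)
next
  case (Suc j)
  have "W (Suc j) eps (Suc r) \<bullet> D (Suc (Suc j + r)) = W 1 (W j eps (Suc r) \<bullet> D (Suc (j + r))) 0 \<bullet> Dl"
    using iter_comult_Suc_left[of "Suc (j + r)"] by (simp add: W_comp W_W)
  also have "\<dots> = D (Suc j + r)" unfolding Suc using iter_comult_Suc_left[of "j + r"] by simp
  finally show ?case .
qed

lemma iter_comult_unit: "D n \<bullet> eta = u (Suc n)"
  using alg_hom_iter_comult[of n] unfolding alg_hom_def by simp

lemma iter_comult_grouplike: "D n \<bullet> sg = tpowm C sg (Suc n)"
proof (induction n)
  case 0 then show ?case by simp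
next
  case (Suc n)
  have "D (Suc n) \<bullet> sg = W 0 Dl n \<bullet> tpowm C sg (Suc n)" using Suc by (simp add: iter_comult_Suc)
  also have "\<dots> = tpowm C sg (Suc (Suc n))" using comult_grouplike by (simp add: W_def interchange)
  finally show ?case .
qed

lemma iter_comult_counit_last: "W (Suc k) eps 0 \<bullet> D (Suc k) = D k"
proof -
  have "W (Suc k) eps 0 \<bullet> D (Suc k) = W k (W 1 eps 0 \<bullet> Dl) 0 \<bullet> D k"
    using iter_comult_W_comult[of k 0] by (simp add: W_comp W_W)
  then show ?thesis using counit_W by simp
qed

lemma iter_comult_Suc_right: "D (Suc j) = W 0 (D j) 1 \<bullet> Dl"
proof (induction j)
  case 0 then show ?case by (simp add: iter_comult_Suc)
next
  case (Suc j)
  have "D (Suc (Suc j)) = W j Dl 1 \<bullet> D (Suc j)" using iter_comult_W_comult[of j 1] by simp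
  also have "\<dots> = W 0 (W j Dl 0 \<bullet> D j) 1 \<bullet> Dl" unfolding Suc by (simp add: W_comp W_W)
  also have "\<dots> = W 0 (D (Suc j)) 1 \<bullet> Dl" using iter_comult_W_comult[of j 0] by simp
  finally show ?case .
qed

subsection \<open>The antipode reverses products\<close>

lemma antipode_W: "m \<bullet> W 0 S 1 \<bullet> Dl = eta \<bullet> eps" "m \<bullet> W 1 S 0 \<bullet> Dl = eta \<bullet> eps"
  using antipode_left antipode_right by (simp_all add: W_def)

lemma comult_mult_W: "Dl \<bullet> m = W 0 m 1 \<bullet> W 2 m 0 \<bullet> W 1 BH 1 \<bullet> W 0 Dl 2 \<bullet> W 1 Dl 0"
proof -
  have "m \<otimes> m = W 0 m 1 \<bullet> W 2 m 0" using W_tensor[of m 2 1 m 2 1 0 0] by simp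
  moreover have "Dl \<otimes> Dl = W 0 Dl 2 \<bullet> W 1 Dl 0" using W_tensor[of Dl 1 2 Dl 1 2 0 0] by simp
  ultimately show ?thesis using comult_mult_braided by (simp add: W_def)
qed

lemma comult_unit_W: "Dl \<bullet> eta = W 0 eta 1 \<bullet> eta"
  using comult_unit tensor_points[of eta eta 1] by simp

lemma comult_grouplike_W: "Dl \<bullet> sg = W 0 sg 1 \<bullet> sg"
  using comult_grouplike tensor_points[of sg sg 1] by simp

lemma antipode_unit: "S \<bullet> eta = eta"
proof -
  have "eta = m \<bullet> W 0 S 1 \<bullet> Dl \<bullet> eta"
    using counit_unit by (simp add: chain_subst3[OF antipode_W(1)])
  also have "\<dots> = m \<bullet> W 0 (S \<bullet> eta) 1 \<bullet> eta" using comult_unit_W by (simp add: W_comp)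
  also have "\<dots> = m \<bullet> W 1 eta 0 \<bullet> S \<bullet> eta" using points_commute[of "S \<bullet> eta" 1 eta 1] by simp
  also have "\<dots> = S \<bullet> eta" by (simp add: chain_subst[OF mult_unit_W(2)])
  finally show ?thesis by simp
qed

text \<open>
  Both sides of the next two lemmas are
  \<open>h \<mapsto> (1 \<otimes> m)(\<Delta>(S(h\<^sub>1) h\<^sub>2) \<otimes> S(h\<^sub>3))\<close>, evaluated once via the antipode axiom and once via
  multiplicativity of \<open>\<Delta>\<close>.
\<close>

lemma antipode_convolution_comult_counit:
  "W 1 m 0 \<bullet> W 0 (Dl \<bullet> m \<bullet> W 0 S 1 \<bullet> Dl) 1 \<bullet> W 1 S 0 \<bullet> Dl = W 0 eta 1 \<bullet> S"
proof -
  have z: "Dl \<bullet> m \<bullet> W 0 S 1 \<bullet> Dl = W 0 eta 1 \<bullet> eta \<bullet> eps"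
    by (simp add: chain_subst3_last[OF antipode_W(1)] chain_subst[OF comult_unit_W])
  have a1: "W 0 eps 1 \<bullet> W 1 S 0 = S \<bullet> W 0 eps 1"
    using W_commute[of eps 1 0 S 1 1 0 0 0] by simp
  have a2: "W 1 m 0 \<bullet> W 0 eta 2 = W 0 eta 1 \<bullet> m"
    using W_commute'[of eta 0 1 m 2 1 0 0 0] by simp
  have "W 1 m 0 \<bullet> W 0 (Dl \<bullet> m \<bullet> W 0 S 1 \<bullet> Dl) 1 \<bullet> W 1 S 0 \<bullet> Dl = W 1 m 0 \<bullet> W 0 eta 2 \<bullet> W 0 eta 1 \<bullet>
      W 0 eps 1 \<bullet> W 1 S 0 \<bullet> Dl"
    unfolding z by (simp add: W_comp W_W)
  also have "\<dots> = W 1 m 0 \<bullet> W 0 eta 2 \<bullet> W 0 eta 1 \<bullet> S \<bullet> W 0 eps 1 \<bullet> Dl"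
    by (simp add: chain_subst[OF a1])
  also have "\<dots> = W 0 eta 1 \<bullet> m \<bullet> W 0 eta 1 \<bullet> S"
    using counit_W by (simp add: chain_subst[OF a2])
  also have "\<dots> = W 0 eta 1 \<bullet> S"
    by (simp add: chain_subst[OF mult_unit_W(1)])
  finally show ?thesis .
qed

lemma antipode_convolution_comult_expand:
  "W 1 m 0 \<bullet> W 0 (Dl \<bullet> m \<bullet> W 0 S 1 \<bullet> Dl) 1 \<bullet> W 1 S 0 \<bullet> Dl = W 0 m 1 \<bullet> W 1 BH 0 \<bullet> W 0 (Dl \<bullet> S) 1 \<bullet>
      Dl"
proof -
  have b1: "W 1 Dl 0 \<bullet> W 0 S 1 = W 0 S 2 \<bullet> W 1 Dl 0"
    using W_commute[of S 1 1 Dl 1 2 0 0 0] by simp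
  have z: "Dl \<bullet> m \<bullet> W 0 S 1 \<bullet> Dl = W 0 m 1 \<bullet> W 2 m 0 \<bullet> W 1 BH 1 \<bullet> W 0 (Dl \<bullet> S) 2 \<bullet> W 1 Dl 0 \<bullet> Dl"
    by (simp add: chain_subst[OF comult_mult_W] chain_subst[OF b1] W_comp)
  have c1: "W 1 m 0 \<bullet> W 0 m 2 = W 0 m 1 \<bullet> W 2 m 0"
    using W_commute'[of m 2 1 m 2 1 0 0 0] by simp
  have c2: "W 2 m 0 \<bullet> W 2 m 1 = W 2 m 0 \<bullet> W 3 m 0"
  proof -
    have "W 2 m 0 \<bullet> W 2 m 1 = W 2 (m \<bullet> W 0 m 1) 0"
      by (simp add: W_comp W_W)
    also have "\<dots> = W 2 m 0 \<bullet> W 3 m 0"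
      using mult_assoc_W by (simp add: W_comp W_W)
    finally show ?thesis .
  qed
  have c3: "W 3 m 0 \<bullet> W 1 BH 2 = W 1 BH 1 \<bullet> W 3 m 0"
    using W_commute[of BH 2 2 m 2 1 1 0 0] by simp
  have c4: "W 3 m 0 \<bullet> W 0 (Dl \<bullet> S) 3 = W 0 (Dl \<bullet> S) 2 \<bullet> W 2 m 0"
    using W_commute[of "Dl \<bullet> S" 1 2 m 2 1 0 1 0] by simp
  have c5: "W 0 Dl 1 \<bullet> W 1 S 0 = W 2 S 0 \<bullet> W 0 Dl 1"
    using W_commute[of Dl 1 2 S 1 1 0 0 0] by simp
  have c6: "W 1 Dl 1 \<bullet> W 2 S 0 = W 3 S 0 \<bullet> W 1 Dl 1"
    using W_commute[of Dl 1 2 S 1 1 1 0 0] by simp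
  have d2: "W 0 Dl 1 \<bullet> Dl = D 2"
    by (simp add: iter_comult_Suc)
  have d3: "W 1 Dl 1 \<bullet> D 2 = W 2 Dl 0 \<bullet> D 2"
    using iter_comult_W_comult[of 1 1] iter_comult_W_comult[of 2 0] by simp
  have antipode_tail: "W 2 m 0 \<bullet> W 3 S 0 \<bullet> W 2 Dl 0 \<bullet> D 2 = W 2 eta 0 \<bullet> Dl"
  proof -
    have "W 2 m 0 \<bullet> W 3 S 0 \<bullet> W 2 Dl 0 \<bullet> D 2 = W 2 (m \<bullet> W 1 S 0 \<bullet> Dl) 0 \<bullet> D 2"
      by (simp add: W_comp W_W)
    also have "\<dots> = W 2 eta 0 \<bullet> W 2 eps 0 \<bullet> D 2"
      using antipode_W(2) by (simp add: W_comp)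
    finally show ?thesis
      using iter_comult_counit_last[of 1] by (simp add: iter_comult_Suc)
  qed
  have c7: "W 0 (Dl \<bullet> S) 2 \<bullet> W 2 eta 0 = W 3 eta 0 \<bullet> W 0 (Dl \<bullet> S) 1"
    using W_commute'[of "Dl \<bullet> S" 1 2 eta 0 1 0 1 0] by simp
  have c8: "W 1 BH 1 \<bullet> W 3 eta 0 = W 3 eta 0 \<bullet> W 1 BH 0"
    using W_commute[of BH 2 2 eta 0 1 1 0 0] by simp
  have c9: "W 2 m 0 \<bullet> W 3 eta 0 = idn 3"
  proof -
    have "W 2 m 0 \<bullet> W 3 eta 0 = W 2 (m \<bullet> W 1 eta 0) 0"
      by (simp add: W_comp W_W)
    then show ?thesis
      using mult_unit_W by simp
  qed
  have "W 1 m 0 \<bullet> W 0 (Dl \<bullet> m \<bullet> W 0 S 1 \<bullet> Dl) 1 \<bullet> W 1 S 0 \<bullet> Dl = W 1 m 0 \<bullet> W 0 m 2 \<bullet> W 2 m 1 \<bullet>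
      W 1 BH 2 \<bullet> W 0 (Dl \<bullet> S) 3 \<bullet> W 1 Dl 1 \<bullet> W 0 Dl 1 \<bullet> W 1 S 0 \<bullet> Dl"
    unfolding z by (simp add: W_comp W_W)
  also have "\<dots> = W 0 m 1 \<bullet> W 2 m 0 \<bullet> W 1 BH 1 \<bullet> W 0 (Dl \<bullet> S) 2 \<bullet> W 2 m 0 \<bullet> W 1 Dl 1 \<bullet> W 0 Dl 1 \<bullet>
      W 1 S 0 \<bullet> Dl"
    by (simp add: chain_subst[OF c1] chain_subst[OF c2] chain_subst[OF c3] chain_subst[OF c4])
  also have "\<dots> = W 0 m 1 \<bullet> W 2 m 0 \<bullet> W 1 BH 1 \<bullet> W 0 (Dl \<bullet> S) 2 \<bullet> W 2 m 0 \<bullet> W 3 S 0 \<bullet> W 2 Dl 0 \<bullet> D 2"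
    by (simp add: chain_subst[OF c5] chain_subst[OF c6] chain_subst_last[OF d2]
        chain_subst_last[OF d3])
  also have "\<dots> = W 0 m 1 \<bullet> W 2 m 0 \<bullet> W 1 BH 1 \<bullet> W 0 (Dl \<bullet> S) 2 \<bullet> W 2 eta 0 \<bullet> Dl"
    by (simp add: chain_subst4_last[OF antipode_tail])
  also have "\<dots> = W 0 m 1 \<bullet> W 1 BH 0 \<bullet> W 0 (Dl \<bullet> S) 1 \<bullet> Dl"
    by (simp add: chain_subst[OF c7] chain_subst[OF c8] chain_subst[OF c9])
  finally show ?thesis .
qed

lemma antipode_comult_absorb: "W 0 m 1 \<bullet> W 1 BH 0 \<bullet> W 0 (Dl \<bullet> S) 1 \<bullet> Dl = W 0 eta 1 \<bullet> S"
  using antipode_convolution_comult_counit antipode_convolution_comult_expand by simp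

text \<open>
  \<open>comult2\<close> is the comultiplication of the braided tensor product coalgebra \<open>H \<otimes> H\<close> and
  \<open>conv\<close> the convolution product on morphisms \<open>H \<otimes> H \<rightarrow> H\<close>. Both \<open>S \<circ> m\<close> and
  \<open>m \<circ> (S \<otimes> S) \<circ> \<psi>\<close> are convolution inverses of \<open>m\<close>, hence equal.
\<close>

definition comult2 where "comult2 = W 1 BH 1 \<bullet> W 0 Dl 2 \<bullet> W 1 Dl 0"

lemma comult2_dom_cod[simp]: "Dom C comult2 = P 2" "Cod C comult2 = P 4"
  unfolding comult2_def by simp_all

lemma counit_braid: "W 0 eps 1 \<bullet> BH = W 1 eps 0" "W 1 eps 0 \<bullet> BH = W 0 eps 1"
    using braid_natural_P[of i1 1 1 eps 1 0] braid_natural_P[of eps 1 0 i1 1 1]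
    by (simp_all add: W_def)

lemma comult2_coassoc: "W 0 comult2 2 \<bullet> comult2 = W 2 comult2 0 \<bullet> comult2"
proof -
  have n1: "W 1 Dl 2 \<bullet> W 1 BH 1 = W 1 (B 1 2) 1 \<bullet> W 2 Dl 1"
  proof -
    have "W 0 Dl 1 \<bullet> BH = B 1 2 \<bullet> W 1 Dl 0"
      using braid_natural_P[of i1 1 1 Dl 1 2] by (simp add: W_def)
    then have "W 1 (W 0 Dl 1 \<bullet> BH) 1 = W 1 (B 1 2 \<bullet> W 1 Dl 0) 1" by simp
    then show ?thesis by (simp add: W_comp W_W)
  qed
  have c1: "W 0 Dl 4 \<bullet> W 1 (B 1 2) 1 = W 2 (B 1 2) 1 \<bullet> W 0 Dl 4"
    using W_commute[of Dl 1 2 "B 1 2" 3 3 0 0 1] by simp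
  have c2: "W 2 Dl 1 \<bullet> W 0 Dl 2 = W 0 Dl 3 \<bullet> W 1 Dl 1"
    using W_commute'[of Dl 1 2 Dl 1 2 0 0 1] by simp
  have d2: "W 0 Dl 1 \<bullet> Dl = D 2" "W 1 Dl 0 \<bullet> Dl = D 2"
    using iter_comult_W_comult[of 1 0] by (simp_all add: iter_comult_Suc)
  have "W 0 comult2 2 \<bullet> comult2 = W 1 BH 3 \<bullet> W 0 Dl 4 \<bullet> W 1 Dl 2 \<bullet> W 1 BH 1 \<bullet> W 0 Dl 2 \<bullet> W 1 Dl 0"
    unfolding comult2_def by (simp add: W_comp W_W)
  also have "\<dots> = W 1 BH 3 \<bullet> W 2 (B 1 2) 1 \<bullet> W 0 Dl 4 \<bullet> W 0 Dl 3 \<bullet> W 1 Dl 1 \<bullet> W 1 Dl 0"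
    by (simp add: chain_subst[OF n1] chain_subst[OF c1] chain_subst[OF c2])
  also have "\<dots> = W 1 BH 3 \<bullet> W 3 BH 1 \<bullet> W 2 BH 2 \<bullet> W 0 (D 2) 3 \<bullet> W 1 (D 2) 0"
    unfolding braid_1_2 braid_2_1 d2[symmetric] by (simp add: W_comp W_W)
  finally have L: "W 0 comult2 2 \<bullet> comult2 = W 1 BH 3 \<bullet> W 3 BH 1 \<bullet> W 2 BH 2 \<bullet> W 0 (D 2) 3 \<bullet>
      W 1 (D 2) 0" .
  have c3: "W 3 Dl 0 \<bullet> W 1 BH 1 = W 1 BH 2 \<bullet> W 3 Dl 0"
    using W_commute'[of BH 2 2 Dl 1 2 1 0 0] by simp
  have n2: "W 2 Dl 2 \<bullet> W 1 BH 2 = W 1 (B 2 1) 2 \<bullet> W 1 Dl 3"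
  proof -
    have "W 1 Dl 0 \<bullet> BH = B 2 1 \<bullet> W 0 Dl 1"
      using braid_natural_P[of Dl 1 2 i1 1 1] by (simp add: W_def)
    then have "W 1 (W 1 Dl 0 \<bullet> BH) 2 = W 1 (B 2 1 \<bullet> W 0 Dl 1) 2" by simp
    then show ?thesis by (simp add: W_comp W_W)
  qed
  have c4: "W 3 Dl 0 \<bullet> W 0 Dl 2 = W 0 Dl 3 \<bullet> W 2 Dl 0"
    using W_commute'[of Dl 1 2 Dl 1 2 0 1 0] by simp
  have "W 2 comult2 0 \<bullet> comult2 = W 3 BH 1 \<bullet> W 2 Dl 2 \<bullet> W 3 Dl 0 \<bullet> W 1 BH 1 \<bullet> W 0 Dl 2 \<bullet> W 1 Dl 0"
    unfolding comult2_def by (simp add: W_comp W_W)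
  also have "\<dots> = W 3 BH 1 \<bullet> W 1 (B 2 1) 2 \<bullet> W 1 Dl 3 \<bullet> W 0 Dl 3 \<bullet> W 2 Dl 0 \<bullet> W 1 Dl 0"
    by (simp add: chain_subst[OF c3] chain_subst[OF n2] chain_subst[OF c4])
  also have "\<dots> = W 3 BH 1 \<bullet> W 1 BH 3 \<bullet> W 2 BH 2 \<bullet> W 0 (D 2) 3 \<bullet> W 1 (D 2) 0"
    unfolding braid_1_2 braid_2_1 d2(2)[symmetric] by (simp add: W_comp W_W)
  finally have R: "W 2 comult2 0 \<bullet> comult2 = W 3 BH 1 \<bullet> W 1 BH 3 \<bullet> W 2 BH 2 \<bullet> W 0 (D 2) 3 \<bullet>
      W 1 (D 2) 0" .
  have c5: "W 1 BH 3 \<bullet> W 3 BH 1 = W 3 BH 1 \<bullet> W 1 BH 3"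
    using W_commute[of BH 2 2 BH 2 2 1 0 1] by simp
  show ?thesis unfolding L R by (simp add: chain_subst[OF c5])
qed

definition counit2 where "counit2 = eps \<bullet> W 0 eps 1"

lemma counit2_dom_cod[simp]: "Dom C counit2 = P 2" "Cod C counit2 = P 0"
  unfolding counit2_def by simp_all

lemma comult2_counit_left: "W 0 counit2 2 \<bullet> comult2 = idn 2"
proof -
  have c1: "W 0 eps 3 \<bullet> W 1 BH 1 = W 0 BH 1 \<bullet> W 0 eps 3"
    using W_commute[of eps 1 0 BH 2 2 0 0 1] by simp
  have a1: "W 0 eps 2 \<bullet> W 0 BH 1 = W 1 eps 1"
  proof -
    have "W 0 (W 0 eps 1 \<bullet> BH) 1 = W 0 (W 1 eps 0) 1" using counit_braid by simp
    then show ?thesis by (simp add: W_comp W_W)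
  qed
  have a2: "W 0 eps 3 \<bullet> W 0 Dl 2 = idn 3"
  proof -
    have "W 0 (W 0 eps 1 \<bullet> Dl) 2 = idn 3" using counit_W by simp
    then show ?thesis by (simp add: W_comp W_W)
  qed
  have a3: "W 1 eps 1 \<bullet> W 1 Dl 0 = idn 2"
  proof -
    have "W 1 (W 0 eps 1 \<bullet> Dl) 0 = idn 2" using counit_W by simp
    then show ?thesis by (simp add: W_comp W_W)
  qed
  have "W 0 counit2 2 \<bullet> comult2 = W 0 eps 2 \<bullet> W 0 eps 3 \<bullet> W 1 BH 1 \<bullet> W 0 Dl 2 \<bullet> W 1 Dl 0"
    unfolding counit2_def comult2_def by (simp add: W_comp W_W)
  also have "\<dots> = idn 2"
    by (simp add: chain_subst[OF c1] chain_subst[OF a1] chain_subst[OF a2] chain_subst_last[OF a3])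
  finally show ?thesis .
qed

lemma comult2_counit_right: "W 2 counit2 0 \<bullet> comult2 = idn 2"
proof -
  have b1: "W 2 eps 1 \<bullet> W 1 BH 1 = W 1 eps 2"
  proof -
    have "W 1 (W 1 eps 0 \<bullet> BH) 1 = W 1 (W 0 eps 1) 1" using counit_braid by simp
    then show ?thesis by (simp add: W_comp W_W)
  qed
  have c2: "W 2 eps 0 \<bullet> W 1 eps 2 = W 1 eps 1 \<bullet> W 3 eps 0"
    using W_commute'[of eps 1 0 eps 1 0 1 1 0] by simp
  have c3: "W 3 eps 0 \<bullet> W 0 Dl 2 = W 0 Dl 1 \<bullet> W 2 eps 0"
    using W_commute'[of Dl 1 2 eps 1 0 0 1 0] by simp
  have b2: "W 2 eps 0 \<bullet> W 1 Dl 0 = idn 2"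
  proof -
    have "W 1 (W 1 eps 0 \<bullet> Dl) 0 = idn 2" using counit_W by simp
    then show ?thesis by (simp add: W_comp W_W)
  qed
  have b3: "W 1 eps 1 \<bullet> W 0 Dl 1 = idn 2"
  proof -
    have "W 0 (W 1 eps 0 \<bullet> Dl) 1 = idn 2" using counit_W by simp
    then show ?thesis by (simp add: W_comp W_W)
  qed
  have "W 2 counit2 0 \<bullet> comult2 = W 2 eps 0 \<bullet> W 2 eps 1 \<bullet> W 1 BH 1 \<bullet> W 0 Dl 2 \<bullet> W 1 Dl 0"
    unfolding counit2_def comult2_def by (simp add: W_comp W_W)
  also have "\<dots> = idn 2"
    by (simp add: chain_subst[OF b1] chain_subst[OF c2] chain_subst[OF c3] chain_subst[OF b3]
        chain_subst_last[OF b3] chain_subst_last[OF b2])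
  finally show ?thesis .
qed

lemma braid_comult_W: "W 0 BH (Suc r) \<bullet> W 1 BH r \<bullet> W 0 Dl (Suc r) = W 1 Dl r \<bullet> W 0 BH r"
proof -
  have n: "B 2 1 \<bullet> W 0 Dl 1 = W 1 Dl 0 \<bullet> BH"
    using braid_natural_P[of Dl 1 2 i1 1 1] by (simp add: W_def)
  have "W 0 BH (Suc r) \<bullet> W 1 BH r \<bullet> W 0 Dl (Suc r) = W 0 (B 2 1 \<bullet> W 0 Dl 1) r"
    unfolding braid_2_1 by (simp add: W_comp W_W)
  also have "\<dots> = W 1 Dl r \<bullet> W 0 BH r"
    unfolding n by (simp add: W_comp W_W)
  finally show ?thesis .
qed

lemma comult_mult_comult2: "Dl \<bullet> m = W 0 m 1 \<bullet> W 2 m 0 \<bullet> comult2"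
  unfolding comult2_def using comult_mult_W by simp

lemma counit_mult_counit2: "eps \<bullet> m = counit2"
  using counit_mult W_tensor'[of eps 1 0 eps 1 0 0 0] unfolding counit2_def by (simp add: W_def)

definition conv where "conv f g = m \<bullet> W 0 f 1 \<bullet> W 2 g 0 \<bullet> comult2"

lemma conv_unit_right: "Dom C f = P 2 \<Longrightarrow> Cod C f = P 1 \<Longrightarrow> conv f (eta \<bullet> counit2) = f"
proof -
  assume t: "Dom C f = P 2" "Cod C f = P 1"
  have c: "W 0 f 1 \<bullet> W 2 eta 0 = W 1 eta 0 \<bullet> f"
    using W_commute[of f 2 1 eta 0 1 0 0 0] t by simp
  have "conv f (eta \<bullet> counit2) = m \<bullet> W 0 f 1 \<bullet> W 2 eta 0 \<bullet> W 2 counit2 0 \<bullet> comult2"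
    unfolding conv_def using t by (simp add: W_comp)
  also have "\<dots> = m \<bullet> W 1 eta 0 \<bullet> f"
    using t comult2_counit_left comult2_counit_right
    by (simp add: chain_subst[OF c] chain_subst_last[OF c])
  also have "\<dots> = f" using t mult_unit_W by (simp add: chain_subst[OF mult_unit_W(2)])
  finally show ?thesis .
qed

lemma conv_unit_left: "Dom C g = P 2 \<Longrightarrow> Cod C g = P 1 \<Longrightarrow> conv (eta \<bullet> counit2) g = g"
proof -
  assume t: "Dom C g = P 2" "Cod C g = P 1"
  have c: "W 0 counit2 1 \<bullet> W 2 g 0 = g \<bullet> W 0 counit2 2"
    using W_commute[of counit2 2 0 g 2 1 0 0 0] t by simp
  have "conv (eta \<bullet> counit2) g = m \<bullet> W 0 eta 1 \<bullet> W 0 counit2 1 \<bullet> W 2 g 0 \<bullet> comult2"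
    unfolding conv_def using t by (simp add: W_comp)
  also have "\<dots> = m \<bullet> W 0 eta 1 \<bullet> g"
    using t comult2_counit_left comult2_counit_right
    by (simp add: chain_subst[OF c] chain_subst_last[OF c])
  also have "\<dots> = g" using t mult_unit_W by (simp add: chain_subst[OF mult_unit_W(1)])
  finally show ?thesis .
qed

lemma conv_assoc:
  assumes t: "Dom C f = P 2" "Cod C f = P 1" "Dom C g = P 2" "Cod C g = P 1" "Dom C h =
      P 2" "Cod C h = P 1"
  shows "conv (conv f g) h = conv f (conv g h)"
proof -
  have c1: "W 0 comult2 1 \<bullet> W 2 h 0 = W 4 h 0 \<bullet> W 0 comult2 2"
    using W_commute[of comult2 2 4 h 2 1 0 0 0] t by simp
  have c2: "W 0 f 1 \<bullet> W 2 m 0 = W 1 m 0 \<bullet> W 0 f 2"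
    using W_commute[of f 2 1 m 2 1 0 0 0] t by simp
  have "conv (conv f g) h = m \<bullet> W 0 m 1 \<bullet> W 0 f 2 \<bullet> W 2 g 1 \<bullet> W 0 comult2 1 \<bullet> W 2 h 0 \<bullet> comult2"
    unfolding conv_def using t by (simp add: W_comp W_W)
  also have "\<dots> = m \<bullet> W 1 m 0 \<bullet> W 0 f 2 \<bullet> W 2 g 1 \<bullet> W 4 h 0 \<bullet> W 0 comult2 2 \<bullet> comult2"
    using t by (simp add: chain_subst[OF c1] chain_subst[OF mult_assoc_W])
  also have "\<dots> = m \<bullet> W 1 m 0 \<bullet> W 0 f 2 \<bullet> W 2 g 1 \<bullet> W 4 h 0 \<bullet> W 2 comult2 0 \<bullet> comult2"
    using comult2_coassoc by simp
  also have "\<dots> = m \<bullet> W 0 f 1 \<bullet> W 2 m 0 \<bullet> W 2 g 1 \<bullet> W 4 h 0 \<bullet> W 2 comult2 0 \<bullet> comult2"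
    using t by (simp add: chain_subst[OF c2[symmetric]])
  also have "\<dots> = conv f (conv g h)"
    unfolding conv_def using t by (simp add: W_comp W_W)
  finally show ?thesis .
qed

lemma conv_mult_antipode_mult: "conv m (S \<bullet> m) = eta \<bullet> counit2"
proof -
  have c: "W 0 m 1 \<bullet> W 2 S 0 = W 1 S 0 \<bullet> W 0 m 1"
    using W_commute[of m 2 1 S 1 1 0 0 0] by simp
  have "conv m (S \<bullet> m) = m \<bullet> W 1 S 0 \<bullet> W 0 m 1 \<bullet> W 2 m 0 \<bullet> comult2"
    unfolding conv_def by (simp add: W_comp chain_subst[OF c])
  also have "\<dots> = m \<bullet> W 1 S 0 \<bullet> Dl \<bullet> m" using comult_mult_comult2 by simp
  also have "\<dots> = eta \<bullet> eps \<bullet> m" by (simp add: chain_subst3[OF antipode_W(2)])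
  finally show ?thesis using counit_mult_counit2 by simp
qed

definition mult_op_antipode where "mult_op_antipode = m \<bullet> W 0 S 1 \<bullet> W 1 S 0 \<bullet> BH"

lemma mult_op_antipode_dom_cod[simp]: "Dom C mult_op_antipode = P 2" "Cod C mult_op_antipode = P 1"
  unfolding mult_op_antipode_def by simp_all

lemma conv_mult_op_antipode_mult: "conv mult_op_antipode m = eta \<bullet> counit2"
proof -
  have e1: "W 0 BH 1 \<bullet> W 2 m 0 = W 2 m 0 \<bullet> W 0 BH 2"
    using W_commute[of BH 2 2 m 2 1 0 0 0] by simp
  have e2': "W 1 S 1 \<bullet> W 2 m 0 = W 2 m 0 \<bullet> W 1 S 2"
    using W_commute[of S 1 1 m 2 1 1 0 0] by simp
  have e3: "W 0 S 2 \<bullet> W 2 m 0 = W 2 m 0 \<bullet> W 0 S 3"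
    using W_commute[of S 1 1 m 2 1 0 1 0] by simp
  have e5: "W 1 m 1 \<bullet> W 0 S 3 = W 0 S 2 \<bullet> W 1 m 1"
    using W_commute'[of S 1 1 m 2 1 0 0 1] by simp
  have ant: "W 1 m 1 \<bullet> W 1 S 2 \<bullet> W 1 Dl 1 = W 1 eta 1 \<bullet> W 1 eps 1"
  proof -
    have "W 1 m 1 \<bullet> W 1 S 2 \<bullet> W 1 Dl 1 = W 1 (m \<bullet> W 0 S 1 \<bullet> Dl) 1" by (simp add: W_comp W_W)
    also have "\<dots> = W 1 eta 1 \<bullet> W 1 eps 1" using antipode_W by (simp add: W_comp)
    finally show ?thesis .
  qed
  have e6: "W 0 S 2 \<bullet> W 1 eta 1 = W 1 eta 1 \<bullet> W 0 S 1"
    using W_commute[of S 1 1 eta 0 1 0 0 1] by simp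
  have un: "W 1 m 0 \<bullet> W 1 eta 1 = idn 2"
  proof -
    have "W 1 m 0 \<bullet> W 1 eta 1 = W 1 (m \<bullet> W 0 eta 1) 0" by (simp add: W_comp W_W)
    then show ?thesis using mult_unit_W by simp
  qed
  have eb: "W 1 eps 1 \<bullet> W 0 BH 1 = W 0 eps 2"
  proof -
    have "W 0 (W 1 eps 0 \<bullet> BH) 1 = W 0 (W 0 eps 1) 1" using counit_braid by simp
    then show ?thesis by (simp add: W_comp W_W)
  qed
  have e7: "W 0 eps 2 \<bullet> W 1 Dl 0 = Dl \<bullet> W 0 eps 1"
    using W_commute[of eps 1 0 Dl 1 2 0 0 0] by simp
  have "conv mult_op_antipode m = m \<bullet> W 0 m 1 \<bullet> W 0 S 2 \<bullet> W 1 S 1 \<bullet> W 0 BH 1 \<bullet> W 2 m 0 \<bullet> W 1 BH 1 \<bullet>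
      W 0 Dl 2 \<bullet> W 1 Dl 0"
    unfolding conv_def mult_op_antipode_def comult2_def by (simp add: W_comp W_W)
  also have "\<dots> = m \<bullet> W 0 m 1 \<bullet> W 2 m 0 \<bullet> W 0 S 3 \<bullet> W 1 S 2 \<bullet> W 0 BH 2 \<bullet> W 1 BH 1 \<bullet> W 0 Dl 2 \<bullet>
      W 1 Dl 0"
    by (simp add: chain_subst[OF e1] chain_subst[OF e2'] chain_subst[OF e3])
  also have "\<dots> = m \<bullet> W 1 m 0 \<bullet> W 1 m 1 \<bullet> W 0 S 3 \<bullet> W 1 S 2 \<bullet> W 0 BH 2 \<bullet> W 1 BH 1 \<bullet> W 0 Dl 2 \<bullet>
      W 1 Dl 0"
    by (simp add: chain_subst3[OF mult_assoc_3])
  also have "\<dots> = m \<bullet> W 1 m 0 \<bullet> W 0 S 2 \<bullet> W 1 m 1 \<bullet> W 1 S 2 \<bullet> W 1 Dl 1 \<bullet> W 0 BH 1 \<bullet> W 1 Dl 0"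
    by (simp add: chain_subst[OF e5] chain_subst3[OF braid_comult_W[of 1]])
  also have "\<dots> = m \<bullet> W 1 m 0 \<bullet> W 0 S 2 \<bullet> W 1 eta 1 \<bullet> W 1 eps 1 \<bullet> W 0 BH 1 \<bullet> W 1 Dl 0"
    by (simp add: chain_subst3[OF ant])
  also have "\<dots> = m \<bullet> W 0 S 1 \<bullet> W 1 eps 1 \<bullet> W 0 BH 1 \<bullet> W 1 Dl 0"
    by (simp add: chain_subst[OF e6] chain_subst[OF un])
  also have "\<dots> = m \<bullet> W 0 S 1 \<bullet> Dl \<bullet> W 0 eps 1"
    by (simp add: chain_subst[OF eb] chain_subst_last[OF e7])
  also have "\<dots> = eta \<bullet> counit2" unfolding counit2_def by (simp add: chain_subst3[OF antipode_W(1)])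
  finally show ?thesis .
qed

lemma antipode_anti_mult: "S \<bullet> m = m \<bullet> W 0 S 1 \<bullet> W 1 S 0 \<bullet> BH"
proof -
  have "mult_op_antipode = conv mult_op_antipode (eta \<bullet> counit2)"
    using conv_unit_right[of mult_op_antipode] by simp
  also have "\<dots> = conv mult_op_antipode (conv m (S \<bullet> m))" using conv_mult_antipode_mult by simp
  also have "\<dots> = conv (conv mult_op_antipode m) (S \<bullet> m)"
    using conv_assoc[of mult_op_antipode m "S \<bullet> m"] by simp
  also have "\<dots> = S \<bullet> m" using conv_mult_op_antipode_mult conv_unit_left[of "S \<bullet> m"] by simp
  finally show ?thesis unfolding mult_op_antipode_def by simp
qed

abbreviation St where "St \<equiv> twisted_antipode C Dl S dl"

definition twist where "twist = W 0 dl 1 \<bullet> Dl"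

lemma twist_dom_cod[simp]: "Dom C twist = P 1" "Cod C twist = P 1" unfolding twist_def by simp_all

lemma twisted_antipode_twist: "St = S \<bullet> twist"
  unfolding twisted_antipode_def twist_def
  using W_tensor'[of dl 1 0 S 1 1 0 0] by (simp add: W_def)

lemma twisted_antipode_dom_cod[simp]: "Dom C St = P 1" "Cod C St = P 1"
  unfolding twisted_antipode_twist by simp_all

lemma character_braid: "W 0 dl 1 \<bullet> BH = W 1 dl 0" "W 1 dl 0 \<bullet> BH = W 0 dl 1"
  using braid_natural_P[of i1 1 1 dl 1 0] braid_natural_P[of dl 1 0 i1 1 1] by (simp_all add: W_def)

lemma character_mult_W: "dl \<bullet> m = dl \<bullet> W 0 dl 1"
  using character_mult W_tensor'[of dl 1 0 dl 1 0 0 0] by (simp add: W_def)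

lemma twist_mult: "twist \<bullet> m = m \<bullet> W 0 twist 1 \<bullet> W 1 twist 0"
proof -
  have a: "W 0 dl 1 \<bullet> W 0 m 1 = W 0 dl 1 \<bullet> W 0 dl 2"
  proof -
    have "W 0 (dl \<bullet> m) 1 = W 0 (dl \<bullet> W 0 dl 1) 1" using character_mult_W by simp
    then show ?thesis by (simp add: W_comp W_W)
  qed
  have c1: "W 0 dl 2 \<bullet> W 2 m 0 = W 1 m 0 \<bullet> W 0 dl 3"
    using W_commute[of dl 1 0 m 2 1 0 1 0] by simp
  have c2: "W 0 dl 1 \<bullet> W 1 m 0 = m \<bullet> W 0 dl 2"
    using W_commute[of dl 1 0 m 2 1 0 0 0] by simp
  have c3: "W 0 dl 3 \<bullet> W 1 BH 1 = W 0 BH 1 \<bullet> W 0 dl 3"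
    using W_commute[of dl 1 0 BH 2 2 0 0 1] by simp
  have b: "W 0 dl 2 \<bullet> W 0 BH 1 = W 1 dl 1"
  proof -
    have "W 0 (W 0 dl 1 \<bullet> BH) 1 = W 0 (W 1 dl 0) 1" using character_braid by simp
    then show ?thesis by (simp add: W_comp W_W)
  qed
  have c4': "W 1 dl 1 \<bullet> W 0 (W 0 dl 1 \<bullet> Dl) 2 = W 0 (W 0 dl 1 \<bullet> Dl) 1 \<bullet> W 1 dl 1"
    using W_commute'[of "W 0 dl 1 \<bullet> Dl" 1 1 dl 1 0 0 0 1] by simp
  have c4: "W 1 dl 1 \<bullet> W 0 dl 3 \<bullet> W 0 Dl 2 = W 0 dl 2 \<bullet> W 0 Dl 1 \<bullet> W 1 dl 1"
    using c4' by (simp add: W_comp W_W)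
  have "twist \<bullet> m = W 0 dl 1 \<bullet> W 0 dl 2 \<bullet> W 2 m 0 \<bullet> W 1 BH 1 \<bullet> W 0 Dl 2 \<bullet> W 1 Dl 0"
    unfolding twist_def by (simp add: comult_mult_W chain_subst[OF a])
  also have "\<dots> = m \<bullet> W 0 dl 2 \<bullet> W 0 dl 3 \<bullet> W 1 BH 1 \<bullet> W 0 Dl 2 \<bullet> W 1 Dl 0"
    by (simp add: chain_subst[OF c1] chain_subst[OF c2])
  also have "\<dots> = m \<bullet> W 1 dl 1 \<bullet> W 0 dl 3 \<bullet> W 0 Dl 2 \<bullet> W 1 Dl 0"
    by (simp add: chain_subst[OF c3] chain_subst[OF b])
  also have "\<dots> = m \<bullet> W 0 twist 1 \<bullet> W 1 twist 0"
    unfolding twist_def by (simp add: chain_subst3[OF c4] W_comp W_W)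
  finally show ?thesis .
qed

lemma twisted_antipode_anti_mult: "St \<bullet> m = m \<bullet> W 0 St 1 \<bullet> W 1 St 0 \<bullet> BH"
proof -
  have n: "BH \<bullet> W 0 twist 1 \<bullet> W 1 twist 0 = W 0 twist 1 \<bullet> W 1 twist 0 \<bullet> BH"
  proof -
    have t: "twist \<otimes> twist = W 0 twist 1 \<bullet> W 1 twist 0"
      using W_tensor[of twist 1 1 twist 1 1 0 0] by simp
    have nb: "BH \<bullet> (twist \<otimes> twist) = (twist \<otimes> twist) \<bullet> BH"
      using braid_natural_P[of twist 1 1 twist 1 1] by simp
    show ?thesis using nb[unfolded t] by simp
  qed
  have c: "W 1 S 0 \<bullet> W 0 twist 1 = W 0 twist 1 \<bullet> W 1 S 0"
    using W_commute'[of twist 1 1 S 1 1 0 0 0] by simp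
  have "St \<bullet> m = S \<bullet> m \<bullet> W 0 twist 1 \<bullet> W 1 twist 0"
    unfolding twisted_antipode_twist by (simp add: twist_mult)
  also have "\<dots> = m \<bullet> W 0 S 1 \<bullet> W 1 S 0 \<bullet> BH \<bullet> W 0 twist 1 \<bullet> W 1 twist 0"
    by (simp add: chain_subst[OF antipode_anti_mult])
  also have "\<dots> = m \<bullet> W 0 S 1 \<bullet> W 1 S 0 \<bullet> W 0 twist 1 \<bullet> W 1 twist 0 \<bullet> BH"
    by (simp add: chain_subst3_last[OF n])
  also have "\<dots> = m \<bullet> W 0 St 1 \<bullet> W 1 St 0 \<bullet> BH"
    unfolding twisted_antipode_twist by (simp add: chain_subst[OF c] W_comp)
  finally show ?thesis .
qed

lemma twist_comult: "W 0 twist 1 \<bullet> Dl = Dl \<bullet> twist"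
proof -
  have c: "W 0 dl 2 \<bullet> W 1 Dl 0 = Dl \<bullet> W 0 dl 1"
    using W_commute[of dl 1 0 Dl 1 2 0 0 0] by simp
  have "W 0 twist 1 \<bullet> Dl = W 0 dl 2 \<bullet> W 0 Dl 1 \<bullet> Dl" unfolding twist_def by (simp add: W_comp W_W)
  also have "\<dots> = W 0 dl 2 \<bullet> W 1 Dl 0 \<bullet> Dl" using comult_coassoc_W by simp
  also have "\<dots> = Dl \<bullet> twist" unfolding twist_def by (simp add: chain_subst[OF c])
  finally show ?thesis .
qed

lemma twisted_antipode_comult_absorb: "W 0 m 1 \<bullet> W 1 BH 0 \<bullet> W 0 (Dl \<bullet> St) 1 \<bullet> Dl = W 0 eta 1 \<bullet> St"
proof -
  have "W 0 m 1 \<bullet> W 1 BH 0 \<bullet> W 0 (Dl \<bullet> St) 1 \<bullet> Dl = W 0 m 1 \<bullet> W 1 BH 0 \<bullet> W 0 (Dl \<bullet> S) 1 \<bullet>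
      W 0 twist 1 \<bullet> Dl"
    unfolding twisted_antipode_twist by (simp add: W_comp)
  also have "\<dots> = W 0 m 1 \<bullet> W 1 BH 0 \<bullet> W 0 (Dl \<bullet> S) 1 \<bullet> Dl \<bullet> twist" using twist_comult by simp
  also have "\<dots> = W 0 eta 1 \<bullet> S \<bullet> twist" by (simp add: chain_subst4[OF antipode_comult_absorb])
  finally show ?thesis unfolding twisted_antipode_twist by simp
qed

lemma twist_unit: "twist \<bullet> eta = eta"
proof -
  have a: "W 0 dl 1 \<bullet> W 0 eta 1 = i1" using character_unit by (simp add: comp_W)
  show ?thesis unfolding twist_def using comult_unit_W by (simp add: chain_subst[OF a])
qed

lemma twist_grouplike: "twist \<bullet> sg = sg"
proof -
  have a: "W 0 dl 1 \<bullet> W 0 sg 1 = i1" using character_grouplike by (simp add: comp_W)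
  show ?thesis unfolding twist_def using comult_grouplike_W by (simp add: chain_subst[OF a])
qed

lemma twisted_antipode_unit: "St \<bullet> eta = eta"
  unfolding twisted_antipode_twist using twist_unit antipode_unit by simp

lemma twisted_antipode_grouplike: "St \<bullet> sg = S \<bullet> sg"
  unfolding twisted_antipode_twist using twist_grouplike by simp

lemma grouplike_inverse: "m \<bullet> W 0 (S \<bullet> sg) 1 \<bullet> sg = eta" "m \<bullet> W 1 (S \<bullet> sg) 0 \<bullet> sg = eta"
proof -
  have "m \<bullet> W 0 S 1 \<bullet> Dl \<bullet> sg = eta"
    using counit_grouplike by (simp add: chain_subst3[OF antipode_W(1)])
  then show "m \<bullet> W 0 (S \<bullet> sg) 1 \<bullet> sg = eta" using comult_grouplike_W by (simp add: W_comp)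
  have c: "W 1 S 0 \<bullet> W 0 sg 1 = W 0 sg 1 \<bullet> S"
    using W_commute'[of sg 0 1 S 1 1 0 0 0] by simp
  have "m \<bullet> W 1 S 0 \<bullet> Dl \<bullet> sg = eta"
    using counit_grouplike by (simp add: chain_subst3[OF antipode_W(2)])
  then have "m \<bullet> W 0 sg 1 \<bullet> S \<bullet> sg = eta" using comult_grouplike_W by (simp add: chain_subst[OF c])
  then show "m \<bullet> W 1 (S \<bullet> sg) 0 \<bullet> sg = eta" using points_commute[of sg 1 "S \<bullet> sg" 1] by simp
qed

lemma modular_involution_W: "St \<bullet> St = m \<bullet> W 0 m 1 \<bullet> W 0 sg 2 \<bullet> W 1 (S \<bullet> sg) 0"
proof -
  have "sg \<otimes> i1 \<otimes> (S \<bullet> sg) = W 0 sg 2 \<bullet> W 1 (S \<bullet> sg) 0"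
    using W_tensor[of sg 0 1 "i1 \<otimes> (S \<bullet> sg)" 1 2 0 0] by (simp add: W_def)
  then show ?thesis using modular_involution by (simp add: W_def)
qed

lemma twisted_antipode_square: "m \<bullet> W 1 sg 0 \<bullet> St \<bullet> St = m \<bullet> W 0 sg 1"
proof -
  have c1: "W 1 m 0 \<bullet> W 0 m 2 = W 0 m 1 \<bullet> W 2 m 0"
    using W_commute'[of m 2 1 m 2 1 0 0 0] by simp
  have c2: "W 2 m 0 \<bullet> W 0 sg 3 = W 0 sg 2 \<bullet> W 1 m 0"
    using W_commute'[of sg 0 1 m 2 1 0 1 0] by simp
  have iv: "W 1 m 0 \<bullet> W 1 (S \<bullet> sg) 1 \<bullet> W 1 sg 0 = W 1 eta 0"
  proof -
    have "W 1 m 0 \<bullet> W 1 (S \<bullet> sg) 1 \<bullet> W 1 sg 0 = W 1 (m \<bullet> W 0 (S \<bullet> sg) 1 \<bullet> sg) 0"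
      by (simp add: W_comp W_W)
    then show ?thesis using grouplike_inverse by simp
  qed
  have c3: "W 0 sg 2 \<bullet> W 1 eta 0 = W 2 eta 0 \<bullet> W 0 sg 1"
    using W_commute[of sg 0 1 eta 0 1 0 1 0] by simp
  have un: "m \<bullet> W 0 m 1 \<bullet> W 2 eta 0 = m"
  proof -
    have "m \<bullet> W 0 m 1 \<bullet> W 2 eta 0 = m \<bullet> W 1 m 0 \<bullet> W 2 eta 0"
      by (simp add: chain_subst[OF mult_assoc_W])
    also have "\<dots> = m \<bullet> W 1 (m \<bullet> W 1 eta 0) 0" by (simp add: W_comp W_W)
    finally show ?thesis using mult_unit_W by simp
  qed
  have "m \<bullet> W 0 (St \<bullet> St) 1 \<bullet> W 1 sg 0 = m \<bullet> W 0 m 1 \<bullet> W 0 m 2 \<bullet> W 0 sg 3 \<bullet> W 1 (S \<bullet> sg) 1 \<bullet>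
      W 1 sg 0"
    unfolding modular_involution_W by (simp add: W_comp W_W)
  also have "\<dots> = m \<bullet> W 0 m 1 \<bullet> W 2 m 0 \<bullet> W 0 sg 3 \<bullet> W 1 (S \<bullet> sg) 1 \<bullet> W 1 sg 0"
    by (simp add: chain_subst[OF mult_assoc_W] chain_subst[OF c1])
  also have "\<dots> = m \<bullet> W 0 m 1 \<bullet> W 0 sg 2 \<bullet> W 1 eta 0"
    by (simp add: chain_subst[OF c2] chain_subst3_last[OF iv])
  also have "\<dots> = m \<bullet> W 0 sg 1"
    by (simp add: chain_subst_last[OF c3] chain_subst3[OF un])
  finally have sq: "m \<bullet> W 0 (St \<bullet> St) 1 \<bullet> W 1 sg 0 = m \<bullet> W 0 sg 1" .
  have "W 1 sg 0 \<bullet> (St \<bullet> St) = W 0 (St \<bullet> St) 1 \<bullet> W 1 sg 0"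
    using W_commute[of "St \<bullet> St" 1 1 sg 0 1 0 0 0] by simp
  then show ?thesis
    using sq by simp
qed

abbreviation lmul_sg where "lmul_sg \<equiv> m \<bullet> W 0 sg 1"

lemma twisted_antipode_lmul_sg: "St \<bullet> lmul_sg = m \<bullet> W 1 (S \<bullet> sg) 0 \<bullet> St"
proof -
  have n: "BH \<bullet> W 0 sg 1 = W 1 sg 0" using braid_natural_P[of sg 0 1 i1 1 1] by (simp add: W_def)
  have a: "W 1 St 0 \<bullet> W 1 sg 0 = W 1 (S \<bullet> sg) 0"
    using twisted_antipode_grouplike by (simp add: comp_W)
  have c: "W 0 St 1 \<bullet> W 1 (S \<bullet> sg) 0 = W 1 (S \<bullet> sg) 0 \<bullet> St"
    using W_commute[of St 1 1 "S \<bullet> sg" 0 1 0 0 0] by simp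
  show ?thesis
    by (simp add: chain_subst[OF twisted_antipode_anti_mult] chain_subst_last[OF n]
        chain_subst_last[OF a] chain_subst_last[OF c])
qed

subsection \<open>The diagonal action of \<open>H\<close> on its tensor powers\<close>

definition act where "act k = M (Suc k) \<bullet> W 0 (D k) (Suc k)"

lemma act_dom_cod[simp]: "Dom C (act k) = P (Suc (Suc k))" "Cod C (act k) = P (Suc k)"
  unfolding act_def by simp_all

lemma act_0: "act 0 = m" unfolding act_def by (simp add: mult_n_1)

lemma act_Suc: "act (Suc j) = W 1 (act j) 0 \<bullet> W 0 m (Suc (Suc j)) \<bullet> W 1 BH (Suc j) \<bullet>
    W 0 Dl (Suc (Suc j))"
proof -
  define k where "k = Suc j"
  have n: "W 1 (B k 1) k \<bullet> W 1 (D j) (Suc k) = W 2 (D j) k \<bullet> W 1 BH k"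
  proof -
    have "B k 1 \<bullet> W 0 (D j) 1 = W 1 (D j) 0 \<bullet> BH"
      using braid_natural_P[of "D j" 1 k i1 1 1] by (simp add: W_def k_def)
    then have "W 1 (B k 1 \<bullet> W 0 (D j) 1) k = W 1 (W 1 (D j) 0 \<bullet> BH) k" by simp
    then show ?thesis by (simp add: W_comp W_W k_def)
  qed
  have c: "W 0 m k \<bullet> W 2 (act j) 0 = W 1 (act j) 0 \<bullet> W 0 m (Suc k)"
    using W_commute[of m 2 1 "act j" "Suc k" k 0 0 0] by (simp add: k_def)
  have "act k = W 0 m k \<bullet> W 2 (M k) 0 \<bullet> W 1 (B k 1) k \<bullet> W 1 (D j) (Suc k) \<bullet> W 0 Dl (Suc k)"
    unfolding act_def mult_n_Suc k_def iter_comult_Suc_left by (simp add: W_comp W_W)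
  also have "\<dots> = W 0 m k \<bullet> W 2 (M k) 0 \<bullet> W 2 (D j) k \<bullet> W 1 BH k \<bullet> W 0 Dl (Suc k)"
    by (simp add: chain_subst[OF n] k_def)
  also have "\<dots> = W 0 m k \<bullet> W 2 (act j) 0 \<bullet> W 1 BH k \<bullet> W 0 Dl (Suc k)"
    unfolding act_def k_def by (simp add: W_comp W_W)
  also have "\<dots> = W 1 (act j) 0 \<bullet> W 0 m (Suc k) \<bullet> W 1 BH k \<bullet> W 0 Dl (Suc k)"
    by (simp add: chain_subst[OF c] k_def)
  finally show ?thesis unfolding k_def .
qed

lemma act_mult: "act k \<bullet> W 0 m (Suc k) = act k \<bullet> W 1 (act k) 0"
proof -
  have dd: "D k \<otimes> D k = W 0 (D k) (Suc k) \<bullet> W 1 (D k) 0"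
    using W_tensor[of "D k" 1 "Suc k" "D k" 1 "Suc k" 0 0] by simp
  have ma: "M (Suc k) \<bullet> W 0 (M (Suc k)) (Suc k) = M (Suc k) \<bullet> W (Suc k) (M (Suc k)) 0"
    by (rule mult_n_assoc)
  have c: "W 0 (D k) (Suc k) \<bullet> W 1 (M (Suc k)) 0 = W (Suc k) (M (Suc k)) 0 \<bullet>
      W 0 (D k) (Suc k + Suc k)"
    using W_commute[of "D k" 1 "Suc k" "M (Suc k)" "2 * Suc k" "Suc k" 0 0 0] by simp
  have "act k \<bullet> W 0 m (Suc k) = M (Suc k) \<bullet> W 0 (D k \<bullet> m) (Suc k)"
    unfolding act_def by (simp add: W_comp)
  also have "\<dots> = M (Suc k) \<bullet> W 0 (M (Suc k)) (Suc k) \<bullet> W 0 (D k) (Suc k + Suc k) \<bullet>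
      W 1 (D k) (Suc k)"
    unfolding iter_comult_mult dd by (simp add: W_comp W_W)
  also have "\<dots> = M (Suc k) \<bullet> W (Suc k) (M (Suc k)) 0 \<bullet> W 0 (D k) (Suc k + Suc k) \<bullet>
      W 1 (D k) (Suc k)"
    by (simp add: chain_subst[OF ma])
  also have "\<dots> = act k \<bullet> W 1 (act k) 0"
    unfolding act_def by (simp add: W_comp W_W chain_subst[OF c[symmetric]])
  finally show ?thesis .
qed

lemma act_unit: "act k \<bullet> W 0 eta (Suc k) = idn (Suc k)"
proof -
  have "act k \<bullet> W 0 eta (Suc k) = M (Suc k) \<bullet> W 0 (u (Suc k)) (Suc k)"
    unfolding act_def using iter_comult_unit[of k] by (simp add: comp_W del: tpowm.simps)
  then show ?thesis using mult_n_unit_left by (simp del: tpowm.simps)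
qed

lemma act_grouplike_inverse: "act k \<bullet> W 0 (S \<bullet> sg) (Suc k) \<bullet> act k \<bullet> W 0 sg (Suc k) = idn (Suc k)"
proof -
  have c: "W 0 (S \<bullet> sg) (Suc k) \<bullet> act k = W 1 (act k) 0 \<bullet> W 0 (S \<bullet> sg) (Suc (Suc k))"
    using W_commute[of "S \<bullet> sg" 0 1 "act k" "Suc (Suc k)" "Suc k" 0 0 0] by simp
  have i: "W 0 m (Suc k) \<bullet> W 0 (S \<bullet> sg) (Suc (Suc k)) \<bullet> W 0 sg (Suc k) = W 0 eta (Suc k)"
  proof -
    have "W 0 m (Suc k) \<bullet> W 0 (S \<bullet> sg) (Suc (Suc k)) \<bullet> W 0 sg (Suc k) =
        W 0 (m \<bullet> W 0 (S \<bullet> sg) 1 \<bullet> sg) (Suc k)"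
      by (simp add: W_comp W_W)
    then show ?thesis using grouplike_inverse by simp
  qed
  have "act k \<bullet> W 0 (S \<bullet> sg) (Suc k) \<bullet> act k \<bullet> W 0 sg (Suc k) = act k \<bullet> W 1 (act k) 0 \<bullet>
      W 0 (S \<bullet> sg) (Suc (Suc k)) \<bullet> W 0 sg (Suc k)"
    by (simp add: chain_subst[OF c])
  also have "\<dots> = act k \<bullet> W 0 m (Suc k) \<bullet> W 0 (S \<bullet> sg) (Suc (Suc k)) \<bullet> W 0 sg (Suc k)"
    by (simp add: chain_subst[OF act_mult[symmetric]])
  also have "\<dots> = idn (Suc k)" using act_unit by (simp add: chain_subst3_last[OF i])
  finally show ?thesis .
qed

lemma alg_hom_act_natural:
  assumes am: "alg_hom \<phi> (Suc k0) (Suc k1)" and dd: "\<phi> \<bullet> D k0 = D k1"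
  shows "\<phi> \<bullet> act k0 = act k1 \<bullet> W 1 \<phi> 0"
proof -
  have t: "Dom C \<phi> = P (Suc k0)" "Cod C \<phi> = P (Suc k1)"
    and mm: "\<phi> \<bullet> M (Suc k0) = M (Suc k1) \<bullet> (\<phi> \<otimes> \<phi>)"
    using am unfolding alg_hom_def by auto
  have pp: "\<phi> \<otimes> \<phi> = W 0 \<phi> (Suc k1) \<bullet> W (Suc k0) \<phi> 0"
    using W_tensor[of \<phi> "Suc k0" "Suc k1" \<phi> "Suc k0" "Suc k1" 0 0] t by simp
  have c: "W (Suc k0) \<phi> 0 \<bullet> W 0 (D k0) (Suc k0) = W 0 (D k0) (Suc k1) \<bullet> W 1 \<phi> 0"
    using W_commute'[of "D k0" 1 "Suc k0" \<phi> "Suc k0" "Suc k1" 0 0 0] t by simp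
  have m2: "W 0 \<phi> (Suc k1) \<bullet> W 0 (D k0) (Suc k1) = W 0 (D k1) (Suc k1)"
    using dd t by (simp add: comp_W)
  have "\<phi> \<bullet> act k0 = M (Suc k1) \<bullet> (\<phi> \<otimes> \<phi>) \<bullet> W 0 (D k0) (Suc k0)"
    unfolding act_def using t by (simp add: chain_subst[OF mm])
  also have "\<dots> = M (Suc k1) \<bullet> W 0 (D k1) (Suc k1) \<bullet> W 1 \<phi> 0"
    unfolding pp using t by (simp add: chain_subst[OF c] chain_subst_last[OF c] chain_subst[OF m2]
        chain_subst_last[OF m2])
  finally show ?thesis unfolding act_def using t by simp
qed

lemma act_comult_natural: "W a Dl b \<bullet> act (a + b) = act (Suc (a + b)) \<bullet> W (Suc a) Dl b"
proof -
  have am: "alg_hom (W a Dl b) (Suc (a + b)) (Suc (Suc (a + b)))"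
    using alg_hom_W[OF alg_hom_comult, of a b] by simp
  have "W a Dl b \<bullet> act (a + b) = act (Suc (a + b)) \<bullet> W 1 (W a Dl b) 0"
    using alg_hom_act_natural[OF am iter_comult_W_comult] by simp
  then show ?thesis by (simp add: W_W)
qed

lemma act_counit_natural:
  "W a eps (Suc b) \<bullet> act (Suc (a + b)) = act (a + b) \<bullet> W (Suc a) eps (Suc b)"
proof -
  have am: "alg_hom (W a eps (Suc b)) (Suc (Suc (a + b))) (Suc (a + b))"
    using alg_hom_W[OF alg_hom_counit, of a "Suc b"] by simp
  have "W a eps (Suc b) \<bullet> act (Suc (a + b)) = act (a + b) \<bullet> W 1 (W a eps (Suc b)) 0"
    using alg_hom_act_natural[OF am iter_comult_W_counit] by simp
  then show ?thesis by (simp add: W_W)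
qed

lemma tpowm_lmul_sg_act: "tpowm C lmul_sg (Suc k) = act k \<bullet> W 0 sg (Suc k)"
proof -
  have "act k \<bullet> W 0 sg (Suc k) = M (Suc k) \<bullet> W 0 (tpowm C sg (Suc k)) (Suc k)"
    unfolding act_def using iter_comult_grouplike[of k] by (simp add: comp_W del: tpowm.simps)
  then show ?thesis using mult_n_points[OF pair_dom_cod(3,4)] by (simp del: tpowm.simps)
qed

definition iter_comult_pair where "iter_comult_pair j = W 0 (D (Suc j)) (Suc (Suc j)) \<bullet>
    W (Suc (Suc j)) eta 0 \<bullet> W 1 (D j) 0"

lemma iter_comult_pair_dom_cod[simp]:
  "Dom C (iter_comult_pair j) = P 2" "Cod C (iter_comult_pair j) = P (2 * Suc (Suc j))"
  unfolding iter_comult_pair_def by simp_all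

lemma mult_n_iter_comult_pair: "M (Suc (Suc j)) \<bullet> iter_comult_pair j = W 0 (D j) 1 \<bullet> W 0 m 1 \<bullet>
    W 1 BH 0 \<bullet> W 0 Dl 1"
proof -
  have e1: "W 0 Dl (Suc (Suc j)) \<bullet> W (Suc (Suc j)) eta 0 = W (Suc (Suc (Suc j))) eta 0 \<bullet>
      W 0 Dl (Suc j)"
    using W_commute[of Dl 1 2 eta 0 1 0 "Suc j" 0] by simp
  have e2: "W 0 (D j) (Suc (Suc (Suc j))) \<bullet> W (Suc (Suc (Suc j))) eta 0 =
      W (Suc (2 * (Suc j))) eta 0 \<bullet> W 0 (D j) (Suc (Suc j))"
    using W_commute[of "D j" 1 "Suc j" eta 0 1 0 "Suc (Suc j)" 0] by simp
  have e3: "W (Suc j) (B 1 (Suc j)) 1 \<bullet> W (Suc (2 * (Suc j))) eta 0 = W (Suc (2 * (Suc j))) eta 0 \<bullet>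
      W (Suc j) (B 1 (Suc j)) 0"
    using W_commute[of "B 1 (Suc j)" "Suc (Suc j)" "Suc (Suc j)" eta 0 1 "Suc j" 0 0] by simp
  have e4: "W (2 * (Suc j)) m 0 \<bullet> W (Suc (2 * (Suc j))) eta 0 = idn (Suc (2 * (Suc j)))"
  proof -
    have "W (2 * (Suc j)) m 0 \<bullet> W (Suc (2 * (Suc j))) eta 0 = W (2 * (Suc j)) (m \<bullet> W 1 eta 0) 0"
      by (simp add: W_comp W_W)
    then show ?thesis using mult_unit_W by simp
  qed
  have f1: "W 0 Dl (Suc j) \<bullet> W 1 (D j) 0 = W 2 (D j) 0 \<bullet> W 0 Dl 1"
    using W_commute[of Dl 1 2 "D j" 1 "Suc j" 0 0 0] by simp
  have f2: "W 0 (D j) (Suc (Suc j)) \<bullet> W 2 (D j) 0 = W (Suc (Suc j)) (D j) 0 \<bullet> W 0 (D j) 2"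
    using W_commute[of "D j" 1 "Suc j" "D j" 1 "Suc j" 0 1 0] by simp
  have f3: "W (Suc j) (B 1 (Suc j)) 0 \<bullet> W (Suc (Suc j)) (D j) 0 = W (Suc j) (D j) 1 \<bullet>
      W (Suc j) BH 0"
  proof -
    have "B 1 (Suc j) \<bullet> W 1 (D j) 0 = W 0 (D j) 1 \<bullet> BH"
      using braid_natural_P[of i1 1 1 "D j" 1 "Suc j"] by (simp add: W_def)
    then have "W (Suc j) (B 1 (Suc j) \<bullet> W 1 (D j) 0) 0 = W (Suc j) (W 0 (D j) 1 \<bullet> BH) 0" by simp
    then show ?thesis by (simp add: W_comp W_W)
  qed
  have f4: "W (Suc j) BH 0 \<bullet> W 0 (D j) 2 = W 0 (D j) 2 \<bullet> W 1 BH 0"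
    using W_commute'[of "D j" 1 "Suc j" BH 2 2 0 0 0] by simp
  have f5: "W 0 (M (Suc j)) 1 \<bullet> W (Suc j) (D j) 1 \<bullet> W 0 (D j) 2 = W 0 (D j) 1 \<bullet> W 0 m 1"
  proof -
    have dd: "D j \<otimes> D j = W (Suc j) (D j) 0 \<bullet> W 0 (D j) 1"
      using W_tensor'[of "D j" 1 "Suc j" "D j" 1 "Suc j" 0 0] by simp
    have "W 0 (M (Suc j) \<bullet> (D j \<otimes> D j)) 1 = W 0 (D j \<bullet> m) 1" using iter_comult_mult by simp
    then show ?thesis unfolding dd by (simp add: W_comp W_W)
  qed
  have "M (Suc (Suc j)) \<bullet> iter_comult_pair j = W 0 (M (Suc j)) 1 \<bullet> W (2 * (Suc j)) m 0 \<bullet>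
      W (Suc j) (B 1 (Suc j)) 1 \<bullet> W 0 (D j) (Suc (Suc (Suc j))) \<bullet> W 0 Dl (Suc (Suc j)) \<bullet>
      W (Suc (Suc j)) eta 0 \<bullet> W 1 (D j) 0"
    unfolding mult_n_Suc' iter_comult_pair_def iter_comult_Suc_right by (simp add: W_comp W_W)
  also have "\<dots> = W 0 (M (Suc j)) 1 \<bullet> W (Suc j) (B 1 (Suc j)) 0 \<bullet> W 0 (D j) (Suc (Suc j)) \<bullet>
      W 0 Dl (Suc j) \<bullet> W 1 (D j) 0"
    by (simp add: chain_subst[OF e1] chain_subst[OF e2] chain_subst[OF e3] chain_subst[OF e4])
  also have "\<dots> = W 0 (M (Suc j)) 1 \<bullet> W (Suc j) (D j) 1 \<bullet> W 0 (D j) 2 \<bullet> W 1 BH 0 \<bullet> W 0 Dl 1"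
    by (simp add: chain_subst[OF f1] chain_subst[OF f2] chain_subst[OF f3] chain_subst[OF f4]
        chain_subst_last[OF f1] chain_subst_last[OF f2] chain_subst_last[OF f3] chain_subst_last[OF
        f4])
  also have "\<dots> = W 0 (D j) 1 \<bullet> W 0 m 1 \<bullet> W 1 BH 0 \<bullet> W 0 Dl 1"
    by (simp add: chain_subst3[OF f5])
  finally show ?thesis .
qed

lemma twisted_antipode_iter_comult_absorb: "M (Suc (Suc j)) \<bullet> iter_comult_pair j \<bullet> W 0 St 1 \<bullet> Dl =
    W 0 (u (Suc j)) 1 \<bullet> St"
proof -
  have "M (Suc (Suc j)) \<bullet> iter_comult_pair j \<bullet> W 0 St 1 \<bullet> Dl = W 0 (D j) 1 \<bullet> W 0 m 1 \<bullet> W 1 BH 0 \<bullet>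
      W 0 (Dl \<bullet> St) 1 \<bullet> Dl"
      using mult_n_iter_comult_pair[of j]
      by (simp add: chain_subst[OF mult_n_iter_comult_pair] W_comp)
  also have "\<dots> = W 0 (D j) 1 \<bullet> W 0 eta 1 \<bullet> St"
    by (simp add: chain_subst4_last[OF twisted_antipode_comult_absorb])
  also have "\<dots> = W 0 (u (Suc j)) 1 \<bullet> St"
  proof -
    have a: "W 0 (D j) 1 \<bullet> W 0 eta 1 = W 0 (u (Suc j)) 1"
      using iter_comult_unit[of j] by (simp add: comp_W del: tpowm.simps)
    show ?thesis by (simp add: chain_subst[OF a] del: tpowm.simps)
  qed
  finally show ?thesis .
qed

lemma twisted_antipode_iter_comult_absorb_W:
  "W 0 (M (Suc (Suc j))) (Suc j) \<bullet> W 0 (D (Suc j)) (Suc (2 * (Suc j))) \<bullet>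
   W (Suc (Suc j)) eta (Suc j) \<bullet> W 1 (D j) (Suc j) \<bullet> W 0 St (Suc (Suc j)) \<bullet> W 0 Dl (Suc j) =
   W 0 (u (Suc j)) (Suc (Suc j)) \<bullet> W 0 St (Suc j)"
proof -
  have "W 0 (M (Suc (Suc j))) (Suc j) \<bullet> W 0 (D (Suc j)) (Suc (2 * (Suc j))) \<bullet>
      W (Suc (Suc j)) eta (Suc j) \<bullet> W 1 (D j) (Suc j) \<bullet> W 0 St (Suc (Suc j)) \<bullet> W 0 Dl (Suc j) =
      W 0 (M (Suc (Suc j)) \<bullet> iter_comult_pair j \<bullet> W 0 St 1 \<bullet> Dl) (Suc j)"
    unfolding iter_comult_pair_def by (simp add: W_comp W_W)
  also have "\<dots> = W 0 (W 0 (u (Suc j)) 1 \<bullet> St) (Suc j)"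
    using twisted_antipode_iter_comult_absorb[of j] by simp
  also have "\<dots> = W 0 (u (Suc j)) (Suc (Suc j)) \<bullet> W 0 St (Suc j)"
    by (simp add: W_comp W_W del: tpowm.simps)
  finally show ?thesis .
qed

lemma act_twisted_antipode_comult_shift: "act (Suc j) \<bullet> W 1 (W (Suc j) sg 0 \<bullet> act j) 0 \<bullet>
    W 0 St (Suc (Suc j)) \<bullet> W 0 Dl (Suc j) = W (Suc j) (m \<bullet> W 1 sg 0 \<bullet> St) 0 \<bullet> B 1 (Suc j)"
proof -
  have s1: "W (Suc j) sg 0 \<bullet> act j = M (Suc (Suc j)) \<bullet> W (Suc (2 * (Suc j))) sg 0 \<bullet>
      W (Suc j) eta (Suc j) \<bullet> W 0 (D j) (Suc j)"
    unfolding act_def by (simp add: chain_subst[OF point_append_mult_n[OF pair_dom_cod(3,4)]]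
        chain_subst_last[OF point_append_mult_n[OF pair_dom_cod(3,4)]])
  have c: "W 0 (D (Suc j)) (Suc (Suc j)) \<bullet> W 1 (M (Suc (Suc j))) 0 =
      W (Suc (Suc j)) (M (Suc (Suc j))) 0 \<bullet> W 0 (D (Suc j)) (Suc (Suc j) + Suc (Suc j))"
      using W_commute[of "D (Suc j)" 1 "Suc (Suc j)" "M (Suc (Suc j))" "2 * Suc (Suc j)"
          "Suc (Suc j)" 0 0 0]
      by simp
  have ma: "M (Suc (Suc j)) \<bullet> W (Suc (Suc j)) (M (Suc (Suc j))) 0 = M (Suc (Suc j)) \<bullet>
      W 0 (M (Suc (Suc j))) (Suc (Suc j))"
    using mult_n_assoc by simp
  have s2: "act (Suc j) \<bullet> W 1 (M (Suc (Suc j))) 0 = M (Suc (Suc j)) \<bullet>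
      W 0 (M (Suc (Suc j))) (Suc (Suc j)) \<bullet> W 0 (D (Suc j)) (Suc (Suc j) + Suc (Suc j))"
    unfolding act_def by (simp add: chain_subst[OF c] chain_subst[OF ma] chain_subst_last[OF c]
        chain_subst_last[OF ma])
  have s3: "W 0 (D (Suc j)) (Suc (Suc (2 * (Suc j)))) \<bullet> W (Suc (Suc (2 * (Suc j)))) sg 0 =
      W (Suc (Suc (3 * (Suc j)))) sg 0 \<bullet> W 0 (D (Suc j)) (Suc (2 * (Suc j)))"
    using W_commute[of "D (Suc j)" 1 "Suc (Suc j)" sg 0 1 0 "Suc (2 * (Suc j))" 0] by simp
  have s4: "W 0 (M (Suc (Suc j))) (Suc (Suc j)) \<bullet> W (Suc (Suc (3 * (Suc j)))) sg 0 =
      W (Suc (2 * (Suc j))) sg 0 \<bullet> W 0 (M (Suc (Suc j))) (Suc j)"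
    using W_commute[of "M (Suc (Suc j))" "2 * Suc (Suc j)" "Suc (Suc j)" sg 0 1 0 "Suc j" 0] by simp
  have s6: "W (Suc (2 * (Suc j))) sg 0 \<bullet> W 0 (u (Suc j)) (Suc (Suc j)) =
      W 0 (u (Suc j)) (Suc (Suc (Suc j))) \<bullet> W (Suc (Suc j)) sg 0"
    using W_commute[of "u (Suc j)" 0 "Suc j" sg 0 1 0 "Suc (Suc j)" 0] by (simp del: tpowm.simps)
  have s7: "W 0 (B 1 (Suc j)) 1 \<bullet> W (Suc (Suc j)) sg 0 = W (Suc (Suc j)) sg 0 \<bullet> B 1 (Suc j)"
    using W_commute[of "B 1 (Suc j)" "Suc (Suc j)" "Suc (Suc j)" sg 0 1 0 0 0] by simp
  have s8: "B 1 (Suc j) \<bullet> W 0 St (Suc j) = W (Suc j) St 0 \<bullet> B 1 (Suc j)"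
    using braid_natural_P[of St 1 1 "idn (Suc j)" "Suc j" "Suc j"] by (simp add: W_def)
  have "act (Suc j) \<bullet> W 1 (W (Suc j) sg 0 \<bullet> act j) 0 \<bullet> W 0 St (Suc (Suc j)) \<bullet> W 0 Dl (Suc j) =
      act (Suc j) \<bullet> W 1 (M (Suc (Suc j))) 0 \<bullet> W (Suc (Suc (2 * (Suc j)))) sg 0 \<bullet>
      W (Suc (Suc j)) eta (Suc j) \<bullet> W 1 (D j) (Suc j) \<bullet> W 0 St (Suc (Suc j)) \<bullet> W 0 Dl (Suc j)"
    unfolding s1 by (simp add: W_comp W_W)
  also have "\<dots> = M (Suc (Suc j)) \<bullet> W 0 (M (Suc (Suc j))) (Suc (Suc j)) \<bullet>
      W 0 (D (Suc j)) (Suc (Suc j) + Suc (Suc j)) \<bullet> W (Suc (Suc (2 * (Suc j)))) sg 0 \<bullet>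
      W (Suc (Suc j)) eta (Suc j) \<bullet> W 1 (D j) (Suc j) \<bullet> W 0 St (Suc (Suc j)) \<bullet> W 0 Dl (Suc j)"
    by (simp add: chain_subst[OF s2] chain_subst_last[OF s2])
  also have "\<dots> = M (Suc (Suc j)) \<bullet> W (Suc (2 * (Suc j))) sg 0 \<bullet> W 0 (M (Suc (Suc j))) (Suc j) \<bullet>
      W 0 (D (Suc j)) (Suc (2 * (Suc j))) \<bullet> W (Suc (Suc j)) eta (Suc j) \<bullet> W 1 (D j) (Suc j) \<bullet>
      W 0 St (Suc (Suc j)) \<bullet> W 0 Dl (Suc j)"
    by (simp add: chain_subst[OF s3] chain_subst[OF s4] chain_subst_last[OF s3]
        chain_subst_last[OF s4])
  also have "\<dots> = M (Suc (Suc j)) \<bullet> W (Suc (2 * (Suc j))) sg 0 \<bullet> W 0 (u (Suc j)) (Suc (Suc j)) \<bullet>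
      W 0 St (Suc j)"
    using twisted_antipode_iter_comult_absorb_W[of j] by (simp del: tpowm.simps)
  also have "\<dots> = W (Suc j) m 0 \<bullet> W 0 (B 1 (Suc j)) 1 \<bullet> W (Suc (Suc j)) sg 0 \<bullet> W 0 St (Suc j)"
    by (simp add: chain_subst[OF s6] chain_subst[OF mult_n_unit_prefix] chain_subst_last[OF s6]
        chain_subst_last[OF mult_n_unit_prefix] del: tpowm.simps)
  also have "\<dots> = W (Suc j) (m \<bullet> W 1 sg 0 \<bullet> St) 0 \<bullet> B 1 (Suc j)"
    by (simp add: chain_subst[OF s7] chain_subst_last[OF s8] W_comp W_W chain_subst_last[OF s7])
  finally show ?thesis .
qed

subsection \<open>The cyclic operators\<close>

text \<open>
  The index is shifted: \<open>tau k\<close> is the cyclic operator \<open>\<tau>\<^sub>k\<^sub>+\<^sub>1\<close> on \<open>H\<^sup>\<otimes>\<^sup>k\<^sup>+\<^sup>1\<close>, and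
  \<open>T k (h\<^sub>0, \<dots>, h\<^sub>k\<^sub>+\<^sub>1) = (h\<^sub>1, \<dots>, h\<^sub>k\<^sub>+\<^sub>1, \<sigma> h\<^sub>0)\<close>.
\<close>

definition Q where "Q k = act k \<bullet> W 0 St (Suc k)"

definition T where "T k = W (Suc k) m 0 \<bullet> W (Suc k) sg 1 \<bullet> B 1 (Suc k)"

definition tau where "tau k = Q k \<bullet> W (Suc k) sg 0"

lemma Q_dom_cod[simp]: "Dom C (Q k) = P (Suc (Suc k))" "Cod C (Q k) = P (Suc k)"
  unfolding Q_def by simp_all

lemma T_dom_cod[simp]: "Dom C (T k) = P (Suc (Suc k))" "Cod C (T k) = P (Suc (Suc k))"
  unfolding T_def by simp_all

lemma tau_dom_cod[simp]: "Dom C (tau k) = P (Suc k)" "Cod C (tau k) = P (Suc k)"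
  unfolding tau_def by simp_all

lemma Q_unit: "Q k \<bullet> W 0 eta (Suc k) = idn (Suc k)"
proof -
  have a: "W 0 St (Suc k) \<bullet> W 0 eta (Suc k) = W 0 eta (Suc k)"
    using twisted_antipode_unit by (simp add: comp_W)
  show ?thesis unfolding Q_def using act_unit a by simp
qed

lemma Q_shift_0: "Q 0 \<bullet> T 0 = tau 0 \<bullet> Q 0"
proof -
  have c1: "W 0 St 1 \<bullet> W 1 sg 0 = W 1 sg 0 \<bullet> St"
    using W_commute[of St 1 1 sg 0 1 0 0 0] by simp
  have n: "BH \<bullet> W 0 St 1 = W 1 St 0 \<bullet> BH"
    using braid_natural_P[of St 1 1 i1 1 1] by (simp add: W_def)
  have c2: "W 1 sg 0 \<bullet> m = W 0 m 1 \<bullet> W 2 sg 0"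
    using W_commute[of m 2 1 sg 0 1 0 0 0] by simp
  have c3: "W 2 sg 0 \<bullet> W 0 St 1 = W 0 St 2 \<bullet> W 2 sg 0"
    using W_commute[of St 1 1 sg 0 1 0 1 0] by simp
  have c4: "W 1 m 0 \<bullet> W 0 St 2 = W 0 St 1 \<bullet> W 1 m 0"
    using W_commute'[of St 1 1 m 2 1 0 0 0] by simp
  have mm: "W 1 m 0 \<bullet> W 2 sg 0 \<bullet> W 1 St 0 \<bullet> W 1 St 0 = W 1 (m \<bullet> W 0 sg 1) 0"
  proof -
    have "W 1 m 0 \<bullet> W 2 sg 0 \<bullet> W 1 St 0 \<bullet> W 1 St 0 = W 1 (m \<bullet> W 1 sg 0 \<bullet> St \<bullet> St) 0"
      by (simp add: W_comp W_W)
    then show ?thesis using twisted_antipode_square by simp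
  qed
  have "tau 0 \<bullet> Q 0 = m \<bullet> W 1 sg 0 \<bullet> St \<bullet> m \<bullet> W 0 St 1"
    unfolding tau_def Q_def act_0 by (simp add: chain_subst[OF c1] chain_subst_last[OF c1])
  also have "\<dots> = m \<bullet> W 0 m 1 \<bullet> W 2 sg 0 \<bullet> W 0 St 1 \<bullet> W 1 St 0 \<bullet> W 1 St 0 \<bullet> BH"
    by (simp add: chain_subst[OF twisted_antipode_anti_mult] chain_subst_last[OF n]
        chain_subst[OF c2])
  also have "\<dots> = m \<bullet> W 0 St 1 \<bullet> W 1 m 0 \<bullet> W 2 sg 0 \<bullet> W 1 St 0 \<bullet> W 1 St 0 \<bullet> BH"
    by (simp add: chain_subst[OF mult_assoc_W] chain_subst[OF c3] chain_subst[OF c4])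
  also have "\<dots> = Q 0 \<bullet> T 0"
    unfolding Q_def T_def act_0 by (simp add: chain_subst4[OF mm] W_comp W_W)
  finally show ?thesis by simp
qed

lemma tau_Q_Suc:
  "tau (Suc j) \<bullet> Q (Suc j) = act (Suc j) \<bullet> W 0 St (Suc (Suc j)) \<bullet> W 1 (act (Suc j)) 0 \<bullet>
      W 2 (W (Suc j) sg 0 \<bullet> act j) 0 \<bullet> W 1 St (Suc (Suc j)) \<bullet> W 1 Dl (Suc j) \<bullet> W 0 BH (Suc j) \<bullet>
      W 0 St (Suc (Suc j))"
proof -
  define Y where "Y = W (Suc j) sg 0 \<bullet> act j"
  have tY: "Dom C Y = P (Suc (Suc j))" "Cod C Y = P (Suc (Suc j))"
    unfolding Y_def by simp_all
  have r2: "W (Suc (Suc j)) sg 0 \<bullet> W 1 (act j) 0 = W 1 Y 0"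
    unfolding Y_def by (simp add: W_comp W_W)
  have r3: "W 0 St (Suc (Suc j)) \<bullet> W 1 Y 0 = W 1 Y 0 \<bullet> W 0 St (Suc (Suc j))"
    using W_commute[of St 1 1 Y "Suc (Suc j)" "Suc (Suc j)" 0 0 0] tY by simp
  have r4: "W 0 St (Suc (Suc j)) \<bullet> W 0 m (Suc (Suc j)) = W 0 m (Suc (Suc j)) \<bullet>
      W 0 St (Suc (Suc (Suc j))) \<bullet> W 1 St (Suc (Suc j)) \<bullet> W 0 BH (Suc (Suc j))"
  proof -
    have "W 0 St (Suc (Suc j)) \<bullet> W 0 m (Suc (Suc j)) = W 0 (St \<bullet> m) (Suc (Suc j))"
      by (simp add: comp_W)
    then show ?thesis
      unfolding twisted_antipode_anti_mult by (simp add: W_comp W_W)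
  qed
  have r5: "W 1 Y 0 \<bullet> W 0 m (Suc (Suc j)) = W 0 m (Suc (Suc j)) \<bullet> W 2 Y 0"
    using W_commute'[of m 2 1 Y "Suc (Suc j)" "Suc (Suc j)" 0 0 0] tY by simp
  have r7: "W 2 Y 0 \<bullet> W 0 St (Suc (Suc (Suc j))) = W 0 St (Suc (Suc (Suc j))) \<bullet> W 2 Y 0"
    using W_commute[of St 1 1 Y "Suc (Suc j)" "Suc (Suc j)" 0 1 0] tY by simp
  have r8: "W 1 (act (Suc j)) 0 \<bullet> W 0 St (Suc (Suc (Suc j))) = W 0 St (Suc (Suc j)) \<bullet>
      W 1 (act (Suc j)) 0"
    using W_commute'[of St 1 1 "act (Suc j)" "Suc (Suc (Suc j))" "Suc (Suc j)" 0 0 0] by simp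
  have af: "W (Suc (Suc j)) sg 0 \<bullet> act (Suc j) = W (Suc (Suc j)) sg 0 \<bullet>
      (W 1 (act j) 0 \<bullet> W 0 m (Suc (Suc j)) \<bullet> W 1 BH (Suc j) \<bullet> W 0 Dl (Suc (Suc j)))"
    by (simp only: act_Suc)
  have "tau (Suc j) \<bullet> Q (Suc j) = act (Suc j) \<bullet> W 0 St (Suc (Suc j)) \<bullet> W (Suc (Suc j)) sg 0 \<bullet>
      W 1 (act j) 0 \<bullet> W 0 m (Suc (Suc j)) \<bullet> W 1 BH (Suc j) \<bullet> W 0 Dl (Suc (Suc j)) \<bullet>
      W 0 St (Suc (Suc j))"
    unfolding tau_def Q_def by (simp add: chain_subst[OF af])
  also have "\<dots> = act (Suc j) \<bullet> W 1 Y 0 \<bullet> W 0 m (Suc (Suc j)) \<bullet> W 0 St (Suc (Suc (Suc j))) \<bullet>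
      W 1 St (Suc (Suc j)) \<bullet> W 0 BH (Suc (Suc j)) \<bullet> W 1 BH (Suc j) \<bullet> W 0 Dl (Suc (Suc j)) \<bullet>
      W 0 St (Suc (Suc j))"
    using tY by (simp add: chain_subst[OF r2] chain_subst[OF r3] chain_subst[OF r4])
  also have "\<dots> = act (Suc j) \<bullet> W 1 (act (Suc j)) 0 \<bullet> W 2 Y 0 \<bullet> W 0 St (Suc (Suc (Suc j))) \<bullet>
      W 1 St (Suc (Suc j)) \<bullet> W 0 BH (Suc (Suc j)) \<bullet> W 1 BH (Suc j) \<bullet> W 0 Dl (Suc (Suc j)) \<bullet>
      W 0 St (Suc (Suc j))"
    using tY by (simp add: chain_subst[OF r5] chain_subst[OF act_mult])
  also have "\<dots> = act (Suc j) \<bullet> W 0 St (Suc (Suc j)) \<bullet> W 1 (act (Suc j)) 0 \<bullet> W 2 Y 0 \<bullet>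
      W 1 St (Suc (Suc j)) \<bullet> W 1 Dl (Suc j) \<bullet> W 0 BH (Suc j) \<bullet> W 0 St (Suc (Suc j))"
    using tY by (simp add: chain_subst[OF r7] chain_subst[OF r8] chain_subst3[OF braid_comult_W])
  finally show ?thesis
    unfolding Y_def .
qed

lemma Q_shift_Suc: "Q (Suc j) \<bullet> T (Suc j) = tau (Suc j) \<bullet> Q (Suc j)"
proof -
  have shift: "W 1 (act (Suc j)) 0 \<bullet> W 2 (W (Suc j) sg 0 \<bullet> act j) 0 \<bullet> W 1 St (Suc (Suc j)) \<bullet>
      W 1 Dl (Suc j) = W (Suc (Suc j)) (m \<bullet> W 1 sg 0 \<bullet> St) 0 \<bullet> W 1 (B 1 (Suc j)) 0"
  proof -
    have "W 1 (act (Suc j)) 0 \<bullet> W 2 (W (Suc j) sg 0 \<bullet> act j) 0 \<bullet> W 1 St (Suc (Suc j)) \<bullet>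
        W 1 Dl (Suc j) =
        W 1 (act (Suc j) \<bullet> W 1 (W (Suc j) sg 0 \<bullet> act j) 0 \<bullet> W 0 St (Suc (Suc j)) \<bullet> W 0 Dl (Suc j)) 0"
      by (simp add: W_comp W_W)
    also have "\<dots> = W 1 (W (Suc j) (m \<bullet> W 1 sg 0 \<bullet> St) 0 \<bullet> B 1 (Suc j)) 0"
      using act_twisted_antipode_comult_shift[of j] by simp
    finally show ?thesis
      by (simp add: W_comp W_W)
  qed
  have braid: "W 1 (B 1 (Suc j)) 0 \<bullet> W 0 BH (Suc j) = B 1 (Suc (Suc j))"
    using braid_add_right[of 1 1 "Suc j"] by simp
  have braid_St:
    "B 1 (Suc (Suc j)) \<bullet> W 0 St (Suc (Suc j)) = W (Suc (Suc j)) St 0 \<bullet> B 1 (Suc (Suc j))"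
    using braid_natural_P[of St 1 1 "idn (Suc (Suc j))" "Suc (Suc j)" "Suc (Suc j)"]
    by (simp add: W_def)
  have square: "W (Suc (Suc j)) (m \<bullet> W 1 sg 0 \<bullet> St) 0 \<bullet> W (Suc (Suc j)) St 0 = W (Suc (Suc j)) m 0 \<bullet>
      W (Suc (Suc j)) sg 1"
  proof -
    have "W (Suc (Suc j)) (m \<bullet> W 1 sg 0 \<bullet> St) 0 \<bullet> W (Suc (Suc j)) St 0 =
        W (Suc (Suc j)) (m \<bullet> W 1 sg 0 \<bullet> St \<bullet> St) 0"
      by (simp add: comp_W)
    also have "\<dots> = W (Suc (Suc j)) (m \<bullet> W 0 sg 1) 0"
      using twisted_antipode_square by simp
    finally show ?thesis
      by (simp add: W_comp W_W)
  qed
  have "tau (Suc j) \<bullet> Q (Suc j) = act (Suc j) \<bullet> W 0 St (Suc (Suc j)) \<bullet>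
      W (Suc (Suc j)) (m \<bullet> W 1 sg 0 \<bullet> St) 0 \<bullet> W 1 (B 1 (Suc j)) 0 \<bullet> W 0 BH (Suc j) \<bullet>
      W 0 St (Suc (Suc j))"
    unfolding tau_Q_Suc by (simp add: chain_subst4[OF shift])
  also have "\<dots> = act (Suc j) \<bullet> W 0 St (Suc (Suc j)) \<bullet> W (Suc (Suc j)) m 0 \<bullet> W (Suc (Suc j)) sg 1 \<bullet>
      B 1 (Suc (Suc j))"
    by (simp add: chain_subst[OF braid] chain_subst_last[OF braid_St] chain_subst[OF square]
        del: W_comp)
  also have "\<dots> = Q (Suc j) \<bullet> T (Suc j)"
    unfolding Q_def T_def by simp
  finally show ?thesis
    by simp
qed

lemma Q_shift: "Q k \<bullet> T k = tau k \<bullet> Q k"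
  using Q_shift_0 Q_shift_Suc by (cases k) simp_all

lemma cpow_tau_Q: "cpow C (P (Suc k)) (tau k) i \<bullet> Q k = Q k \<bullet> cpow C (P (Suc (Suc k))) (T k) i"
  by (rule cpow_commute) (simp_all add: Q_shift)

lemma cpow_shift: "i + r = Suc (Suc k) \<Longrightarrow> cpow C (P (Suc (Suc k))) (T k) i =
    W r (tpowm C lmul_sg i) 0 \<bullet> B i r"
proof (induction i arbitrary: r)
  case 0 then show ?case by simp
next
  case (Suc i)
  have IH: "cpow C (P (Suc (Suc k))) (T k) i = W (Suc r) (tpowm C lmul_sg i) 0 \<bullet> B i (Suc r)"
    using Suc by simp
  have Td: "T k = W (r + i) lmul_sg 0 \<bullet> B 1 (r + i)"
    unfolding T_def using Suc.prems by (simp add: W_comp W_W)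
  have n: "B 1 (r + i) \<bullet> W (Suc r) (tpowm C lmul_sg i) 0 = W r (tpowm C lmul_sg i) 1 \<bullet> B 1 (r + i)"
      using braid_natural_P[of i1 1 1 "W r (tpowm C lmul_sg i) 0" "r + i" "r + i"]
      by (simp add: W_def tensor_idn_idn)
  have mg: "W (r + i) lmul_sg 0 \<bullet> W r (tpowm C lmul_sg i) 1 = W r (tpowm C lmul_sg (Suc i)) 0"
  proof -
    have "tpowm C lmul_sg (Suc i) = tpowm C lmul_sg i \<otimes> lmul_sg"
      using tpowm_add[of lmul_sg i 1] by simp
    then show ?thesis using W_tensor'[of "tpowm C lmul_sg i" i i lmul_sg 1 1 r 0] by simp
  qed
  have "cpow C (P (Suc (Suc k))) (T k) (Suc i) = T k \<bullet>
      (W (Suc r) (tpowm C lmul_sg i) 0 \<bullet> B i (Suc r))"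
    using IH by (simp del: tpowm.simps)
  also have "\<dots> = W (r + i) lmul_sg 0 \<bullet> B 1 (r + i) \<bullet> W (Suc r) (tpowm C lmul_sg i) 0 \<bullet> B i (Suc r)"
    unfolding Td by (simp del: tpowm.simps)
  also have "\<dots> = W r (tpowm C lmul_sg (Suc i)) 0 \<bullet> B 1 (r + i) \<bullet> B i (Suc r)"
    by (simp add: chain_subst[OF n] chain_subst[OF mg] del: tpowm.simps)
  also have "\<dots> = W r (tpowm C lmul_sg (Suc i)) 0 \<bullet> B (Suc i) r"
    by (simp add: chain_subst_last[OF braid_rotate[OF braid_involutive]] del: tpowm.simps)
  finally show ?case .
qed

lemma Q_lmul_sg_invariant: "Q k \<bullet> tpowm C lmul_sg (Suc (Suc k)) = Q k"
proof -
  have t: "tpowm C lmul_sg (Suc (Suc k)) = W 0 lmul_sg (Suc k) \<bullet> W 1 (act k) 0 \<bullet> W 1 sg (Suc k)"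
  proof -
    have e: "tpowm C lmul_sg (Suc (Suc k)) = lmul_sg \<otimes> tpowm C lmul_sg (Suc k)"
      by (simp only: tpowm.simps)
    have "tpowm C lmul_sg (Suc (Suc k)) = W 0 lmul_sg (Suc k) \<bullet> W 1 (tpowm C lmul_sg (Suc k)) 0"
      unfolding e using W_tensor[of lmul_sg 1 1 "tpowm C lmul_sg (Suc k)" "Suc k" "Suc k" 0 0] by
          (simp del: tpowm.simps)
    then show ?thesis unfolding tpowm_lmul_sg_act by (simp add: W_comp W_W)
  qed
  have a: "W 0 St (Suc k) \<bullet> W 0 lmul_sg (Suc k) = W 0 m (Suc k) \<bullet> W 1 (S \<bullet> sg) (Suc k) \<bullet>
      W 0 St (Suc k)"
  proof -
    have "W 0 St (Suc k) \<bullet> W 0 lmul_sg (Suc k) = W 0 (St \<bullet> lmul_sg) (Suc k)" by (simp add: comp_W)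
    then show ?thesis unfolding twisted_antipode_lmul_sg by (simp add: W_comp W_W)
  qed
  have c1: "W 0 St (Suc k) \<bullet> W 1 (act k) 0 = W 1 (act k) 0 \<bullet> W 0 St (Suc (Suc k))"
    using W_commute[of St 1 1 "act k" "Suc (Suc k)" "Suc k" 0 0 0] by simp
  have c2: "W 0 St (Suc (Suc k)) \<bullet> W 1 sg (Suc k) = W 1 sg (Suc k) \<bullet> W 0 St (Suc k)"
    using W_commute[of St 1 1 sg 0 1 0 0 "Suc k"] by simp
  have inv: "W 1 (act k) 0 \<bullet> W 1 (S \<bullet> sg) (Suc k) \<bullet> W 1 (act k) 0 \<bullet> W 1 sg (Suc k) =
      idn (Suc (Suc k))"
  proof -
    have "W 1 (act k) 0 \<bullet> W 1 (S \<bullet> sg) (Suc k) \<bullet> W 1 (act k) 0 \<bullet> W 1 sg (Suc k) =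
        W 1 (act k \<bullet> W 0 (S \<bullet> sg) (Suc k) \<bullet> act k \<bullet> W 0 sg (Suc k)) 0"
      by (simp add: W_comp W_W)
    then show ?thesis using act_grouplike_inverse by simp
  qed
  have "Q k \<bullet> tpowm C lmul_sg (Suc (Suc k)) = act k \<bullet> W 0 m (Suc k) \<bullet> W 1 (S \<bullet> sg) (Suc k) \<bullet>
      W 1 (act k) 0 \<bullet> W 1 sg (Suc k) \<bullet> W 0 St (Suc k)"
    unfolding Q_def t by (simp add: chain_subst[OF a] chain_subst[OF c1] chain_subst_last[OF c2]
        del: tpowm.simps)
  also have "\<dots> = act k \<bullet> W 1 (act k) 0 \<bullet> W 1 (S \<bullet> sg) (Suc k) \<bullet> W 1 (act k) 0 \<bullet> W 1 sg (Suc k) \<bullet>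
      W 0 St (Suc k)"
    by (simp add: chain_subst[OF act_mult])
  also have "\<dots> = Q k" unfolding Q_def by (simp add: chain_subst4[OF inv])
  finally show ?thesis .
qed

lemma tau_cpow: "cpow C (P (Suc k)) (tau k) (Suc (Suc k)) = idn (Suc k)"
proof -
  have tp: "Dom C (cpow C (P (Suc k)) (tau k) (Suc (Suc k))) =
      P (Suc k) \<and> Cod C (cpow C (P (Suc k)) (tau k) (Suc (Suc k))) = P (Suc k)"
    by simp
  have TN: "cpow C (P (Suc (Suc k))) (T k) (Suc (Suc k)) = tpowm C lmul_sg (Suc (Suc k))"
    using cpow_shift[of "Suc (Suc k)" 0 k] by (simp del: tpowm.simps cpow.simps)
  have "cpow C (P (Suc k)) (tau k) (Suc (Suc k)) = cpow C (P (Suc k)) (tau k) (Suc (Suc k)) \<bullet>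
      (Q k \<bullet> W 0 eta (Suc k))"
    using Q_unit tp by (simp del: cpow.simps)
  also have "\<dots> = (cpow C (P (Suc k)) (tau k) (Suc (Suc k)) \<bullet> Q k) \<bullet> W 0 eta (Suc k)"
    using tp by (simp del: cpow.simps)
  also have "\<dots> = (Q k \<bullet> tpowm C lmul_sg (Suc (Suc k))) \<bullet> W 0 eta (Suc k)" unfolding cpow_tau_Q TN ..
  also have "\<dots> = idn (Suc k)" using Q_lmul_sg_invariant Q_unit by (simp del: tpowm.simps)
  finally show ?thesis .
qed

lemma Q_comult_first: "Q (Suc j) \<bullet> W 0 Dl (Suc j) = W 0 eta (Suc j) \<bullet> Q j"
proof -
  have c: "W 1 (act j) 0 \<bullet> W 0 eta (Suc (Suc j)) = W 0 eta (Suc j) \<bullet> act j"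
    using W_commute'[of eta 0 1 "act j" "Suc (Suc j)" "Suc j" 0 0 0] by simp
  have kk: "W 0 m (Suc (Suc j)) \<bullet> W 1 BH (Suc j) \<bullet> W 0 Dl (Suc (Suc j)) \<bullet> W 0 St (Suc (Suc j)) \<bullet>
      W 0 Dl (Suc j) = W 0 eta (Suc (Suc j)) \<bullet> W 0 St (Suc j)"
  proof -
    have "W 0 m (Suc (Suc j)) \<bullet> W 1 BH (Suc j) \<bullet> W 0 Dl (Suc (Suc j)) \<bullet> W 0 St (Suc (Suc j)) \<bullet>
        W 0 Dl (Suc j) =
        W 0 (W 0 m 1 \<bullet> W 1 BH 0 \<bullet> W 0 (Dl \<bullet> St) 1 \<bullet> Dl) (Suc j)" by (simp add: W_comp W_W)
    also have "\<dots> = W 0 (W 0 eta 1 \<bullet> St) (Suc j)" using twisted_antipode_comult_absorb by simp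
    finally show ?thesis by (simp add: W_comp W_W)
  qed
  have "Q (Suc j) \<bullet> W 0 Dl (Suc j) = W 1 (act j) 0 \<bullet> W 0 m (Suc (Suc j)) \<bullet> W 1 BH (Suc j) \<bullet>
      W 0 Dl (Suc (Suc j)) \<bullet> W 0 St (Suc (Suc j)) \<bullet> W 0 Dl (Suc j)"
    unfolding Q_def act_Suc by simp
  also have "\<dots> = W 0 eta (Suc j) \<bullet> act j \<bullet> W 0 St (Suc j)"
    by (simp add: chain_subst[OF kk] chain_subst_last[OF kk] chain_subst[OF c])
  finally show ?thesis unfolding Q_def .
qed

lemma tau_unit_first: "tau k \<bullet> W 0 eta k = W k sg 0"
proof -
  have c: "W (Suc k) sg 0 \<bullet> W 0 eta k = W 0 eta (Suc k) \<bullet> W k sg 0"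
    using W_commute[of eta 0 1 sg 0 1 0 k 0] by simp
  show ?thesis
    unfolding tau_def by (simp add: chain_subst[OF c] chain_subst_last[OF c] chain_subst[OF Q_unit])
qed

lemma tau_comult_first: "tau (Suc j) \<bullet> W 0 Dl j = W 0 eta (Suc j) \<bullet> tau j"
proof -
  have c: "W (Suc (Suc j)) sg 0 \<bullet> W 0 Dl j = W 0 Dl (Suc j) \<bullet> W (Suc j) sg 0"
    using W_commute[of Dl 1 2 sg 0 1 0 j 0] by simp
  show ?thesis
    unfolding tau_def using Q_comult_first
    by (simp add: chain_subst_last[OF c] chain_subst[OF Q_comult_first]
        chain_subst_last[OF Q_comult_first])
qed

lemma tau_0_grouplike: "tau 0 \<bullet> sg = eta"
proof -
  have "tau 0 \<bullet> sg = m \<bullet> W 0 St 1 \<bullet> W 1 sg 0 \<bullet> sg" unfolding tau_def Q_def act_0 by simp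
  also have "\<dots> = m \<bullet> W 0 (S \<bullet> sg) 1 \<bullet> sg"
  proof -
    have a: "W 1 sg 0 \<bullet> sg = W 0 sg 1 \<bullet> sg" using points_commute[of sg "Suc 0" sg "Suc 0"] by simp
    have b: "W 0 St 1 \<bullet> W 0 sg 1 = W 0 (S \<bullet> sg) 1"
      using twisted_antipode_grouplike by (simp add: comp_W)
    show ?thesis by (simp add: chain_subst_last[OF a] chain_subst[OF b])
  qed
  also have "\<dots> = eta" using grouplike_inverse by simp
  finally show ?thesis .
qed

lemma tau_comult_mid:
  "tau (Suc (Suc (a + b))) \<bullet> W (Suc a) Dl b = W a Dl (Suc b) \<bullet> tau (Suc (a + b))"
proof -
  have c1: "W (Suc (Suc (Suc (a + b)))) sg 0 \<bullet> W (Suc a) Dl b = W (Suc a) Dl (Suc b) \<bullet>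
      W (Suc (Suc (a + b))) sg 0"
    using W_commute[of Dl 1 2 sg 0 1 "Suc a" b 0] by simp
  have c2: "W 0 St (Suc (Suc (Suc (a + b)))) \<bullet> W (Suc a) Dl (Suc b) = W (Suc a) Dl (Suc b) \<bullet>
      W 0 St (Suc (Suc (a + b)))"
    using W_commute[of St 1 1 Dl 1 2 0 a "Suc b"] by simp
  have s: "act (Suc (Suc (a + b))) \<bullet> W (Suc a) Dl (Suc b) = W a Dl (Suc b) \<bullet> act (Suc (a + b))"
    using act_comult_natural[of a "Suc b"] by simp
  show ?thesis
    unfolding tau_def Q_def
    by (simp add: chain_subst[OF c1] chain_subst_last[OF c1] chain_subst[OF c2] chain_subst[OF s])
qed

lemma tau_grouplike_last: "tau (Suc j) \<bullet> W (Suc j) sg 0 = W j Dl 0 \<bullet> tau j"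
proof -
  have s: "W j Dl 0 \<bullet> act j = act (Suc j) \<bullet> W (Suc j) Dl 0" using act_comult_natural[of j 0] by simp
  have c: "W (Suc j) Dl 0 \<bullet> W 0 St (Suc j) = W 0 St (Suc (Suc j)) \<bullet> W (Suc j) Dl 0"
    using W_commute'[of St 1 1 Dl 1 2 0 j 0] by simp
  have g: "W (Suc j) Dl 0 \<bullet> W (Suc j) sg 0 = W (Suc (Suc j)) sg 0 \<bullet> W (Suc j) sg 0"
  proof -
    have "W (Suc j) Dl 0 \<bullet> W (Suc j) sg 0 = W (Suc j) (W 1 sg 0 \<bullet> sg) 0"
      using comult_grouplike_W points_commute[of sg "Suc 0" sg "Suc 0"] by (simp add: comp_W)
    then show ?thesis by (simp add: W_comp W_W)
  qed
  have "W j Dl 0 \<bullet> tau j = act (Suc j) \<bullet> W 0 St (Suc (Suc j)) \<bullet> W (Suc (Suc j)) sg 0 \<bullet>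
      W (Suc j) sg 0"
    unfolding tau_def Q_def by (simp add: chain_subst[OF s] chain_subst[OF c]
        chain_subst_last[OF g])
  then show ?thesis unfolding tau_def Q_def by simp
qed

lemma tau_counit: "tau (a + b) \<bullet> W (Suc a) eps b = W a eps (Suc b) \<bullet> tau (Suc (a + b))"
proof -
  have s: "W a eps (Suc b) \<bullet> act (Suc (a + b)) = act (a + b) \<bullet> W (Suc a) eps (Suc b)"
    by (rule act_counit_natural)
  have c1: "W (Suc a) eps (Suc b) \<bullet> W 0 St (Suc (Suc (a + b))) = W 0 St (Suc (a + b)) \<bullet>
      W (Suc a) eps (Suc b)"
    using W_commute[of St 1 1 eps 1 0 0 a "Suc b"] by simp
  have c2: "W (Suc a) eps (Suc b) \<bullet> W (Suc (Suc (a + b))) sg 0 =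
      W (Suc (a + b)) sg 0 \<bullet> W (Suc a) eps b"
    using W_commute[of eps 1 0 sg 0 1 "Suc a" b 0] by simp
  show ?thesis
    unfolding tau_def Q_def
    by (simp add: chain_subst[OF s] chain_subst[OF c1] chain_subst_last[OF c2])
qed

subsection \<open>The cosimplicial identities\<close>

abbreviation dd where "dd n i \<equiv> CH_coface C H eta Dl sg n i"

abbreviation ss where "ss n i \<equiv> CH_codeg C H eps n i"

abbreviation tt where "tt n \<equiv> CH_cyc C H m Dl S dl sg n"

lemma CH_eq_P: "CH C H n = P n" unfolding CH_def by simp

lemma coface_0: "dd (Suc k) 0 = W 0 eta k" unfolding CH_coface_def W_def by simp

lemma coface_last: "dd (Suc k) (Suc k) = W k sg 0" unfolding CH_coface_def W_def by simp

lemma coface_mid: "dd (Suc (Suc (a + b))) (Suc a) = W a Dl b"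
proof -
  have "Suc (Suc (a + b)) - 1 - Suc a = b" by simp
  then show ?thesis unfolding CH_coface_def W_def by simp
qed

lemma codeg_W: "i \<le> n \<Longrightarrow> ss n i = W i eps (n - i)" unfolding CH_codeg_def W_def by simp

lemma cyc_0: "tt 0 = idn 0" unfolding CH_cyc_def by simp

lemma cyc_Suc: "tt (Suc k) = tau k"
proof -
  have "(D k \<bullet> St) \<otimes> (idn k \<otimes> sg) = W 0 (D k \<bullet> St) (Suc k) \<bullet> W (Suc k) sg 0"
      using W_tensor[of "D k \<bullet> St" 1 "Suc k" "idn k \<otimes> sg" k "Suc k" 0 0]
      by (simp add: W_def tensor_idn_idn)
  then show ?thesis unfolding CH_cyc_def tau_def Q_def act_def by (simp add: W_comp)
qed

lemma coface_cases:
  assumes "1 \<le> n" "i \<le> n"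
  obtains (z) k where "n = Suc k" "i = 0" "dd n i = W 0 eta k"
    | (l) k where "n = Suc k" "i = Suc k" "dd n i = W k sg 0"
    | (mid) a b where "n = Suc (Suc (a + b))" "i = Suc a" "dd n i = W a Dl b"
proof -
  obtain k where n: "n = Suc k" using assms by (cases n) auto
  show thesis
  proof (cases "i = 0")
    case True then show ?thesis using z[of k] n coface_0 by simp
  next
    case False
    then obtain a where i: "i = Suc a" by (cases i) auto
    show ?thesis
    proof (cases "i = n")
      case True then show ?thesis using l[of k] n coface_last by simp
    next
      case False
      then have "a < k" using assms n i by simp
      then obtain b where "k = Suc (a + b)" by (metis add_Suc_right less_iff_Suc_add)
      then show ?thesis using mid[of a b] n i coface_mid by simp
    qed
  qed
qed

lemma coface_dom_cod: "1 \<le> n \<Longrightarrow> i \<le> n \<Longrightarrow> Dom C (dd n i) = P (n - 1) \<and> Cod C (dd n i) = P n"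
  by (erule coface_cases) auto

lemma codeg_dom_cod: "i \<le> n \<Longrightarrow> Dom C (ss n i) = P (Suc n) \<and> Cod C (ss n i) = P n"
  by (simp add: codeg_W)

lemma cyc_dom_cod: "Dom C (tt n) = P n \<and> Cod C (tt n) = P n"
  by (cases n) (simp_all add: cyc_0 cyc_Suc)

lemma grouplike_grouplike_W: "W (Suc k) sg 0 \<bullet> W k sg 0 = W k Dl 0 \<bullet> W k sg 0"
proof -
  have "W k Dl 0 \<bullet> W k sg 0 = W k (W 1 sg 0 \<bullet> sg) 0"
    using comult_grouplike_W points_commute[of sg "Suc 0" sg "Suc 0"] by (simp add: comp_W)
  then show ?thesis by (simp add: W_comp W_W)
qed

lemma less_split: "a < k \<Longrightarrow> \<exists>b. k = Suc (a + b)"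
  by (metis add_Suc_right less_iff_Suc_add)

lemma coface_coface_0:
  assumes "1 \<le> n" "0 < j" "j \<le> n + 1"
  shows "dd (n + 1) j \<bullet> dd n 0 = dd (n + 1) 0 \<bullet> dd n (j - 1)"
proof -
  obtain k where n: "n = Suc k"
    using assms by (cases n) auto
  consider "j = Suc (Suc k)" | "j = 1" | a' where "j = Suc (Suc a')" "a' < k"
  proof -
    obtain j' where j: "j = Suc j'"
      using assms by (cases j) auto
    show thesis
    proof (cases j')
      case 0
      then show ?thesis using that(2) j by simp
    next
      case (Suc a')
      then show ?thesis using that(1,3) j assms n by (cases "a' = k") auto
    qed
  qed
  then show ?thesis
  proof cases
    case 1
    have "W (Suc k) sg 0 \<bullet> W 0 eta k = W 0 eta (Suc k) \<bullet> W k sg 0"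
      using W_commute[of eta 0 1 sg 0 1 0 k 0] by simp
    then show ?thesis
        using 1 n coface_last[of "Suc k"] coface_last[of k] coface_0[of k] coface_0[of "Suc k"]
        by simp
  next
    case 2
    have "W 0 Dl k \<bullet> W 0 eta k = W 0 (W 0 eta 1 \<bullet> eta) k"
      using comult_unit_W by (simp add: comp_W)
    then have "W 0 Dl k \<bullet> W 0 eta k = W 0 eta (Suc k) \<bullet> W 0 eta k"
      by (simp add: W_comp W_W)
    then show ?thesis
      using 2 n coface_mid[of 0 k] coface_0[of k] coface_0[of "Suc k"] by simp
  next
    case (3 a')
    then obtain b where k: "k = Suc (a' + b)"
      using less_split by blast
    have "W 0 eta (a' + 2 + b) \<bullet> W a' Dl b = W (1 + a') Dl b \<bullet> W 0 eta (a' + 1 + b)"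
      using W_commute[of eta 0 1 Dl 1 2 0 a' b] by simp
    then show ?thesis
      using 3 n k coface_mid[of "Suc a'" b] coface_mid[of a' b] coface_0 by simp
  qed
qed

lemma coface_last_coface_Suc:
  assumes "a \<le> k"
  shows "dd (Suc (Suc k)) (Suc (Suc k)) \<bullet> dd (Suc k) (Suc a) =
    dd (Suc (Suc k)) (Suc a) \<bullet> dd (Suc k) (Suc k)"
proof (cases "a = k")
  case True
  then show ?thesis
    using grouplike_grouplike_W coface_last coface_mid[of k 0] by simp
next
  case False
  with assms have "a < k"
    by simp
  then obtain b where k: "k = Suc (a + b)"
    using less_split by blast
  have "W (Suc (Suc (a + b))) sg 0 \<bullet> W a Dl b = W a Dl (Suc b) \<bullet> W (Suc (a + b)) sg 0"
    using W_commute[of Dl 1 2 sg 0 1 a b 0] by simp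
  then show ?thesis
    using k coface_last coface_mid[of a b] coface_mid[of a "Suc b"] by simp
qed

lemma coface_mid_coface_mid:
  "dd (Suc (Suc (Suc (a + c + b)))) (Suc (Suc (a + c))) \<bullet> dd (Suc (Suc (a + c + b))) (Suc a) =
   dd (Suc (Suc (Suc (a + c + b)))) (Suc a) \<bullet> dd (Suc (Suc (a + c + b))) (Suc (a + c))"
proof -
  have e1: "dd (Suc (Suc (Suc (a + c + b)))) (Suc (Suc (a + c))) = W (Suc (a + c)) Dl b"
    using coface_mid[of "Suc (a + c)" b] by simp
  have e2: "dd (Suc (Suc (a + c + b))) (Suc a) = W a Dl (c + b)"
    using coface_mid[of a "c + b"] by simp
  have e3: "dd (Suc (Suc (Suc (a + c + b)))) (Suc a) = W a Dl (Suc (c + b))"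
    using coface_mid[of a "Suc (c + b)"] by simp
  have e4: "dd (Suc (Suc (a + c + b))) (Suc (a + c)) = W (a + c) Dl b"
    using coface_mid[of "a + c" b] by simp
  show ?thesis
  proof (cases c)
    case 0
    have "W (Suc a) Dl b \<bullet> W a Dl b = W a (W 1 Dl 0 \<bullet> Dl) b"
      by (simp add: W_comp W_W)
    also have "\<dots> = W a (W 0 Dl 1 \<bullet> Dl) b"
      using comult_coassoc_W by simp
    also have "\<dots> = W a Dl (Suc b) \<bullet> W a Dl b"
      by (simp add: W_comp W_W)
    finally show ?thesis
      unfolding e1 e2 e3 e4 using 0 by simp
  next
    case (Suc c')
    have "W (a + 2 + c') Dl b \<bullet> W a Dl (c' + 1 + b) = W a Dl (c' + 2 + b) \<bullet> W (a + 1 + c') Dl b"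
      using W_commute'[of Dl 1 2 Dl 1 2 a c' b] by simp
    then show ?thesis
      unfolding e1 e2 e3 e4 using Suc by simp
  qed
qed

lemma coface_coface_Suc:
  assumes "1 \<le> n" "Suc a < j" "j \<le> n + 1"
  shows "dd (n + 1) j \<bullet> dd n (Suc a) = dd (n + 1) (Suc a) \<bullet> dd n (j - 1)"
proof -
  obtain k where n: "n = Suc k"
    using assms by (cases n) auto
  show ?thesis
  proof (cases "j = n + 1")
    case True
    then show ?thesis
      using assms n coface_last_coface_Suc[of a k] by simp
  next
    case False
    obtain c where j: "j = Suc (Suc (a + c))"
      using assms(2) less_iff_Suc_add by auto
    then have "a + c < k"
      using False assms n by simp
    then obtain b where "k = Suc (a + c + b)"
      using less_split by blast
    then show ?thesis
      using n j coface_mid_coface_mid[of a c b] by simp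
  qed
qed

lemma coface_coface:
  assumes "1 \<le> n" "i < j" "j \<le> n + 1"
  shows "dd (n + 1) j \<bullet> dd n i = dd (n + 1) i \<bullet> dd n (j - 1)"
  using assms coface_coface_0 coface_coface_Suc by (cases i) auto

lemma codeg_codeg:
  assumes "i \<le> j" "j \<le> n"
  shows "ss n j \<bullet> ss (n + 1) i = ss n i \<bullet> ss (n + 1) (j + 1)"
proof -
  obtain c where j: "j = i + c"
    using assms by (metis le_add_diff_inverse)
  obtain r where n: "n = j + r"
    using assms by (metis le_add_diff_inverse)
  have "W i eps (c + 0 + r) \<bullet> W (i + 1 + c) eps r = W (i + 0 + c) eps r \<bullet> W i eps (c + 1 + r)"
    using W_commute[of eps 1 0 eps 1 0 i c r] by simp
  moreover have "ss n j = W (i + c) eps r" "ss (n + 1) i = W i eps (c + 1 + r)"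
    "ss n i = W i eps (c + r)" "ss (n + 1) (j + 1) = W (i + 1 + c) eps r"
    using codeg_W j n by simp_all
  ultimately show ?thesis
    by simp
qed

lemma codeg_coface_less:
  assumes "j \<le> n" "i < j"
  shows "ss n j \<bullet> dd (n + 1) i = dd n i \<bullet> ss (n - 1) (j - 1)"
proof -
  obtain k where n: "n = Suc k"
    using assms by (cases n) auto
  obtain a where ja: "j = Suc a"
    using assms by (cases j) auto
  show ?thesis
  proof (cases i)
    case 0
    obtain b where k: "k = a + b"
      using assms n ja by (metis Suc_le_mono le_add_diff_inverse)
    have "W 0 eta (a + 0 + b) \<bullet> W (0 + 0 + a) eps b = W (0 + 1 + a) eps b \<bullet> W 0 eta (a + 1 + b)"
      using W_commute[of eta 0 1 eps 1 0 0 a b] by simp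
    moreover have "ss n j = W (Suc a) eps b" "ss (n - 1) (j - 1) = W a eps b"
      using codeg_W n k ja by simp_all
    ultimately show ?thesis
      using 0 n k coface_0 by simp
  next
    case (Suc a')
    obtain c where ja': "a = Suc (a' + c)"
      using assms Suc ja by (metis Suc_less_eq less_iff_Suc_add)
    obtain b where k: "k = Suc (a' + c) + b"
      using assms n ja ja' by (metis Suc_le_mono le_add_diff_inverse)
    have "dd (n + 1) i = W a' Dl (Suc (c + b))" "dd n i = W a' Dl (c + b)"
      using coface_mid[of a' "Suc (c + b)"] coface_mid[of a' "c + b"] n k Suc by simp_all
    moreover have "ss n j = W (Suc (Suc (a' + c))) eps b" "ss (n - 1) (j - 1) =
        W (Suc (a' + c)) eps b"
      using codeg_W n k ja ja' by simp_all
    moreover have "W (a' + 2 + c) eps b \<bullet> W a' Dl (c + 1 + b) = W a' Dl (c + 0 + b) \<bullet>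
        W (a' + 1 + c) eps b"
      using W_commute'[of Dl 1 2 eps 1 0 a' c b] by simp
    ultimately show ?thesis
      by simp
  qed
qed

lemma codeg_coface_eq:
  assumes "j \<le> n"
  shows "ss n j \<bullet> dd (n + 1) j = idn n"
proof (cases j)
  case 0
  then have "ss n j \<bullet> dd (n + 1) j = W 0 (eps \<bullet> eta) n"
    using codeg_W coface_0[of n] by (simp add: comp_W)
  then show ?thesis
    using counit_unit by simp
next
  case (Suc a)
  obtain b where n: "n = Suc (a + b)"
    using assms Suc by (metis Suc_le_D add_Suc_right le_add_diff_inverse Suc_le_mono)
  have "ss n j \<bullet> dd (n + 1) j = W a (W 1 eps 0 \<bullet> Dl) b"
    using Suc n codeg_W coface_mid[of a b] by (simp add: W_comp W_W)
  then show ?thesis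
    using counit_W n by simp
qed

lemma codeg_coface_Suc_eq:
  assumes "j \<le> n"
  shows "ss n j \<bullet> dd (n + 1) (j + 1) = idn n"
proof (cases "j = n")
  case True
  then have "ss n j \<bullet> dd (n + 1) (j + 1) = W n (eps \<bullet> sg) 0"
    using codeg_W coface_last[of n] by (simp add: comp_W)
  then show ?thesis
    using counit_grouplike by simp
next
  case False
  then obtain b where n: "n = Suc (j + b)"
    using assms by (metis add_Suc_right le_neq_implies_less less_iff_Suc_add)
  have "ss n j \<bullet> dd (n + 1) (j + 1) = W j (W 0 eps 1 \<bullet> Dl) b"
    using n codeg_W coface_mid[of j b] by (simp add: W_comp W_W)
  then show ?thesis
    using counit_W n by simp
qed

lemma codeg_coface_greater:
  assumes "i \<le> n + 1" "j + 1 < i"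
  shows "ss n j \<bullet> dd (n + 1) i = dd n (i - 1) \<bullet> ss (n - 1) j"
proof -
  obtain c where i: "i = Suc (Suc (j + c))"
    using assms less_iff_Suc_add by auto
  show ?thesis
  proof (cases "i = n + 1")
    case True
    then have n: "n = Suc (j + c)"
      using i by simp
    have "W j eps (c + 1 + 0) \<bullet> W (j + 1 + c) sg 0 = W (j + 0 + c) sg 0 \<bullet> W j eps (c + 0 + 0)"
      using W_commute[of eps 1 0 sg 0 1 j c 0] by simp
    moreover have "ss n j = W j eps (Suc c)" "ss (n - 1) j = W j eps c"
      using codeg_W n by simp_all
    ultimately show ?thesis
      using True n coface_last[of n] coface_last[of "j + c"] by simp
  next
    case False
    then have "Suc (Suc (j + c)) \<le> n"
      using assms i by simp
    then obtain b where "n = Suc (Suc (j + c)) + b"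
      by (metis le_add_diff_inverse)
    then have n: "n = Suc (Suc (j + c + b))"
      by simp
    have "dd (n + 1) i = W (Suc (j + c)) Dl b" "dd n (i - 1) = W (j + c) Dl b"
      using coface_mid[of "Suc (j + c)" b] coface_mid[of "j + c" b] n i by simp_all
    moreover have "W j eps (c + 2 + b) \<bullet> W (j + 1 + c) Dl b = W (j + 0 + c) Dl b \<bullet>
        W j eps (c + 1 + b)"
      using W_commute[of eps 1 0 Dl 1 2 j c b] by simp
    moreover have "ss n j = W j eps (Suc (Suc (c + b)))" "ss (n - 1) j = W j eps (Suc (c + b))"
      using codeg_W n by simp_all
    ultimately show ?thesis
      by simp
  qed
qed

lemma codeg_coface:
  assumes "j \<le> n" "i \<le> n + 1"
  shows "ss n j \<bullet> dd (n + 1) i =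
          (if i < j then dd n i \<bullet> ss (n - 1) (j - 1)
           else if i = j \<or> i = j + 1 then Id C (CH C H n)
           else dd n (i - 1) \<bullet> ss (n - 1) j)"
  using assms codeg_coface_less codeg_coface_eq codeg_coface_Suc_eq codeg_coface_greater
  by (auto simp: CH_eq_P)

lemma cyc_coface: assumes "1 \<le> i" "i \<le> n" shows "tt n \<bullet> dd n i = dd n (i-1) \<bullet> tt (n-1)"
proof -
  obtain k where n: "n = Suc k" using assms by (cases n) auto
  show ?thesis
  proof (cases "i = 1")
    case True
    show ?thesis
    proof (cases k)
      case 0
      then show ?thesis
        using True n tau_0_grouplike coface_last[of 0] coface_0[of 0] cyc_0 cyc_Suc by simp
    next
      case (Suc j)
      then show ?thesis
        using True n tau_comult_first[of j] coface_mid[of 0 j] coface_0 cyc_Suc by simp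
    qed
  next
    case False
    then have i2: "2 \<le> i" using assms by simp
    show ?thesis
    proof (cases "i = n")
      case True
      obtain j where k: "k = Suc j" using i2 True n by (cases k) auto
      then show ?thesis
        using True n tau_grouplike_last[of j] coface_last coface_mid[of j 0] cyc_Suc by simp
    next
      case False
      obtain a where i0: "i = (i - 2) + 2" and "a = i - 2" using i2 by simp
      then have i: "i = Suc (Suc a)" by simp
      then have "Suc (Suc a) < n" using assms False by simp
      then obtain b where n20: "n = Suc (Suc (Suc a) + b)" using less_iff_Suc_add by auto
      then have n2: "n = Suc (Suc (Suc (a + b)))" by simp
      have e1: "dd n i = W (Suc a) Dl b" using coface_mid[of "Suc a" b] n2 i by simp
      have e2: "dd n (i-1) = W a Dl (Suc b)" using coface_mid[of a "Suc b"] n2 i by simp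
      show ?thesis unfolding e1 e2 using n2 tau_comult_mid[of a b] cyc_Suc by simp
    qed
  qed
qed

lemma cyc_coface_0: "1 \<le> n \<Longrightarrow> tt n \<bullet> dd n 0 = dd n n"
  by (cases n) (simp_all add: cyc_Suc coface_0 coface_last tau_unit_first)

lemma cyc_codeg: assumes "1 \<le> i" "i \<le> n" shows "tt n \<bullet> ss n i = ss n (i-1) \<bullet> tt (n + 1)"
proof -
  obtain a where i: "i = Suc a" using assms by (cases i) auto
  obtain b where n: "n = Suc (a + b)"
    using assms i by (metis Suc_le_D add_Suc le_add_diff_inverse Suc_le_mono)
  have "ss n i = W (Suc a) eps b" "ss n (i-1) = W a eps (Suc b)" using codeg_W n i by simp_all
  then show ?thesis using n tau_counit[of a b] cyc_Suc by simp
qed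

lemma cyc_cpow: "cpow C (CH C H n) (tt n) (n + 1) = Id C (CH C H n)"
proof (cases n)
  case 0 then show ?thesis by (simp add: CH_eq_P cyc_0)
next
  case (Suc k)
  have "cpow C (P (Suc k)) (tau k) (Suc (Suc k)) = idn (Suc k)" by (rule tau_cpow)
  then show ?thesis using Suc by (simp add: CH_eq_P cyc_Suc del: cpow.simps)
qed

lemma cyc_cpow_codeg:
  assumes "j \<le> n"
  shows "cpow C (P n) (tt n) j \<bullet> ss n n = ss n (n - j) \<bullet> cpow C (P (Suc n)) (tt (Suc n)) j"
  using assms
proof (induction j)
  case 0
  show ?case using codeg_dom_cod[of n n] by simp
next
  case (Suc j)
  have t: "Dom C (tt n) = P n" "Cod C (tt n) = P n" "Dom C (tt (Suc n)) =
      P (Suc n)" "Cod C (tt (Suc n)) = P (Suc n)"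
    using cyc_dom_cod by simp_all
  have s: "Dom C (ss n i) = P (Suc n) \<and> Cod C (ss n i) = P n" if "i \<le> n" for i
    using codeg_dom_cod that by simp
  have c: "tt n \<bullet> ss n (n - j) = ss n (n - Suc j) \<bullet> tt (Suc n)"
    using cyc_codeg[of "n - j" n] Suc.prems by simp
  have "cpow C (P n) (tt n) (Suc j) \<bullet> ss n n = tt n \<bullet> (cpow C (P n) (tt n) j \<bullet> ss n n)"
    using t s[of n] by simp
  also have "\<dots> = (tt n \<bullet> ss n (n - j)) \<bullet> cpow C (P (Suc n)) (tt (Suc n)) j"
    using Suc t s[of "n - j"] by simp
  also have "\<dots> = ss n (n - Suc j) \<bullet> cpow C (P (Suc n)) (tt (Suc n)) (Suc j)"
    unfolding c using t s[of "n - Suc j"] by simp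
  finally show ?case .
qed

text \<open>
  Pad \<open>\<tau>\<^sub>n \<sigma>\<^sub>0\<close> on the right with \<open>\<tau>\<^sub>n\<^sub>+\<^sub>1\<^sup>n\<^sup>+\<^sup>2 = 1\<close> and move \<open>\<tau>\<^sub>n\<^sub>+\<^sub>1\<^sup>n\<close> to the
  left past \<open>\<sigma>\<^sub>0\<close>; this produces \<open>\<tau>\<^sub>n\<^sup>n\<^sup>+\<^sup>1 \<sigma>\<^sub>n = \<sigma>\<^sub>n\<close>.
\<close>

lemma cyc_codeg_0: "tt n \<bullet> ss n 0 = ss n n \<bullet> (tt (n + 1) \<bullet> tt (n + 1))"
proof -
  let ?f = "tt n" and ?g = "tt (Suc n)"
  have t: "Dom C ?f = P n" "Cod C ?f = P n" "Dom C ?g = P (Suc n)" "Cod C ?g = P (Suc n)"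
    using cyc_dom_cod by simp_all
  have s: "Dom C (ss n i) = P (Suc n) \<and> Cod C (ss n i) = P n" if "i \<le> n" for i
    using codeg_dom_cod that by simp
  have g_id: "cpow C (P (Suc n)) ?g (Suc (Suc n)) = idn (Suc n)"
    using cyc_cpow[of "Suc n"] CH_eq_P by simp
  have f_id: "cpow C (P n) ?f (Suc n) = idn n"
    using cyc_cpow[of n] CH_eq_P by simp
  have g_split: "cpow C (P (Suc n)) ?g (Suc (Suc n)) = cpow C (P (Suc n)) ?g n \<bullet> (?g \<bullet> ?g)"
    using cpow_add[of ?g "P (Suc n)" n 2] t by simp
  have "?f \<bullet> ss n 0 = (?f \<bullet> ss n 0) \<bullet> cpow C (P (Suc n)) ?g (Suc (Suc n))"
    unfolding g_id using t s[of 0] by simp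
  also have "\<dots> = ?f \<bullet> ((ss n 0 \<bullet> cpow C (P (Suc n)) ?g n) \<bullet> (?g \<bullet> ?g))"
    unfolding g_split using t s[of 0] by simp
  also have "\<dots> = ?f \<bullet> ((cpow C (P n) ?f n \<bullet> ss n n) \<bullet> (?g \<bullet> ?g))"
    using cyc_cpow_codeg[of n n] by simp
  also have "\<dots> = cpow C (P n) ?f (Suc n) \<bullet> ss n n \<bullet> (?g \<bullet> ?g)"
    using t s[of n] by simp
  also have "\<dots> = ss n n \<bullet> (?g \<bullet> ?g)"
    unfolding f_id using t s[of n] by simp
  finally show ?thesis
    by simp
qed

lemma CH_cocyclic:
  "cocyclic_object C (CH C H) (CH_coface C H eta Dl sg) (CH_codeg C H eps)
     (CH_cyc C H m Dl S dl sg)"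
  unfolding cocyclic_object_def CH_eq_P
  using coface_dom_cod codeg_dom_cod cyc_dom_cod coface_coface codeg_codeg
    codeg_coface[unfolded CH_eq_P] cyc_coface cyc_coface_0 cyc_codeg cyc_codeg_0
    cyc_cpow[unfolded CH_eq_P]
  by auto

end

theorem theorem2p2:
  fixes C :: "('o, 'm) bmcat"
    and H :: 'o
    and m eta Dl eps S dl sg :: 'm
  assumes "strict_braided_monoidal_cat C"
    and "hopf_algebra C H m eta Dl eps S"
    and "Comp C (Braid C H H) (Braid C H H) = Id C (TObj C H H)"
    and "bmpi C H m eta Dl eps S dl sg"
  shows "cocyclic_object C (CH C H) (CH_coface C H eta Dl sg) (CH_codeg C H eps)
           (CH_cyc C H m Dl S dl sg)"
proof -
  have "braided_algebra_powers C H m eta"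
    using assms(1,2) unfolding hopf_algebra_def
    by (intro braided_algebra_powers.intro braided_algebra_powers_axioms.intro)
      (simp_all add: braided_powers_def)
  then interpret braided_hopf_mpi C H m eta Dl eps S dl sg
    using assms(2-4) by (intro braided_hopf_mpi.intro braided_hopf_mpi_axioms.intro)
  show ?thesis
    by (rule CH_cocyclic)
qed

end
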